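(* For $n\ge 0$ and every $l$ with $\lfloor\frac{n+1}{2}\rfloor\le l\le\binom n2$, there is a one-to-one correspondence between $\mathscr F_n(l)$ and $\mathscr D(n,l)$; in particular $f(n,l)=d(n,l)$.
   Context: An element of a lattice is reducible if it is $y\vee z$ or $y\wedge z$ for some $y,z$ both distinct from it; an element of a poset is doubly irreducible if it has at most one upper and at most one lower cover. The nullity $\eta(P)$ of a finite poset is $|E|-|V|+c$ for its cover graph (edges = coverings), $c$ the number of components. Adjunct operation: for disjoint lattices $L_1,L_2$ and $a<b$ in $L_1$ with $b$ not covering $a$, $L_1\,]_a^b\,L_2$ is $L_1\cup L_2$ with $x\le y$ iff $x\le y$ within $L_1$ or within $L_2$, or $x\in L_1,y\in L_2,x\le a$, or $x\in L_2,y\in L_1,b\le y$. An RC-lattice is a finite lattice whose reducible elements are pairwise comparable; it is an adjunct of chains $C_0\,]_{a_1}^{b_1}C_1\cdots]_{a_r}^{b_r}C_r$ ($C_0$ maximal chain), unique up to order of adjunct pairs. A basic block is a poset that has one element, or has no doubly irreducible elements, or from which removal of a doubly irreducible element reduces nullity by one. A fundamental basic block is an RC-lattice that is a basic block whose adjunct representation has pairwise distinct adjunct pairs. $\mathscr F_n(l)$ is the set of isomorphism classes of fundamental basic blocks with exactly $n$ reducible elements and nullity $l$, and $f(n,l)=|\mathscr F_n(l)|$ (with $f(0,0)=1$). $\mathscr D(n,l)$ is the set of labeled simple graphs on the vertex set $\{1,\dots,n\}$ with exactly $l$ edges and no isolated vertices (two labeled graphs are the same iff they have the same edge set), and $d(n,l)=|\mathscr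 D(n,l)|$ (with $d(0,0)=1$). *)

theory Defs
  imports Main
begin

type_synonym poset = "nat set \<times> (nat \<times> nat) set"

definition carrier :: "poset \<Rightarrow> nat set" where "carrier P = fst P"
definition ord :: "poset \<Rightarrow> (nat \<times> nat) set" where "ord P = snd P"

definition finite_poset :: "poset \<Rightarrow> bool" where
  "finite_poset P \<longleftrightarrow> finite (carrier P) \<and> ord P \<subseteq> carrier P \<times> carrier P
     \<and> (\<forall>x\<in>carrier P. (x,x) \<in> ord P)
     \<and> (\<forall>x y. (x,y) \<in> ord P \<and> (y,x) \<in> ord P \<longrightarrow> x = y)
     \<and> (\<forall>x y z. (x,y) \<in> ord P \<and> (y,z) \<in> ord P \<longrightarrow> (x,z) \<in> ord P)"

definition is_lub :: "poset \<Rightarrow> nat \<Rightarrow> nat \<Rightarrow> nat \<Rightarrow> bool" where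
  "is_lub P y z x \<longleftrightarrow> x \<in> carrier P \<and> (y,x) \<in> ord P \<and> (z,x) \<in> ord P
     \<and> (\<forall>w\<in>carrier P. (y,w) \<in> ord P \<and> (z,w) \<in> ord P \<longrightarrow> (x,w) \<in> ord P)"

definition is_glb :: "poset \<Rightarrow> nat \<Rightarrow> nat \<Rightarrow> nat \<Rightarrow> bool" where
  "is_glb P y z x \<longleftrightarrow> x \<in> carrier P \<and> (x,y) \<in> ord P \<and> (x,z) \<in> ord P
     \<and> (\<forall>w\<in>carrier P. (w,y) \<in> ord P \<and> (w,z) \<in> ord P \<longrightarrow> (w,x) \<in> ord P)"

definition finite_lattice :: "poset \<Rightarrow> bool" where
  "finite_lattice P \<longleftrightarrow> finite_poset P \<and> carrier P \<noteq> {}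
     \<and> (\<forall>y\<in>carrier P. \<forall>z\<in>carrier P. (\<exists>x. is_lub P y z x) \<and> (\<exists>x. is_glb P y z x))"

definition is_chain :: "poset \<Rightarrow> bool" where
  "is_chain P \<longleftrightarrow> finite_lattice P
     \<and> (\<forall>x\<in>carrier P. \<forall>y\<in>carrier P. (x,y) \<in> ord P \<or> (y,x) \<in> ord P)"

definition comparable :: "poset \<Rightarrow> nat \<Rightarrow> nat \<Rightarrow> bool" where
  "comparable P x y \<longleftrightarrow> (x,y) \<in> ord P \<or> (y,x) \<in> ord P"

definition reducible :: "poset \<Rightarrow> nat \<Rightarrow> bool" where
  "reducible P x \<longleftrightarrow> x \<in> carrier P \<and> (\<exists>y\<in>carrier P. \<exists>z\<in>carrier P. y \<noteq> x \<and> z \<noteq> x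
      \<and> (is_lub P y z x \<or> is_glb P y z x))"

definition num_reducible :: "poset \<Rightarrow> nat" where
  "num_reducible P = card {x\<in>carrier P. reducible P x}"

definition RC_lattice :: "poset \<Rightarrow> bool" where
  "RC_lattice P \<longleftrightarrow> finite_lattice P
     \<and> (\<forall>x y. reducible P x \<and> reducible P y \<longrightarrow> comparable P x y)"

definition covers :: "poset \<Rightarrow> nat \<Rightarrow> nat \<Rightarrow> bool" where
  "covers P x y \<longleftrightarrow> (x,y) \<in> ord P \<and> x \<noteq> y
     \<and> \<not> (\<exists>z. (x,z) \<in> ord P \<and> (z,y) \<in> ord P \<and> z \<noteq> x \<and> z \<noteq> y)"

definition doubly_irreducible :: "poset \<Rightarrow> nat \<Rightarrow> bool" where
  "doubly_irreducible P x \<longleftrightarrow> x \<in> carrier P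
     \<and> card {y. covers P x y} \<le> 1 \<and> card {y. covers P y x} \<le> 1"

definition cover_edges :: "poset \<Rightarrow> (nat \<times> nat) set" where
  "cover_edges P = {(x,y). covers P x y}"

definition cover_conn :: "poset \<Rightarrow> (nat \<times> nat) set" where
  "cover_conn P = Id_on (carrier P) \<union> (cover_edges P \<union> (cover_edges P)\<inverse>)\<^sup>+"

definition num_components :: "poset \<Rightarrow> nat" where
  "num_components P = card (carrier P // cover_conn P)"

definition nullity :: "poset \<Rightarrow> int" where
  "nullity P = int (card (cover_edges P)) - int (card (carrier P)) + int (num_components P)"

definition remove_elem :: "poset \<Rightarrow> nat \<Rightarrow> poset" where
  "remove_elem P x = (carrier P - {x}, ord P \<inter> ((carrier P - {x}) \<times> (carrier P - {x})))"

definition basic_block :: "poset \<Rightarrow> bool" where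
  "basic_block P \<longleftrightarrow> card (carrier P) = 1
     \<or> (\<forall>x. \<not> doubly_irreducible P x)
     \<or> (\<forall>x. doubly_irreducible P x \<longrightarrow> nullity (remove_elem P x) = nullity P - 1)"

definition adjunct :: "poset \<Rightarrow> nat \<Rightarrow> nat \<Rightarrow> poset \<Rightarrow> poset" where
  "adjunct L1 a b L2 = (carrier L1 \<union> carrier L2,
      ord L1 \<union> ord L2
      \<union> {(x,y). x \<in> carrier L1 \<and> y \<in> carrier L2 \<and> (x,a) \<in> ord L1}
      \<union> {(x,y). x \<in> carrier L2 \<and> y \<in> carrier L1 \<and> (b,y) \<in> ord L1})"

fun adjunct_list :: "poset \<Rightarrow> (nat \<times> nat \<times> poset) list \<Rightarrow> poset" where
  "adjunct_list L [] = L"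
| "adjunct_list L ((a,b,C) # xs) = adjunct_list (adjunct L a b C) xs"

fun valid_adjunct_list :: "poset \<Rightarrow> (nat \<times> nat \<times> poset) list \<Rightarrow> bool" where
  "valid_adjunct_list L [] = True"
| "valid_adjunct_list L ((a,b,C) # xs) \<longleftrightarrow>
     finite_lattice L \<and> is_chain C \<and> carrier L \<inter> carrier C = {}
     \<and> a \<in> carrier L \<and> b \<in> carrier L \<and> (a,b) \<in> ord L \<and> a \<noteq> b \<and> \<not> covers L a b
     \<and> valid_adjunct_list (adjunct L a b C) xs"

definition maximal_chain :: "poset \<Rightarrow> nat set \<Rightarrow> bool" where
  "maximal_chain P S \<longleftrightarrow> S \<subseteq> carrier P \<and> (\<forall>x\<in>S. \<forall>y\<in>S. comparable P x y)
     \<and> (\<forall>T. S \<subset> T \<and> T \<subseteq> carrier P \<longrightarrow> \<not> (\<forall>x\<in>T. \<forall>y\<in>T. comparable P x y))"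

definition adjunct_representation :: "poset \<Rightarrow> poset \<Rightarrow> (nat \<times> nat \<times> poset) list \<Rightarrow> bool" where
  "adjunct_representation L C0 xs \<longleftrightarrow> is_chain C0 \<and> valid_adjunct_list C0 xs
     \<and> adjunct_list C0 xs = L \<and> maximal_chain L (carrier C0)"

definition fundamental_basic_block :: "poset \<Rightarrow> bool" where
  "fundamental_basic_block L \<longleftrightarrow> RC_lattice L \<and> basic_block L
     \<and> (\<exists>C0 xs. adjunct_representation L C0 xs \<and> distinct (map (\<lambda>(a,b,C). (a,b)) xs))"

definition poset_iso :: "poset \<Rightarrow> poset \<Rightarrow> bool" where
  "poset_iso P Q \<longleftrightarrow> (\<exists>h. bij_betw h (carrier P) (carrier Q)
     \<and> (\<forall>x\<in>carrier P. \<forall>y\<in>carrier P. (x,y) \<in> ord P \<longleftrightarrow> (h x, h y) \<in> ord Q))"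

definition FBB :: "nat \<Rightarrow> int \<Rightarrow> poset set" where
  "FBB n l = {L. fundamental_basic_block L \<and> num_reducible L = n \<and> nullity L = l}"

definition F_classes :: "nat \<Rightarrow> int \<Rightarrow> poset set set" where
  "F_classes n l = (\<lambda>L. {M \<in> FBB n l. poset_iso L M}) ` FBB n l"

definition f :: "nat \<Rightarrow> int \<Rightarrow> nat" where
  "f n l = card (F_classes n l)"

definition D_graphs :: "nat \<Rightarrow> nat \<Rightarrow> nat set set set" where
  "D_graphs n l = {E. E \<subseteq> {{i,j} | i j. 1 \<le> i \<and> i < j \<and> j \<le> n} \<and> card E = l
      \<and> (\<forall>v\<in>{1..n}. \<exists>e\<in>E. v \<in> e)}"

definition d :: "nat \<Rightarrow> nat \<Rightarrow> nat" where
  "d n l = card (D_graphs n l)"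

end

theory Submission
  imports Defs "HOL-Library.Nat_Bijection"
begin

text \<open>In a fundamental basic block the reducible elements form a chain \<open>r\<^sub>1 < \<dots> < r\<^sub>n\<close>,
  every other element \<open>x\<close> is doubly irreducible, and its lower and upper covers are reducible,
  say \<open>r\<^sub>i\<close> and \<open>r\<^sub>j\<close>; label \<open>x\<close> by \<open>(i, j)\<close> and \<open>r\<^sub>i\<close> by \<open>(i, i)\<close>.  Then \<open>x < y\<close> iff the
  label of \<open>x\<close> ends where that of \<open>y\<close> starts or earlier, so the lattice is determined by how
  often each label occurs.  Every adjunct pair of the representation forces an element with
  the corresponding label, and the pairs are distinct, so the nullity (the number of pairs) is
  at most the number of labels.  Counting cover edges, on the other hand, gives nullity =
  (number of irreducibles) - (number of labels \<open>(i, i + 1)\<close>), while every label occurs at least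
  once and \<open>(i, i + 1)\<close> at least twice.  Hence each label occurs exactly once (twice for
  \<open>(i, i + 1)\<close>), and the labels form a graph on \<open>{1..n}\<close> with \<open>l\<close> edges; a vertex outside
  every edge would be a doubly irreducible reducible element.  Conversely each such graph is
  realised by adjoining, to the chain \<open>1 < \<dots> < n\<close> (with an extra element between \<open>i\<close> and
  \<open>i + 1\<close> for each edge \<open>{i, i + 1}\<close>), a one-element chain between \<open>i\<close> and \<open>j\<close> for each edge
  \<open>{i, j}\<close>.\<close>

lemma carrier_pair[simp]: "carrier (A,R) = A" by (simp add: carrier_def)
lemma ord_pair[simp]: "ord (A,R) = R" by (simp add: ord_def)

section \<open>Finite posets and lattices\<close>

definition strictly_between :: "poset \<Rightarrow> nat \<Rightarrow> nat \<Rightarrow> nat \<Rightarrow> bool" where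
  "strictly_between P a b z \<longleftrightarrow> (a,z) \<in> ord P \<and> (z,b) \<in> ord P \<and> z \<noteq> a \<and> z \<noteq> b"

lemma covers_iff_between:
  "covers P x y \<longleftrightarrow> (x,y) \<in> ord P \<and> x \<noteq> y \<and> (\<forall>z. \<not> strictly_between P x y z)"
  by (auto simp: covers_def strictly_between_def)

locale fin_poset =
  fixes P :: poset
  assumes fp: "finite_poset P"
begin

abbreviation V :: "nat set" where "V \<equiv> carrier P"
abbreviation leq :: "nat \<Rightarrow> nat \<Rightarrow> bool" where "leq x y \<equiv> (x,y) \<in> ord P"

lemma fin: "finite V" using fp by (simp add: finite_poset_def)
lemma ord_sub: "ord P \<subseteq> V \<times> V" using fp by (simp add: finite_poset_def)
lemma ordD: "leq x y \<Longrightarrow> x \<in> V \<and> y \<in> V" using ord_sub by blast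
lemma refl: "x \<in> V \<Longrightarrow> leq x x" using fp by (simp add: finite_poset_def)
lemma antisym: "leq x y \<Longrightarrow> leq y x \<Longrightarrow> x = y"
  using fp unfolding finite_poset_def by blast
lemma trans: "leq x y \<Longrightarrow> leq y z \<Longrightarrow> leq x z"
  using fp unfolding finite_poset_def by blast

lemma coversD: "covers P x y \<Longrightarrow> leq x y \<and> x \<noteq> y \<and> x \<in> V \<and> y \<in> V"
  using ordD by (auto simp: covers_def)

lemma finite_upper_covers: "finite {y. covers P x y}"
  by (rule finite_subset[OF _ fin]) (auto dest: coversD)
lemma finite_lower_covers: "finite {y. covers P y x}"
  by (rule finite_subset[OF _ fin]) (auto dest: coversD)
lemma finite_cover_edges: "finite (cover_edges P)"
  by (rule finite_subset[of _ "V \<times> V"]) (auto simp: cover_edges_def fin dest: coversD)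

lemma finite_has_maximal: "finite S \<Longrightarrow> S \<noteq> {} \<Longrightarrow> S \<subseteq> V \<Longrightarrow> \<exists>m\<in>S. \<forall>s\<in>S. leq m s \<longrightarrow> s = m"
proof (induction S rule: finite_ne_induct)
  case (singleton x) then show ?case by auto
next
  case (insert x S)
  then obtain m where m: "m \<in> S" "\<forall>s\<in>S. leq m s \<longrightarrow> s = m" by auto
  show ?case
  proof (cases "leq m x")
    case True
    have "\<forall>s\<in>insert x S. leq x s \<longrightarrow> s = x"
    proof (intro ballI impI)
      fix s assume s: "s \<in> insert x S" "leq x s"
      show "s = x"
      proof (cases "s = x")
        case False
        then have "s \<in> S" using s by auto
        moreover have "leq m s" using True s trans by blast
        ultimately have "s = m" using m by auto
        then show ?thesis using True s antisym by blast
      qed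
    qed
    then show ?thesis by auto
  next
    case False
    then show ?thesis using m by auto
  qed
qed

lemma finite_has_minimal: "finite S \<Longrightarrow> S \<noteq> {} \<Longrightarrow> S \<subseteq> V \<Longrightarrow> \<exists>m\<in>S. \<forall>s\<in>S. leq s m \<longrightarrow> s = m"
proof (induction S rule: finite_ne_induct)
  case (singleton x) then show ?case by auto
next
  case (insert x S)
  then obtain m where m: "m \<in> S" "\<forall>s\<in>S. leq s m \<longrightarrow> s = m" by auto
  show ?case
  proof (cases "leq x m")
    case True
    have "\<forall>s\<in>insert x S. leq s x \<longrightarrow> s = x"
    proof (intro ballI impI)
      fix s assume s: "s \<in> insert x S" "leq s x"
      show "s = x"
      proof (cases "s = x")
        case False
        then have "s \<in> S" using s by auto
        moreover have "leq s m" using True s trans by blast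
        ultimately have "s = m" using m by auto
        then show ?thesis using True s antisym by blast
      qed
    qed
    then show ?thesis by auto
  next
    case False
    then show ?thesis using m by auto
  qed
qed

lemma exists_lower_cover:
  assumes "leq y x" "y \<noteq> x"
  shows "\<exists>z. covers P z x \<and> leq y z"
proof -
  let ?S = "{w. leq y w \<and> leq w x \<and> w \<noteq> x}"
  have "?S \<subseteq> V" using ordD by auto
  moreover have "finite ?S" using fin by (rule finite_subset[OF calculation])
  moreover have "y \<in> ?S" using assms by (auto intro: refl dest: ordD)
  ultimately obtain m where m: "m \<in> ?S" "\<forall>s\<in>?S. leq m s \<longrightarrow> s = m"
    using finite_has_maximal[of ?S] by blast
  have "covers P m x"
    unfolding covers_def using m trans by blast
  then show ?thesis using m by auto
qed

lemma exists_upper_cover: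
  assumes "leq x y" "y \<noteq> x"
  shows "\<exists>z. covers P x z \<and> leq z y"
proof -
  let ?S = "{w. leq w y \<and> leq x w \<and> w \<noteq> x}"
  have "?S \<subseteq> V" using ordD by auto
  moreover have "finite ?S" using fin by (rule finite_subset[OF calculation])
  moreover have "y \<in> ?S" using assms by (auto intro: refl dest: ordD)
  ultimately obtain m where m: "m \<in> ?S" "\<forall>s\<in>?S. leq s m \<longrightarrow> s = m"
    using finite_has_minimal[of ?S] by blast
  have "covers P x m"
    unfolding covers_def using m trans by blast
  then show ?thesis using m by auto
qed

lemma bot_reaches_all:
  assumes b: "b \<in> V" "\<forall>x\<in>V. leq b x"
  shows "x \<in> V \<Longrightarrow> (b,x) \<in> (cover_edges P)\<^sup>*"
proof (induction "card {w. leq b w \<and> leq w x}" arbitrary: x rule: less_induct)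
  case less
  show ?case
  proof (cases "x = b")
    case True then show ?thesis by simp
  next
    case False
    have "leq b x" using b less by auto
    then obtain z where z: "covers P z x" "leq b z" using exists_lower_cover False by metis
    have sub: "{w. leq b w \<and> leq w z} \<subset> {w. leq b w \<and> leq w x}"
    proof
      show "{w. leq b w \<and> leq w z} \<subseteq> {w. leq b w \<and> leq w x}"
        using z coversD trans by blast
      have "x \<notin> {w. leq b w \<and> leq w z}" using z coversD antisym by blast
      moreover have "x \<in> {w. leq b w \<and> leq w x}" using \<open>leq b x\<close> refl less by auto
      ultimately show "{w. leq b w \<and> leq w z} \<noteq> {w. leq b w \<and> leq w x}" by blast
    qed
    have "finite {w. leq b w \<and> leq w x}"
      by (rule finite_subset[OF _ fin]) (auto dest: ordD)
    then have "card {w. leq b w \<and> leq w z} < card {w. leq b w \<and> leq w x}"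
      using sub psubset_card_mono by blast
    moreover have "z \<in> V" using z coversD by blast
    ultimately have "(b,z) \<in> (cover_edges P)\<^sup>*" using less by blast
    moreover have "(z,x) \<in> cover_edges P" using z by (simp add: cover_edges_def)
    ultimately show ?thesis by simp
  qed
qed

lemma num_components_eq_1:
  assumes b: "b \<in> V" "\<forall>x\<in>V. leq b x"
  shows "num_components P = 1"
proof -
  let ?E = "cover_edges P"
  let ?R = "cover_conn P"
  have Esub: "?E \<subseteq> V \<times> V" by (auto simp: cover_edges_def dest: coversD)
  then have "?E \<union> ?E\<inverse> \<subseteq> V \<times> V" by auto
  then have "(?E \<union> ?E\<inverse>)\<^sup>+ \<subseteq> V \<times> V" by (rule trancl_subset_Sigma)
  then have Rsub: "?R \<subseteq> V \<times> V" by (auto simp: cover_conn_def)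
  have all: "(x,y) \<in> ?R" if "x \<in> V" "y \<in> V" for x y
  proof -
    have "(b,x) \<in> ?E\<^sup>*" "(b,y) \<in> ?E\<^sup>*" using bot_reaches_all[OF b] that by auto
    then have "(x,b) \<in> (?E\<inverse>)\<^sup>*" "(b,y) \<in> ?E\<^sup>*" by (auto simp: rtrancl_converse)
    moreover have "(?E\<inverse>)\<^sup>* \<subseteq> (?E \<union> ?E\<inverse>)\<^sup>*" "?E\<^sup>* \<subseteq> (?E \<union> ?E\<inverse>)\<^sup>*"
      by (rule rtrancl_mono, blast)+
    ultimately have "(x,y) \<in> (?E \<union> ?E\<inverse>)\<^sup>*" by (meson rtrancl_trans subsetD)
    then show ?thesis using that unfolding cover_conn_def
      by (metis IdI Id_on_iff UnI1 UnI2 rtranclD)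
  qed
  have "\<And>x. x \<in> V \<Longrightarrow> ?R `` {x} = V" using all Rsub by auto
  then have "V // ?R = {V}" using b unfolding quotient_def by auto
  then show ?thesis by (simp add: num_components_def)
qed

lemma nullity_with_bot:
  assumes b: "b \<in> V" "\<forall>x\<in>V. leq b x"
  shows "nullity P = int (card (cover_edges P)) - int (card V) + 1"
  using num_components_eq_1[OF b] by (simp add: nullity_def)

end

lemma finite_poset_remove: assumes "finite_poset P" shows "finite_poset (remove_elem P x)"
proof -
  interpret fin_poset P by (rule fin_poset.intro, rule assms)
  show ?thesis unfolding finite_poset_def
    by (auto simp: remove_elem_def fin intro: refl antisym trans dest: ordD)
qed

lemma covers_remove_elem: "covers (remove_elem P x) u v \<longleftrightarrow> u \<noteq> x \<and> v \<noteq> x \<and> u \<in> carrier P \<and> v \<in> carrier P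
   \<and> (u,v) \<in> ord P \<and> u \<noteq> v \<and> \<not>(\<exists>z. z \<noteq> x \<and> z \<in> carrier P \<and> (u,z) \<in> ord P \<and> (z,v) \<in> ord P \<and> z \<noteq> u \<and> z \<noteq> v)"
  by (auto simp: covers_def remove_elem_def)

locale fin_lattice = fin_poset +
  assumes lat: "finite_lattice P"
begin

lemma nonempty: "V \<noteq> {}" using lat by (simp add: finite_lattice_def)
lemma lub_ex: "y \<in> V \<Longrightarrow> z \<in> V \<Longrightarrow> \<exists>x. is_lub P y z x"
  using lat by (simp add: finite_lattice_def)
lemma glb_ex: "y \<in> V \<Longrightarrow> z \<in> V \<Longrightarrow> \<exists>x. is_glb P y z x"
  using lat by (simp add: finite_lattice_def)

lemma bot_ex: "\<exists>b\<in>V. \<forall>x\<in>V. leq b x"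
proof -
  obtain m where m: "m \<in> V" "\<forall>s\<in>V. leq s m \<longrightarrow> s = m"
    using finite_has_minimal[OF fin nonempty] by blast
  have "leq m x" if xC: "x \<in> V" for x
  proof -
    obtain g where g: "is_glb P m x g" using glb_ex m xC by blast
    then have "g \<in> V" "leq g m" "leq g x" by (auto simp: is_glb_def)
    then have "g = m" using m by blast
    then show ?thesis using \<open>leq g x\<close> by simp
  qed
  then show ?thesis using m by blast
qed

lemma top_ex: "\<exists>b\<in>V. \<forall>x\<in>V. leq x b"
proof -
  obtain m where m: "m \<in> V" "\<forall>s\<in>V. leq m s \<longrightarrow> s = m"
    using finite_has_maximal[OF fin nonempty] by blast
  have "leq x m" if xC: "x \<in> V" for x
  proof -
    obtain g where g: "is_lub P m x g" using lub_ex m xC by blast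
    then have "g \<in> V" "leq m g" "leq x g" by (auto simp: is_lub_def)
    then have "g = m" using m by blast
    then show ?thesis using \<open>leq x g\<close> by simp
  qed
  then show ?thesis using m by blast
qed

lemma nullity_eq: "nullity P = int (card (cover_edges P)) - int (card V) + 1"
  using bot_ex nullity_with_bot by blast

lemma di_lower_cover_unique: "doubly_irreducible P x \<Longrightarrow> covers P a x \<Longrightarrow> covers P b x \<Longrightarrow> a = b"
  using card_le_Suc0_iff_eq[OF finite_lower_covers, of x] by (auto simp: doubly_irreducible_def)
lemma di_upper_cover_unique: "doubly_irreducible P x \<Longrightarrow> covers P x a \<Longrightarrow> covers P x b \<Longrightarrow> a = b"
  using card_le_Suc0_iff_eq[OF finite_upper_covers, of x] by (auto simp: doubly_irreducible_def)

lemma reducible_not_di: assumes "reducible P x" shows "\<not> doubly_irreducible P x"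
proof
  assume di: "doubly_irreducible P x"
  from assms obtain y z where yz: "y \<in> V" "z \<in> V" "y \<noteq> x" "z \<noteq> x" "is_lub P y z x \<or> is_glb P y z x"
    by (auto simp: reducible_def)
  show False
  proof (cases "is_lub P y z x")
    case True
    then have "leq y x" "leq z x" "x \<in> V" by (auto simp: is_lub_def)
    obtain p where p: "covers P p x" "leq y p" using exists_lower_cover \<open>leq y x\<close> yz by blast
    obtain p' where p': "covers P p' x" "leq z p'" using exists_lower_cover \<open>leq z x\<close> yz by blast
    have "p = p'" using di_lower_cover_unique[OF di p(1) p'(1)] .
    then have "leq x p" using True p p' coversD unfolding is_lub_def by blast
    then show False using p coversD antisym by blast
  next
    case False
    then have g: "is_glb P y z x" using yz by blast
    then have "leq x y" "leq x z" "x \<in> V" by (auto simp: is_glb_def)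
    obtain p where p: "covers P x p" "leq p y" using exists_upper_cover \<open>leq x y\<close> yz by blast
    obtain p' where p': "covers P x p'" "leq p' z" using exists_upper_cover \<open>leq x z\<close> yz by blast
    have "p = p'" using di_upper_cover_unique[OF di p(1) p'(1)] .
    then have "leq p x" using g p p' coversD unfolding is_glb_def by blast
    then show False using p coversD antisym by blast
  qed
qed

lemma irreducible_di:
  assumes x: "x \<in> V"
    and nr: "\<not> reducible P x"
  shows "doubly_irreducible P x"
proof -
  have up: "u = v" if u: "covers P x u" and v: "covers P x v" for u v
  proof (rule ccontr)
    assume uv: "u \<noteq> v"
    have uC: "u \<in> V" "v \<in> V" "leq x u" "leq x v" "u \<noteq> x" "v \<noteq> x"
      using u v coversD by auto
    obtain g where g: "is_glb P u v g" using glb_ex uC by blast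
    then have g1: "g \<in> V" "leq g u" "leq g v" "leq x g" using uC x by (auto simp: is_glb_def)
    have "g = x"
    proof (rule ccontr)
      assume "g \<noteq> x"
      then have "g = u" using u g1 unfolding covers_def by blast
      moreover have "g = v" using v g1 \<open>g \<noteq> x\<close> unfolding covers_def by blast
      ultimately show False using uv by simp
    qed
    then have "reducible P x" unfolding reducible_def using g uC x by blast
    then show False using nr by simp
  qed
  have low: "u = v" if u: "covers P u x" and v: "covers P v x" for u v
  proof (rule ccontr)
    assume uv: "u \<noteq> v"
    have uC: "u \<in> V" "v \<in> V" "leq u x" "leq v x" "u \<noteq> x" "v \<noteq> x"
      using u v coversD by auto
    obtain g where g: "is_lub P u v g" using lub_ex uC by blast
    then have g1: "g \<in> V" "leq u g" "leq v g" "leq g x" using uC x by (auto simp: is_lub_def)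
    have "g = x"
    proof (rule ccontr)
      assume "g \<noteq> x"
      then have "g = u" using u g1 unfolding covers_def by blast
      moreover have "g = v" using v g1 \<open>g \<noteq> x\<close> unfolding covers_def by blast
      ultimately show False using uv by simp
    qed
    then have "reducible P x" unfolding reducible_def using g uC x by blast
    then show False using nr by simp
  qed
  show ?thesis unfolding doubly_irreducible_def
    using x card_le_Suc0_iff_eq[OF finite_upper_covers, of x] card_le_Suc0_iff_eq[OF finite_lower_covers, of x] up low by auto
qed

lemma reducible_iff_not_di: "x \<in> V \<Longrightarrow> reducible P x \<longleftrightarrow> \<not> doubly_irreducible P x"
  using reducible_not_di irreducible_di by blast

lemma nullity_remove_elem:
  assumes x: "x \<in> V" and b: "b \<in> V" "b \<noteq> x" "\<forall>y\<in>V - {x}. leq b y"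
  shows "nullity (remove_elem P x) + int (card (cover_edges P))
         = nullity P + int (card (cover_edges (remove_elem P x))) + 1"
proof -
  let ?Q = "remove_elem P x"
  interpret Q: fin_poset ?Q by (rule fin_poset.intro, rule finite_poset_remove[OF fp])
  have "b \<in> carrier ?Q" "\<forall>y\<in>carrier ?Q. (b,y) \<in> ord ?Q"
    using b by (auto simp: remove_elem_def)
  then have "nullity ?Q = int (card (cover_edges ?Q)) - int (card (carrier ?Q)) + 1"
    by (rule Q.nullity_with_bot)
  moreover have "card (carrier ?Q) = card V - 1" using x fin by (simp add: remove_elem_def)
  moreover have "card V \<ge> 1" using x fin by (metis One_nat_def Suc_leI card_gt_0_iff empty_iff)
  ultimately show ?thesis using nullity_eq by (simp add: of_nat_diff)
qed

lemma covers_remove_di: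
  assumes di: "doubly_irreducible P x" and p: "covers P p x" and q: "covers P x q"
    and c: "covers (remove_elem P x) u v" and nc: "\<not> covers P u v"
  shows "u = p" "v = q" "\<not> (\<exists>w. w \<noteq> x \<and> strictly_between P p q w)"
proof -
  note c' = c[unfolded covers_remove_elem]
  obtain z where z: "leq u z" "leq z v" "z \<noteq> u" "z \<noteq> v"
    using c' nc unfolding covers_def by blast
  then have "z = x" using c' ordD by blast
  then have ux: "leq u x" "leq x v" using z by auto
  obtain p' where p': "covers P p' x" "leq u p'" using exists_lower_cover[OF ux(1)] c' by blast
  have "p' = p" using di_lower_cover_unique[OF di p'(1) p] .
  obtain q' where q': "covers P x q'" "leq q' v" using exists_upper_cover[OF ux(2)] c' by metis
  have "q' = q" using di_upper_cover_unique[OF di q'(1) q] .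
  have pq: "p \<in> V" "q \<in> V" "leq p x" "leq x q" "p \<noteq> x" "q \<noteq> x" using p q coversD by auto
  show u: "u = p"
  proof (rule ccontr)
    assume "u \<noteq> p"
    moreover have "leq p v" "p \<noteq> v" using pq ux trans antisym by blast+
    ultimately show False using c' pq p' \<open>p' = p\<close> by blast
  qed
  show v: "v = q"
  proof (rule ccontr)
    assume "v \<noteq> q"
    moreover have "leq u q" "q \<noteq> u" using pq ux trans antisym by blast+
    ultimately show False using c' pq q' \<open>q' = q\<close> by blast
  qed
  show "\<not> (\<exists>w. w \<noteq> x \<and> strictly_between P p q w)"
    using c' u v ordD unfolding strictly_between_def by blast
qed

lemma cover_edges_remove_middle:
  assumes di: "doubly_irreducible P x" and p: "covers P p x" and q: "covers P x q"
  shows "cover_edges (remove_elem P x) = (cover_edges P - {(p,x),(x,q)})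
     \<union> (if \<exists>w. w \<noteq> x \<and> strictly_between P p q w then {} else {(p,q)})"
    (is "_ = _ \<union> (if ?\<delta> then {} else _)")
proof (rule set_eqI, clarify)
  fix u v
  have pq: "p \<in> V" "q \<in> V" "leq p x" "leq x q" "p \<noteq> x" "q \<noteq> x" using p q coversD by auto
  show "(u,v) \<in> cover_edges (remove_elem P x)
    \<longleftrightarrow> (u,v) \<in> (cover_edges P - {(p,x),(x,q)}) \<union> (if ?\<delta> then {} else {(p,q)})"
  proof
    assume "(u,v) \<in> cover_edges (remove_elem P x)"
    then have c: "covers (remove_elem P x) u v" by (simp add: cover_edges_def)
    show "(u,v) \<in> (cover_edges P - {(p,x),(x,q)}) \<union> (if ?\<delta> then {} else {(p,q)})"
    proof (cases "covers P u v")
      case True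
      then show ?thesis using c by (auto simp: cover_edges_def covers_remove_elem)
    next
      case False
      have "\<not> ?\<delta>" "u = p" "v = q" using covers_remove_di[OF di p q c False] by simp_all
      then show ?thesis by (simp only: if_not_P) simp
    qed
  next
    assume "(u,v) \<in> (cover_edges P - {(p,x),(x,q)}) \<union> (if ?\<delta> then {} else {(p,q)})"
    then consider "covers P u v" "(u,v) \<noteq> (p,x)" "(u,v) \<noteq> (x,q)" | "\<not> ?\<delta>" "u = p" "v = q"
      by (auto simp: cover_edges_def split: if_splits)
    then show "(u,v) \<in> cover_edges (remove_elem P x)"
    proof cases
      case 1
      have "u \<noteq> x" "v \<noteq> x"
        using 1 di_upper_cover_unique[OF di _ q] di_lower_cover_unique[OF di _ p] by auto
      moreover have "\<not> (\<exists>z. z \<noteq> x \<and> z \<in> V \<and> leq u z \<and> leq z v \<and> z \<noteq> u \<and> z \<noteq> v)"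
        using 1 unfolding covers_def by blast
      ultimately show ?thesis using 1 coversD[OF \<open>covers P u v\<close>]
        by (simp add: cover_edges_def covers_remove_elem)
    next
      case 2
      have "leq p q" "p \<noteq> q" using pq trans antisym by blast+
      then show ?thesis
        using 2 pq unfolding cover_edges_def covers_remove_elem strictly_between_def by auto
    qed
  qed
qed

lemma nullity_remove_middle:
  assumes di: "doubly_irreducible P x" and p: "covers P p x" and q: "covers P x q"
  shows "nullity (remove_elem P x) = nullity P -
     (if \<exists>w. w \<noteq> x \<and> strictly_between P p q w then 1 else 0)"
proof -
  define \<delta> where "\<delta> \<longleftrightarrow> (\<exists>w. w \<noteq> x \<and> strictly_between P p q w)"
  have pq: "p \<in> V" "x \<in> V" "leq p x" "leq x q" "p \<noteq> x" "q \<noteq> x" using p q coversD by auto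
  obtain b where b: "b \<in> V" "\<forall>y\<in>V. leq b y" using bot_ex by blast
  have "b \<noteq> x" using b pq antisym by (metis trans)
  moreover have "\<forall>y\<in>V - {x}. leq b y" using b by blast
  ultimately have n: "nullity (remove_elem P x) + int (card (cover_edges P))
      = nullity P + int (card (cover_edges (remove_elem P x))) + 1"
    using nullity_remove_elem[OF pq(2) b(1)] by blast
  have inE: "{(p,x),(x,q)} \<subseteq> cover_edges P" "(p,q) \<notin> cover_edges P"
    using p q pq unfolding cover_edges_def covers_def by auto
  have "card (cover_edges P - {(p,x),(x,q)}) + 2 = card (cover_edges P)"
    using finite_cover_edges inE pq card_Diff_subset[OF _ inE(1)] card_mono[OF _ inE(1)]
    by (simp add: card_insert_if)
  moreover have "(p,q) \<notin> cover_edges P - {(p,x),(x,q)}" using inE by auto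
  ultimately have "int (card (cover_edges (remove_elem P x))) + 2
      = int (card (cover_edges P)) + (if \<delta> then 0 else 1)"
    using cover_edges_remove_middle[OF di p q] finite_cover_edges unfolding \<delta>_def[symmetric]
    by auto
  then show ?thesis using n unfolding \<delta>_def[symmetric] by (cases \<delta>) simp_all
qed

lemma card_ge_2E:
  assumes "card V \<ge> 2" "b \<in> V" obtains y where "y \<in> V" "y \<noteq> b"
  using assms card_le_Suc0_iff_eq[OF fin] by (metis One_nat_def not_less_eq_eq numeral_2_eq_2)

lemma nullity_remove_bot:
  assumes b: "b \<in> V" "\<forall>y\<in>V. leq b y" and di: "doubly_irreducible P b" and c2: "card V \<ge> 2"
  shows "nullity (remove_elem P b) = nullity P"
proof -
  obtain y where y: "y \<in> V" "y \<noteq> b" using card_ge_2E[OF c2 b(1)] .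
  obtain q where q: "covers P b q" using exists_upper_cover[of b y] b y by blast
  have q_bot: "\<forall>y'\<in>V - {b}. leq q y'"
  proof
    fix y' assume "y' \<in> V - {b}"
    then obtain q' where "covers P b q'" "leq q' y'" using exists_upper_cover[of b y'] b by blast
    then show "leq q y'" using di_upper_cover_unique[OF di q] by auto
  qed
  have qV: "q \<in> V" "q \<noteq> b" using q coversD by auto
  have "cover_edges (remove_elem P b) = cover_edges P - {(b,q)}"
  proof (rule set_eqI, clarify)
    fix u v
    show "(u,v) \<in> cover_edges (remove_elem P b) \<longleftrightarrow> (u,v) \<in> cover_edges P - {(b,q)}"
    proof
      assume "(u,v) \<in> cover_edges (remove_elem P b)"
      then have c: "covers (remove_elem P b) u v" by (simp add: cover_edges_def)
      have "covers P u v"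
      proof (rule ccontr)
        assume "\<not> covers P u v"
        then have "u = b" using covers_remove_elem c b(2) ordD antisym unfolding covers_def
          by (metis (no_types, lifting))
        then show False using c covers_remove_elem by blast
      qed
      then show "(u,v) \<in> cover_edges P - {(b,q)}"
        using c by (auto simp: cover_edges_def covers_remove_elem)
    next
      assume a: "(u,v) \<in> cover_edges P - {(b,q)}"
      then have c: "covers P u v" by (simp add: cover_edges_def)
      have "u \<noteq> b" using a c di_upper_cover_unique[OF di _ q] by (auto simp: cover_edges_def)
      moreover have "v \<noteq> b" using c b coversD antisym by blast
      moreover have "\<not> (\<exists>z. z \<noteq> b \<and> z \<in> V \<and> leq u z \<and> leq z v \<and> z \<noteq> u \<and> z \<noteq> v)"
        using c unfolding covers_def by blast
      ultimately show "(u,v) \<in> cover_edges (remove_elem P b)"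
        using coversD[OF c] by (simp add: cover_edges_def covers_remove_elem)
    qed
  qed
  moreover have "(b,q) \<in> cover_edges P" using q by (simp add: cover_edges_def)
  moreover have "card (cover_edges P) > 0" using calculation finite_cover_edges card_gt_0_iff by blast
  ultimately show ?thesis
    using nullity_remove_elem[OF b(1) qV(1) qV(2) q_bot] finite_cover_edges
    by (simp add: card_Diff_singleton_if of_nat_diff card_gt_0_iff[symmetric])
qed

lemma nullity_remove_top:
  assumes t: "t \<in> V" "\<forall>y\<in>V. leq y t" and di: "doubly_irreducible P t" and c2: "card V \<ge> 2"
  shows "nullity (remove_elem P t) = nullity P"
proof -
  obtain y where y: "y \<in> V" "y \<noteq> t" using card_ge_2E[OF c2 t(1)] .
  obtain q where q: "covers P q t" using exists_lower_cover[of y t] t y by blast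
  obtain b where b: "b \<in> V" "\<forall>x\<in>V. leq b x" using bot_ex by blast
  have "b \<noteq> t" using b t q coversD antisym by blast
  have "cover_edges (remove_elem P t) = cover_edges P - {(q,t)}"
  proof (rule set_eqI, clarify)
    fix u v
    show "(u,v) \<in> cover_edges (remove_elem P t) \<longleftrightarrow> (u,v) \<in> cover_edges P - {(q,t)}"
    proof
      assume "(u,v) \<in> cover_edges (remove_elem P t)"
      then have c: "covers (remove_elem P t) u v" by (simp add: cover_edges_def)
      have "covers P u v"
      proof (rule ccontr)
        assume "\<not> covers P u v"
        then have "v = t" using covers_remove_elem c t(2) ordD antisym unfolding covers_def
          by (metis (no_types, lifting))
        then show False using c covers_remove_elem by blast
      qed
      then show "(u,v) \<in> cover_edges P - {(q,t)}"
        using c by (auto simp: cover_edges_def covers_remove_elem)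
    next
      assume a: "(u,v) \<in> cover_edges P - {(q,t)}"
      then have c: "covers P u v" by (simp add: cover_edges_def)
      have "v \<noteq> t" using a c di_lower_cover_unique[OF di _ q] by (auto simp: cover_edges_def)
      moreover have "u \<noteq> t" using c t coversD antisym by blast
      moreover have "\<not> (\<exists>z. z \<noteq> t \<and> z \<in> V \<and> leq u z \<and> leq z v \<and> z \<noteq> u \<and> z \<noteq> v)"
        using c unfolding covers_def by blast
      ultimately show "(u,v) \<in> cover_edges (remove_elem P t)"
        using coversD[OF c] by (simp add: cover_edges_def covers_remove_elem)
    qed
  qed
  moreover have "(q,t) \<in> cover_edges P" using q by (simp add: cover_edges_def)
  moreover have "card (cover_edges P) > 0" using calculation finite_cover_edges card_gt_0_iff by blast
  ultimately show ?thesis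
    using nullity_remove_elem[OF t(1) b(1) \<open>b \<noteq> t\<close>] b finite_cover_edges
    by (simp add: card_Diff_singleton_if of_nat_diff card_gt_0_iff[symmetric])
qed

end

lemma (in fin_lattice) card_cover_edges_chain:
  assumes tot: "\<forall>x\<in>V. \<forall>y\<in>V. leq x y \<or> leq y x"
  shows "card (cover_edges P) = card V - 1"
proof -
  obtain t where t: "t \<in> V" "\<forall>x\<in>V. leq x t" using top_ex by blast
  have inj: "inj_on fst (cover_edges P)"
  proof (rule inj_onI, clarify)
    fix x y x' y' assume e: "(x,y) \<in> cover_edges P" "(x',y') \<in> cover_edges P" "fst (x,y) = fst (x',y')"
    then have c: "covers P x y" "covers P x y'" by (auto simp: cover_edges_def)
    then have cc: "y \<in> V" "y' \<in> V" "leq x y" "leq x y'" "x \<noteq> y" "x \<noteq> y'"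
      using coversD by auto
    have "y = y'"
    proof (cases "leq y y'")
      case True then show ?thesis using c(2) cc unfolding covers_def by blast
    next
      case False then have "leq y' y" using tot cc by blast
      then show ?thesis using c(1) cc unfolding covers_def by blast
    qed
    then show "x = x' \<and> y = y'" using e by simp
  qed
  have img: "fst ` cover_edges P = V - {t}"
  proof
    show "fst ` cover_edges P \<subseteq> V - {t}"
    proof clarify
      fix x y assume "(x,y) \<in> cover_edges P"
      then have c: "covers P x y" by (simp add: cover_edges_def)
      then have "x \<in> V" "y \<in> V" "leq x y" "x \<noteq> y" using coversD by auto
      moreover have "x \<noteq> t" using calculation t antisym by blast
      ultimately show "fst (x,y) \<in> V - {t}" by simp
    qed
    show "V - {t} \<subseteq> fst ` cover_edges P"
    proof
      fix x assume x: "x \<in> V - {t}"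
      then obtain z where "covers P x z" using exists_upper_cover[of x t] t by blast
      then have "(x,z) \<in> cover_edges P" by (simp add: cover_edges_def)
      then show "x \<in> fst ` cover_edges P" by force
    qed
  qed
  have "card (cover_edges P) = card (fst ` cover_edges P)" using card_image[OF inj] by simp
  also have "\<dots> = card V - 1" using img t fin by simp
  finally show ?thesis .
qed

lemma (in fin_lattice) nullity_chain:
  assumes tot: "\<forall>x\<in>V. \<forall>y\<in>V. leq x y \<or> leq y x"
  shows "nullity P = 0"
proof -
  have "card V \<ge> 1" using nonempty fin by (metis One_nat_def Suc_leI card_gt_0_iff)
  then show ?thesis using nullity_eq card_cover_edges_chain[OF tot] by (simp add: of_nat_diff)
qed

section \<open>Adjuncts\<close>

locale adjunct_step = K: fin_lattice K + D: fin_lattice D for K D +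
  fixes a b :: nat
  assumes tot: "\<forall>x\<in>carrier D. \<forall>y\<in>carrier D. (x,y) \<in> ord D \<or> (y,x) \<in> ord D"
  and disj: "carrier K \<inter> carrier D = {}"
  and aK: "a \<in> carrier K" and bK: "b \<in> carrier K" and ab: "(a,b) \<in> ord K" "a \<noteq> b"
  and nc: "\<not> covers K a b"
begin

abbreviation K' :: poset where "K' \<equiv> adjunct K a b D"
abbreviation leq' :: "nat \<Rightarrow> nat \<Rightarrow> bool" where "leq' x y \<equiv> (x,y) \<in> ord K'"

lemma carrier_adj: "carrier K' = carrier K \<union> carrier D" by (simp add: adjunct_def)

lemma ord_KK: "x \<in> carrier K \<Longrightarrow> y \<in> carrier K \<Longrightarrow> leq' x y \<longleftrightarrow> K.leq x y"
  using disj D.ordD by (auto simp: adjunct_def)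
lemma ord_DD: "x \<in> carrier D \<Longrightarrow> y \<in> carrier D \<Longrightarrow> leq' x y \<longleftrightarrow> D.leq x y"
  using disj K.ordD by (auto simp: adjunct_def)
lemma ord_KD: "x \<in> carrier K \<Longrightarrow> y \<in> carrier D \<Longrightarrow> leq' x y \<longleftrightarrow> K.leq x a"
  using disj K.ordD D.ordD by (auto simp: adjunct_def)
lemma ord_DK: "x \<in> carrier D \<Longrightarrow> y \<in> carrier K \<Longrightarrow> leq' x y \<longleftrightarrow> K.leq b y"
  using disj K.ordD D.ordD by (auto simp: adjunct_def)
lemma ord_adj_carrier: "leq' x y \<Longrightarrow> x \<in> carrier K' \<and> y \<in> carrier K'"
  using K.ordD D.ordD aK bK by (auto simp: adjunct_def)

lemma strictly_between_old:
  "z \<in> carrier K \<Longrightarrow> a0 \<in> carrier K \<Longrightarrow> b0 \<in> carrier K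
    \<Longrightarrow> strictly_between K' a0 b0 z \<longleftrightarrow> strictly_between K a0 b0 z"
  unfolding strictly_between_def using ord_KK by auto

lemma strictly_between_new:
  "z \<in> carrier D \<Longrightarrow> a0 \<in> carrier K \<Longrightarrow> b0 \<in> carrier K
    \<Longrightarrow> strictly_between K' a0 b0 z \<longleftrightarrow> K.leq a0 a \<and> K.leq b b0"
  unfolding strictly_between_def using ord_KD ord_DK disj by auto

lemma strictly_between_carrier: "strictly_between K' a0 b0 z \<Longrightarrow> z \<in> carrier K \<or> z \<in> carrier D"
  unfolding strictly_between_def using ord_adj_carrier carrier_adj by blast

lemma covers_KK:
  assumes uv: "u \<in> carrier K" "v \<in> carrier K"
  shows "covers K' u v \<longleftrightarrow> covers K u v"
proof -
  have no_span: "\<not> (K.leq u a \<and> K.leq b v)" if c: "covers K u v"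
  proof
    assume h: "K.leq u a \<and> K.leq b v"
    then have "K.leq a v" "K.leq u b" using ab K.trans by blast+
    then have "a = u \<or> a = v" "b = u \<or> b = v" using c h unfolding covers_def by blast+
    then have "a = u" "b = v" using ab K.antisym K.coversD[OF c] by blast+
    then show False using c nc by simp
  qed
  obtain d where d: "d \<in> carrier D" using D.nonempty by blast
  have "strictly_between K' u v z \<longleftrightarrow>
      (z \<in> carrier K \<and> strictly_between K u v z) \<or> (z \<in> carrier D \<and> K.leq u a \<and> K.leq b v)" for z
    using strictly_between_carrier strictly_between_old strictly_between_new uv by blast
  then show ?thesis
    using no_span uv d ord_KK K.ordD unfolding covers_iff_between strictly_between_def by metis
qed

lemma covers_DD:
  assumes uv: "u \<in> carrier D" "v \<in> carrier D"
  shows "covers K' u v \<longleftrightarrow> covers D u v"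
proof -
  have "\<not> strictly_between K' u v z" if "z \<in> carrier K" for z
  proof
    assume "strictly_between K' u v z"
    then have "K.leq b z" "K.leq z a" using that uv ord_KD ord_DK unfolding strictly_between_def by blast+
    then show False using ab K.trans K.antisym by blast
  qed
  then have "strictly_between K' u v z \<longleftrightarrow> strictly_between D u v z" for z
    using strictly_between_carrier uv ord_DD D.ordD unfolding strictly_between_def by blast
  then show ?thesis using uv ord_DD unfolding covers_iff_between by blast
qed

lemma covers_KD:
  assumes u: "u \<in> carrier K" and v: "v \<in> carrier D"
  shows "covers K' u v \<longleftrightarrow> u = a \<and> (\<forall>d\<in>carrier D. D.leq v d)"
proof -
  have btw: "strictly_between K' u v z \<longleftrightarrow> (z \<in> carrier K \<and> K.leq u z \<and> K.leq z a \<and> z \<noteq> u)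
      \<or> (z \<in> carrier D \<and> K.leq u a \<and> D.leq z v \<and> z \<noteq> v)" for z
    using strictly_between_carrier[of u v z] u v disj ord_KK ord_KD ord_DD
    unfolding strictly_between_def by auto
  have uv: "leq' u v \<longleftrightarrow> K.leq u a" "u \<noteq> v" using ord_KD u v disj by auto
  show ?thesis
  proof
    assume c: "covers K' u v"
    then have ua: "K.leq u a" and nb: "\<And>z. \<not> strictly_between K' u v z"
      using uv unfolding covers_iff_between by auto
    have "u = a" using btw[of a] nb[of a] aK K.refl[OF aK] ua by blast
    moreover have "D.leq v d" if d: "d \<in> carrier D" for d
    proof (rule ccontr)
      assume "\<not> D.leq v d"
      then have "D.leq d v" "d \<noteq> v" using tot d v D.refl by auto
      then show False using btw[of d] nb[of d] d ua by blast
    qed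
    ultimately show "u = a \<and> (\<forall>d\<in>carrier D. D.leq v d)" by blast
  next
    assume h: "u = a \<and> (\<forall>d\<in>carrier D. D.leq v d)"
    have "\<not> strictly_between K' u v z" for z
    proof
      assume "strictly_between K' u v z"
      then consider "K.leq a z" "K.leq z a" "z \<noteq> a" | "z \<in> carrier D" "D.leq z v" "z \<noteq> v"
        using btw h by blast
      then show False using h K.antisym D.antisym by cases blast+
    qed
    then show "covers K' u v" using uv h K.refl[OF aK] unfolding covers_iff_between by blast
  qed
qed

lemma covers_DK:
  assumes u: "u \<in> carrier D" and v: "v \<in> carrier K"
  shows "covers K' u v \<longleftrightarrow> v = b \<and> (\<forall>d\<in>carrier D. D.leq d u)"
proof -
  have btw: "strictly_between K' u v z \<longleftrightarrow> (z \<in> carrier K \<and> K.leq b z \<and> K.leq z v \<and> z \<noteq> v)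
      \<or> (z \<in> carrier D \<and> K.leq b v \<and> D.leq u z \<and> z \<noteq> u)" for z
    using strictly_between_carrier[of u v z] u v disj ord_KK ord_DK ord_DD
    unfolding strictly_between_def by auto
  have uv: "leq' u v \<longleftrightarrow> K.leq b v" "u \<noteq> v" using ord_DK u v disj by auto
  show ?thesis
  proof
    assume c: "covers K' u v"
    then have bv: "K.leq b v" and nb: "\<And>z. \<not> strictly_between K' u v z"
      using uv unfolding covers_iff_between by auto
    have "v = b" using btw[of b] nb[of b] bK K.refl[OF bK] bv by blast
    moreover have "D.leq d u" if d: "d \<in> carrier D" for d
    proof (rule ccontr)
      assume "\<not> D.leq d u"
      then have "D.leq u d" "d \<noteq> u" using tot d u D.refl by auto
      then show False using btw[of d] nb[of d] d bv by blast
    qed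
    ultimately show "v = b \<and> (\<forall>d\<in>carrier D. D.leq d u)" by blast
  next
    assume h: "v = b \<and> (\<forall>d\<in>carrier D. D.leq d u)"
    have "\<not> strictly_between K' u v z" for z
    proof
      assume "strictly_between K' u v z"
      then consider "K.leq b z" "K.leq z b" "z \<noteq> b" | "z \<in> carrier D" "D.leq u z" "z \<noteq> u"
        using btw h by blast
      then show False using h K.antisym D.antisym by cases blast+
    qed
    then show "covers K' u v" using uv h K.refl[OF bK] unfolding covers_iff_between by blast
  qed
qed

lemma cover_edges_adjunct:
  assumes d0: "d0 \<in> carrier D" "\<forall>x\<in>carrier D. D.leq d0 x"
  and d1: "d1 \<in> carrier D" "\<forall>x\<in>carrier D. D.leq x d1"
  shows "cover_edges K' = cover_edges K \<union> cover_edges D \<union> {(a,d0), (d1,b)}"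
proof (rule set_eqI, clarify)
  fix u v
  have least: "(\<forall>d\<in>carrier D. D.leq v d) \<longleftrightarrow> v = d0" if "v \<in> carrier D" for v
    using d0 that D.antisym by blast
  have greatest: "(\<forall>d\<in>carrier D. D.leq d u) \<longleftrightarrow> u = d1" if "u \<in> carrier D" for u
    using d1 that D.antisym by blast
  show "(u,v) \<in> cover_edges K' \<longleftrightarrow> (u,v) \<in> cover_edges K \<union> cover_edges D \<union> {(a,d0), (d1,b)}"
  proof
    assume "(u,v) \<in> cover_edges K'"
    then have c: "covers K' u v" by (simp add: cover_edges_def)
    then have "u \<in> carrier K \<union> carrier D" "v \<in> carrier K \<union> carrier D"
      using ord_adj_carrier carrier_adj unfolding covers_def by blast+
    then show "(u,v) \<in> cover_edges K \<union> cover_edges D \<union> {(a,d0), (d1,b)}"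
      using c covers_KK covers_DD covers_KD covers_DK least greatest by (auto simp: cover_edges_def)
  next
    assume h: "(u,v) \<in> cover_edges K \<union> cover_edges D \<union> {(a,d0), (d1,b)}"
    then consider "covers K u v" | "covers D u v" | "u = a" "v = d0" | "u = d1" "v = b"
      by (auto simp: cover_edges_def)
    then have "covers K' u v"
    proof cases
      case 1 then show ?thesis using covers_KK K.coversD by blast
    next
      case 2 then show ?thesis using covers_DD D.coversD by blast
    next
      case 3 then show ?thesis using covers_KD aK d0 by blast
    next
      case 4 then show ?thesis using covers_DK bK d1 by blast
    qed
    then show "(u,v) \<in> cover_edges K'" by (simp add: cover_edges_def)
  qed
qed

lemma nullity_adjunct: assumes L': "finite_lattice K'" shows "nullity K' = nullity K + 1"
proof -
  interpret L: fin_lattice K' by (unfold_locales) (use L' in \<open>simp_all add: finite_lattice_def\<close>)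
  obtain d0 where d0: "d0 \<in> carrier D" "\<forall>x\<in>carrier D. D.leq d0 x" using D.bot_ex by blast
  obtain d1 where d1: "d1 \<in> carrier D" "\<forall>x\<in>carrier D. D.leq x d1" using D.top_ex by blast
  have E: "cover_edges K' = cover_edges K \<union> cover_edges D \<union> {(a,d0), (d1,b)}"
    by (rule cover_edges_adjunct[OF d0 d1])
  have sK: "cover_edges K \<subseteq> carrier K \<times> carrier K"
    using K.coversD by (auto simp: cover_edges_def)
  have sD: "cover_edges D \<subseteq> carrier D \<times> carrier D"
    using D.coversD by (auto simp: cover_edges_def)
  have fK: "finite (cover_edges K)" by (rule K.finite_cover_edges)
  have fD: "finite (cover_edges D)" by (rule D.finite_cover_edges)
  have dis1: "cover_edges K \<inter> cover_edges D = {}" using sK sD disj by blast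
  have n1: "(a,d0) \<notin> cover_edges K \<union> cover_edges D" using sK sD disj d0 aK by blast
  have n2: "(d1,b) \<notin> insert (a,d0) (cover_edges K \<union> cover_edges D)"
    using sK sD disj d1 bK aK by blast
  have "card (cover_edges K') = card (cover_edges K) + card (cover_edges D) + 2"
  proof -
    have "cover_edges K' = insert (d1,b) (insert (a,d0) (cover_edges K \<union> cover_edges D))"
      using E by auto
    then show ?thesis using n1 n2 fK fD dis1 by (simp add: card_Un_disjoint)
  qed
  moreover have "card (cover_edges D) = card (carrier D) - 1" using D.card_cover_edges_chain tot by blast
  moreover have "card (carrier D) \<ge> 1" using D.nonempty D.fin by (metis One_nat_def Suc_leI card_gt_0_iff)
  moreover have "card (carrier K') = card (carrier K) + card (carrier D)"
    using carrier_adj disj K.fin D.fin by (simp add: card_Un_disjoint)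
  ultimately show ?thesis using L.nullity_eq K.nullity_eq by (simp add: of_nat_diff)
qed

end

lemma adjunct_list_append: "adjunct_list L (xs @ ys) = adjunct_list (adjunct_list L xs) ys"
proof (induction xs arbitrary: L)
  case Nil then show ?case by simp
next
  case (Cons x xs) then show ?case by (cases x) simp
qed

lemma valid_adjunct_list_append: "valid_adjunct_list L (xs @ ys) \<longleftrightarrow> valid_adjunct_list L xs \<and> valid_adjunct_list (adjunct_list L xs) ys"
proof (induction xs arbitrary: L)
  case Nil then show ?case by simp
next
  case (Cons x xs) then show ?case by (cases x) auto
qed

lemma fin_lattice_of: "finite_lattice P \<Longrightarrow> fin_lattice P"
  by (unfold_locales) (simp_all add: finite_lattice_def)

lemma adjunct_step_of_valid:
  assumes "finite_lattice L" "is_chain C" "carrier L \<inter> carrier C = {}" "a \<in> carrier L" "b \<in> carrier L"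
    "(a,b) \<in> ord L" "a \<noteq> b" "\<not> covers L a b"
  shows "adjunct_step L C a b"
  using assms unfolding adjunct_step_def adjunct_step_axioms_def is_chain_def
  by (auto intro: fin_lattice_of)

lemma nullity_adjunct_list:
  "valid_adjunct_list P xs \<Longrightarrow> finite_lattice P \<Longrightarrow> finite_lattice (adjunct_list P xs)
    \<Longrightarrow> nullity (adjunct_list P xs) = nullity P + int (length xs)"
proof (induction xs arbitrary: P)
  case Nil then show ?case by simp
next
  case (Cons x xs)
  obtain a b C where x: "x = (a,b,C)" by (cases x)
  let ?P' = "adjunct P a b C"
  have v: "finite_lattice P" "is_chain C" "carrier P \<inter> carrier C = {}" "a \<in> carrier P" "b \<in> carrier P"
    "(a,b) \<in> ord P" "a \<noteq> b" "\<not> covers P a b" "valid_adjunct_list ?P' xs"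
    using Cons.prems x by auto
  interpret S: adjunct_step P C a b by (rule adjunct_step_of_valid) (use v in auto)
  have L': "finite_lattice ?P'"
  proof (cases xs)
    case Nil then show ?thesis using Cons.prems x by simp
  next
    case (Cons y ys) then show ?thesis using v(9) by (cases y) auto
  qed
  have "nullity (adjunct_list ?P' xs) = nullity ?P' + int (length xs)"
    using Cons.IH v(9) L' Cons.prems x by simp
  then show ?case using S.nullity_adjunct[OF L'] x by simp
qed

text \<open>A separating colouring witnesses that the open interval between \<open>a\<close> and \<open>b\<close> falls apart.
  It survives all later adjuncts, and in the final lattice it forces an irreducible element
  with lower cover \<open>a\<close> and upper cover \<open>b\<close>.\<close>
definition separating_colouring :: "poset \<Rightarrow> nat \<Rightarrow> nat \<Rightarrow> (nat \<Rightarrow> nat) \<Rightarrow> bool" where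
  "separating_colouring P a b col \<longleftrightarrow>
     (\<forall>z w. strictly_between P a b z \<and> strictly_between P a b w \<and> col z \<noteq> col w
        \<longrightarrow> (z,w) \<notin> ord P)
     \<and> (\<exists>z w. strictly_between P a b z \<and> strictly_between P a b w \<and> col z \<noteq> col w)"

context adjunct_step
begin

text \<open>The adjoined chain lies above \<open>a\<close> and below \<open>b\<close>, so it takes the colour of whichever
  of them lies in the interval (if both do, they have the same colour).\<close>
abbreviation extended_colouring :: "nat \<Rightarrow> nat \<Rightarrow> (nat \<Rightarrow> nat) \<Rightarrow> nat \<Rightarrow> nat" where
  "extended_colouring a0 b0 col z \<equiv>
     if z \<in> carrier D then (if strictly_between K a0 b0 a then col a else col b) else col z"

lemma extended_colouring_no_cross:
  assumes ci: "separating_colouring K a0 b0 col" and ab0: "a0 \<in> carrier K" "b0 \<in> carrier K"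
    and z: "strictly_between K' a0 b0 z" and w: "strictly_between K' a0 b0 w"
    and c: "extended_colouring a0 b0 col z \<noteq> extended_colouring a0 b0 col w"
  shows "\<not> leq' z w"
proof
  assume zw: "leq' z w"
  have same: "\<And>z w. strictly_between K a0 b0 z \<Longrightarrow> strictly_between K a0 b0 w \<Longrightarrow> K.leq z w
      \<Longrightarrow> col z = col w"
    using ci by (auto simp: separating_colouring_def)
  consider "z \<in> carrier K" "w \<in> carrier K" | "z \<in> carrier D" "w \<in> carrier D"
    | "z \<in> carrier K" "w \<in> carrier D" | "z \<in> carrier D" "w \<in> carrier K"
    using strictly_between_carrier z w by blast
  then show False
  proof cases
    case 1
    then have "strictly_between K a0 b0 z" "strictly_between K a0 b0 w" "z \<notin> carrier D" "w \<notin> carrier D"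
      using z w strictly_between_old ab0 disj by auto
    moreover have "K.leq z w" using ord_KK 1 zw by blast
    ultimately show False using same c by simp
  next
    case 2 then show False using c by simp
  next
    case 3
    have zb: "strictly_between K a0 b0 z" using z 3 strictly_between_old ab0 by auto
    have wn: "K.leq a0 a" "K.leq b b0" using w 3 strictly_between_new ab0 by auto
    have za: "K.leq z a" using zw ord_KD 3 by auto
    have "a \<noteq> a0" using za zb K.antisym unfolding strictly_between_def by blast
    moreover have "K.leq a b0" "a \<noteq> b0" using ab wn K.trans K.antisym by blast+
    ultimately have ba: "strictly_between K a0 b0 a" using wn unfolding strictly_between_def by blast
    then have "col z = col a" using same zb za by blast
    moreover have "z \<notin> carrier D" using 3 disj by auto
    ultimately show False using c 3 ba by simp
  next
    case 4
    have wb: "strictly_between K a0 b0 w" using w 4 strictly_between_old ab0 by auto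
    have zn: "K.leq a0 a" "K.leq b b0" using z 4 strictly_between_new ab0 by auto
    have bw: "K.leq b w" using zw ord_DK 4 by auto
    have "b \<noteq> b0" using bw wb K.antisym unfolding strictly_between_def by blast
    moreover have "K.leq a0 b" "b \<noteq> a0" using ab zn K.trans K.antisym by blast+
    ultimately have bb: "strictly_between K a0 b0 b" using zn unfolding strictly_between_def by blast
    then have "col w = col b" using same wb bw by metis
    moreover have "strictly_between K a0 b0 a \<Longrightarrow> col a = col b" using same bb ab by blast
    moreover have "w \<notin> carrier D" using 4 disj by auto
    ultimately show False using c 4 by (auto split: if_splits)
  qed
qed

lemma separating_colouring_adjunct:
  assumes ci: "separating_colouring K a0 b0 col"
  shows "separating_colouring K' a0 b0 (extended_colouring a0 b0 col)"
proof -
  obtain z0 w0 where zw0: "strictly_between K a0 b0 z0" "strictly_between K a0 b0 w0" "col z0 \<noteq> col w0"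
    using ci by (auto simp: separating_colouring_def)
  have ab0: "a0 \<in> carrier K" "b0 \<in> carrier K" and zw0K: "z0 \<in> carrier K" "w0 \<in> carrier K"
    using zw0 K.ordD by (auto simp: strictly_between_def)
  then have "strictly_between K' a0 b0 z0" "strictly_between K' a0 b0 w0"
    using zw0 strictly_between_old by auto
  moreover have "extended_colouring a0 b0 col z0 \<noteq> extended_colouring a0 b0 col w0"
    using zw0 zw0K disj by auto
  ultimately show ?thesis
    unfolding separating_colouring_def using extended_colouring_no_cross[OF ci ab0] by blast
qed

lemma separating_colouring_new: "separating_colouring K' a b (\<lambda>z. if z \<in> carrier D then 1 else 0)"
proof -
  obtain y where y: "K.leq a y" "K.leq y b" "y \<noteq> a" "y \<noteq> b"
    using nc ab unfolding covers_def by blast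
  then have yK: "y \<in> carrier K" using K.ordD by blast
  obtain c where c: "c \<in> carrier D" using D.nonempty by blast
  have "strictly_between K' a b y"
    using y yK strictly_between_old aK bK unfolding strictly_between_def by auto
  moreover have "strictly_between K' a b c" using c strictly_between_new aK bK K.refl by auto
  moreover have "y \<notin> carrier D" using yK disj by auto
  moreover have main: "\<not> leq' z w" if z: "strictly_between K' a b z" and w: "strictly_between K' a b w"
    and cc: "(if z \<in> carrier D then 1 else 0::nat) \<noteq> (if w \<in> carrier D then 1 else 0)" for z w
  proof -
    consider "z \<in> carrier K" "w \<in> carrier D" | "z \<in> carrier D" "w \<in> carrier K"
      using strictly_between_carrier z w cc by (auto split: if_splits)
    then show ?thesis
    proof cases
      case 1
      then have "K.leq a z" "z \<noteq> a" using z ord_KK aK unfolding strictly_between_def by auto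
      then show ?thesis using ord_KD 1 K.antisym by blast
    next
      case 2
      then have "K.leq w b" "w \<noteq> b" using w ord_KK bK unfolding strictly_between_def by auto
      then show ?thesis using ord_DK 2 K.antisym by blast
    qed
  qed
  ultimately show ?thesis unfolding separating_colouring_def using c by (metis one_neq_zero)
qed

end

lemma separating_colouring_adjunct_list:
  "valid_adjunct_list P xs \<Longrightarrow> separating_colouring P a0 b0 col \<Longrightarrow> \<exists>col'. separating_colouring (adjunct_list P xs) a0 b0 col'"
proof (induction xs arbitrary: P col)
  case Nil then show ?case by auto
next
  case (Cons x xs)
  obtain a b C where x: "x = (a,b,C)" by (cases x)
  have v: "finite_lattice P" "is_chain C" "carrier P \<inter> carrier C = {}" "a \<in> carrier P" "b \<in> carrier P"
    "(a,b) \<in> ord P" "a \<noteq> b" "\<not> covers P a b" "valid_adjunct_list (adjunct P a b C) xs"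
    using Cons.prems x by auto
  interpret S: adjunct_step P C a b by (rule adjunct_step_of_valid) (use v in auto)
  have "separating_colouring (adjunct P a b C) a0 b0
     (\<lambda>z. if z \<in> carrier C then (if strictly_between P a0 b0 a then col a else col b) else col z)"
    using S.separating_colouring_adjunct Cons.prems(2) by blast
  then show ?case using Cons.IH v(9) x by auto
qed

lemma adjunct_pair_separated:
  assumes v: "valid_adjunct_list C0 xs" and m: "(a,b,C) \<in> set xs"
  shows "\<exists>col. separating_colouring (adjunct_list C0 xs) a b col"
proof -
  obtain ys zs where xs: "xs = ys @ (a,b,C) # zs" using split_list[OF m] by blast
  let ?K = "adjunct_list C0 ys"
  have v2: "valid_adjunct_list ?K ((a,b,C) # zs)" using v xs valid_adjunct_list_append by blast
  then have vv: "finite_lattice ?K" "is_chain C" "carrier ?K \<inter> carrier C = {}" "a \<in> carrier ?K" "b \<in> carrier ?K"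
    "(a,b) \<in> ord ?K" "a \<noteq> b" "\<not> covers ?K a b" "valid_adjunct_list (adjunct ?K a b C) zs"
    by auto
  interpret S: adjunct_step ?K C a b by (rule adjunct_step_of_valid) (use vv in auto)
  obtain col where "separating_colouring (adjunct_list (adjunct ?K a b C) zs) a b col"
    using separating_colouring_adjunct_list[OF vv(9) S.separating_colouring_new] by blast
  moreover have "adjunct_list C0 xs = adjunct_list (adjunct ?K a b C) zs"
    using xs adjunct_list_append by simp
  ultimately show ?thesis by auto
qed

section \<open>Interval lattices\<close>

text \<open>Elements of the lattices built from graphs are coded by naturals: \<open>3 * i\<close> is the reducible
  element of rank \<open>i\<close>, \<open>3 * i + 1\<close> the extra spine element between ranks \<open>i\<close> and \<open>i + 1\<close>, and
  \<open>edge_code i j\<close> the element adjoined for the edge \<open>{i, j}\<close>.  Each code stands for the interval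
  \<open>[lo x, hi x]\<close> of ranks it spans.\<close>
definition edge_code :: "nat \<Rightarrow> nat \<Rightarrow> nat" where
  "edge_code i j = 3 * prod_encode (i,j) + 2"

definition lo :: "nat \<Rightarrow> nat" where
  "lo x = (if x mod 3 = 2 then fst (prod_decode (x div 3)) else x div 3)"
definition hi :: "nat \<Rightarrow> nat" where
  "hi x = (if x mod 3 = 0 then x div 3 else if x mod 3 = 1 then Suc (x div 3)
     else snd (prod_decode (x div 3)))"

lemma code_mod3_div3: "(3*m+2) mod 3 = (2::nat)" "(3*m+2) div 3 = (m::nat)" by presburger+

lemma lo_mult3[simp]: "lo (3*i) = i" by (simp add: lo_def)
lemma hi_mult3[simp]: "hi (3*i) = i" by (simp add: hi_def)
lemma lo_step[simp]: "lo (3*i+1) = i" by (simp add: lo_def)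
lemma hi_step[simp]: "hi (3*i+1) = Suc i" by (simp add: hi_def)
lemma lo_edge_code[simp]: "lo (edge_code i j) = i" unfolding lo_def edge_code_def code_mod3_div3 by simp
lemma hi_edge_code[simp]: "hi (edge_code i j) = j" unfolding hi_def edge_code_def code_mod3_div3 by simp
lemma mult3_mod3[simp]: "(3*i) mod 3 = (0::nat)" by simp
lemma step_mod3[simp]: "(3*i+1) mod 3 = (1::nat)" by simp
lemma lo_mult3_Suc[simp]: "lo (3 + 3*i) = Suc i" using lo_mult3[of "Suc i"] by simp
lemma hi_mult3_Suc[simp]: "hi (3 + 3*i) = Suc i" using hi_mult3[of "Suc i"] by simp
lemma mult3_Suc_mod3[simp]: "(3 + 3*i) mod 3 = (0::nat)" by presburger
lemma lo_Suc_mult3[simp]: "lo (Suc (3*i)) = i" using lo_step by simp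
lemma hi_Suc_mult3[simp]: "hi (Suc (3*i)) = Suc i" using hi_step by simp
lemma Suc_mult3_mod3[simp]: "(Suc (3*i)) mod 3 = (1::nat)" by presburger
lemma edge_code_mod3[simp]: "edge_code i j mod 3 = 2" unfolding edge_code_def code_mod3_div3 by simp
lemma edge_code_inj[simp]: "edge_code i j = edge_code i' j' \<longleftrightarrow> i = i' \<and> j = j'"
  by (auto simp: edge_code_def dest: arg_cong[where f = prod_decode])
lemma edge_code_ne_mult3[simp]: "edge_code i j \<noteq> 3*k" "3*k \<noteq> edge_code i j"
proof -
  show "edge_code i j \<noteq> 3*k"
  proof
    assume "edge_code i j = 3*k" then have "edge_code i j mod 3 = 0" by simp
    then show False by simp
  qed
  then show "3*k \<noteq> edge_code i j" by metis
qed
lemma edge_code_ne_step[simp]: "edge_code i j \<noteq> 3*k+1" "3*k+1 \<noteq> edge_code i j"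
proof -
  show "edge_code i j \<noteq> 3*k+1"
  proof
    assume "edge_code i j = 3*k+1" then have "edge_code i j mod 3 = 1" by simp
    then show False by simp
  qed
  then show "3*k+1 \<noteq> edge_code i j" by metis
qed
lemma edge_code_ne_Suc_mult3[simp]: "edge_code i j \<noteq> Suc (3*k)" "Suc (3*k) \<noteq> edge_code i j"
  using edge_code_ne_step[of i j k] by simp_all
lemma edge_code_ne_mult3_Suc[simp]: "edge_code i j \<noteq> 3 + 3*k" "3 + 3*k \<noteq> edge_code i j"
  using edge_code_ne_mult3[of i j "Suc k"] by simp_all
lemma step_ne_mult3[simp]: "3*k+1 \<noteq> 3*(i::nat)" "3*i \<noteq> 3*k+(1::nat)" by presburger+

definition interval_carrier :: "nat \<Rightarrow> nat set \<Rightarrow> nat set" where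
  "interval_carrier n A = {3*i | i. 1 \<le> i \<and> i \<le> n} \<union> A"
definition interval_order :: "nat \<Rightarrow> nat set \<Rightarrow> (nat \<times> nat) set" where
  "interval_order n A = {(x,y). x \<in> interval_carrier n A \<and> y \<in> interval_carrier n A
     \<and> (x = y \<or> hi x \<le> lo y)}"
definition interval_poset :: "nat \<Rightarrow> nat set \<Rightarrow> poset" where
  "interval_poset n A = (interval_carrier n A, interval_order n A)"

definition proper_codes :: "nat \<Rightarrow> nat set \<Rightarrow> bool" where
  "proper_codes n A \<longleftrightarrow>
     finite A \<and> (\<forall>x\<in>A. x mod 3 \<noteq> 0 \<and> 1 \<le> lo x \<and> lo x < hi x \<and> hi x \<le> n)"

lemma interval_poset_carrier[simp]: "carrier (interval_poset n A) = interval_carrier n A"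
  by (simp add: interval_poset_def)
lemma interval_poset_ord[simp]: "ord (interval_poset n A) = interval_order n A"
  by (simp add: interval_poset_def)

locale interval_lattice =
  fixes n :: nat and A :: "nat set"
  assumes n1: "n \<ge> 1" and ok: "proper_codes n A"
begin

lemma finite_codes: "finite A" using ok by (simp add: proper_codes_def)
lemma code_props: "x \<in> A \<Longrightarrow> x mod 3 \<noteq> 0 \<and> 1 \<le> lo x \<and> lo x < hi x \<and> hi x \<le> n"
  using ok by (simp add: proper_codes_def)

lemma carrier_cases: "x \<in> interval_carrier n A \<Longrightarrow> (\<exists>i. x = 3*i \<and> 1 \<le> i \<and> i \<le> n) \<or> x \<in> A"
  by (auto simp: interval_carrier_def)

lemma mult3_in_carrier: "1 \<le> i \<Longrightarrow> i \<le> n \<Longrightarrow> 3*i \<in> interval_carrier n A"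
  by (auto simp: interval_carrier_def)
lemma code_in_carrier: "x \<in> A \<Longrightarrow> x \<in> interval_carrier n A"
  by (auto simp: interval_carrier_def)

lemma lo_hi_bounds: "x \<in> interval_carrier n A \<Longrightarrow> 1 \<le> lo x \<and> lo x \<le> hi x \<and> hi x \<le> n"
  using carrier_cases code_props by fastforce

lemma eq_mult3_lo: "x \<in> interval_carrier n A \<Longrightarrow> lo x = hi x \<Longrightarrow> x = 3 * lo x"
  using carrier_cases code_props by fastforce

lemma finite_interval_carrier: "finite (interval_carrier n A)"
proof -
  have "{3*i | i. 1 \<le> i \<and> i \<le> n} = (\<lambda>i. 3*i) ` {1..n}" by auto
  then show ?thesis using finite_codes by (simp add: interval_carrier_def)
qed

lemma interval_antisym: "x \<in> interval_carrier n A \<Longrightarrow> y \<in> interval_carrier n A \<Longrightarrow> hi x \<le> lo y \<Longrightarrow> hi y \<le> lo x \<Longrightarrow> x = y"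
proof -
  assume a: "x \<in> interval_carrier n A" "y \<in> interval_carrier n A" "hi x \<le> lo y" "hi y \<le> lo x"
  then have "lo x = hi x" "lo y = hi y" "lo x = lo y" using lo_hi_bounds[of x] lo_hi_bounds[of y] by auto
  then show "x = y" using eq_mult3_lo a by metis
qed

lemma finite_poset_interval: "finite_poset (interval_poset n A)"
  unfolding finite_poset_def
proof (intro conjI allI impI ballI)
  show "finite (carrier (interval_poset n A))" using finite_interval_carrier by simp
  show "ord (interval_poset n A) \<subseteq> carrier (interval_poset n A) \<times> carrier (interval_poset n A)"
    by (auto simp: interval_order_def)
  show "\<And>x. x \<in> carrier (interval_poset n A) \<Longrightarrow> (x,x) \<in> ord (interval_poset n A)"
    by (simp add: interval_order_def)
  show "\<And>x y. (x, y) \<in> ord (interval_poset n A) \<and> (y, x) \<in> ord (interval_poset n A) \<Longrightarrow> x = y"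
    using interval_antisym by (auto simp: interval_order_def)
  show "\<And>x y z. (x, y) \<in> ord (interval_poset n A) \<and> (y, z) \<in> ord (interval_poset n A) \<Longrightarrow> (x, z) \<in> ord (interval_poset n A)"
  proof -
    fix x y z assume "(x, y) \<in> ord (interval_poset n A) \<and> (y, z) \<in> ord (interval_poset n A)"
    then show "(x, z) \<in> ord (interval_poset n A)"
      using lo_hi_bounds[of y] by (auto simp: interval_order_def)
  qed
qed

lemma lub_incomparable:
  assumes y: "y \<in> interval_carrier n A" and z: "z \<in> interval_carrier n A"
    and inc: "y \<noteq> z" "\<not> hi y \<le> lo z" "\<not> hi z \<le> lo y"
  shows "is_lub (interval_poset n A) y z (3 * max (hi y) (hi z))"
proof -
  let ?w = "3 * max (hi y) (hi z)"
  have wC: "?w \<in> interval_carrier n A"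
    using lo_hi_bounds[OF y] lo_hi_bounds[OF z] by (intro mult3_in_carrier) (auto simp: max_def)
  show ?thesis unfolding is_lub_def
  proof (intro conjI ballI impI)
    show "?w \<in> carrier (interval_poset n A)" "(y, ?w) \<in> ord (interval_poset n A)"
      "(z, ?w) \<in> ord (interval_poset n A)" using wC y z by (auto simp: interval_order_def)
    fix v assume v: "v \<in> carrier (interval_poset n A)"
      "(y, v) \<in> ord (interval_poset n A) \<and> (z, v) \<in> ord (interval_poset n A)"
    then have "hi y \<le> lo v" "hi z \<le> lo v" using inc by (auto simp: interval_order_def)
    then show "(?w, v) \<in> ord (interval_poset n A)" using v wC by (auto simp: interval_order_def)
  qed
qed

lemma glb_incomparable:
  assumes y: "y \<in> interval_carrier n A" and z: "z \<in> interval_carrier n A"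
    and inc: "y \<noteq> z" "\<not> hi y \<le> lo z" "\<not> hi z \<le> lo y"
  shows "is_glb (interval_poset n A) y z (3 * min (lo y) (lo z))"
proof -
  let ?w = "3 * min (lo y) (lo z)"
  have wC: "?w \<in> interval_carrier n A"
    using lo_hi_bounds[OF y] lo_hi_bounds[OF z] by (intro mult3_in_carrier) (auto simp: min_def)
  show ?thesis unfolding is_glb_def
  proof (intro conjI ballI impI)
    show "?w \<in> carrier (interval_poset n A)" "(?w, y) \<in> ord (interval_poset n A)"
      "(?w, z) \<in> ord (interval_poset n A)" using wC y z by (auto simp: interval_order_def)
    fix v assume v: "v \<in> carrier (interval_poset n A)"
      "(v, y) \<in> ord (interval_poset n A) \<and> (v, z) \<in> ord (interval_poset n A)"
    then have "hi v \<le> lo y" "hi v \<le> lo z" using inc by (auto simp: interval_order_def)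
    then show "(v, ?w) \<in> ord (interval_poset n A)" using v wC by (auto simp: interval_order_def)
  qed
qed

lemma lub_exists:
  assumes y: "y \<in> interval_carrier n A" and z: "z \<in> interval_carrier n A"
  shows "\<exists>w. is_lub (interval_poset n A) y z w"
proof (cases "(y,z) \<in> interval_order n A \<or> (z,y) \<in> interval_order n A")
  case True
  then show ?thesis
  proof
    assume "(y,z) \<in> interval_order n A"
    then have "is_lub (interval_poset n A) y z z"
      using z unfolding is_lub_def by (auto simp: interval_order_def)
    then show ?thesis by blast
  next
    assume "(z,y) \<in> interval_order n A"
    then have "is_lub (interval_poset n A) y z y"
      using y unfolding is_lub_def by (auto simp: interval_order_def)
    then show ?thesis by blast
  qed
next
  case False
  then show ?thesis using lub_incomparable y z by (auto simp: interval_order_def)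
qed

lemma glb_exists:
  assumes y: "y \<in> interval_carrier n A" and z: "z \<in> interval_carrier n A"
  shows "\<exists>w. is_glb (interval_poset n A) y z w"
proof (cases "(y,z) \<in> interval_order n A \<or> (z,y) \<in> interval_order n A")
  case True
  then show ?thesis
  proof
    assume "(y,z) \<in> interval_order n A"
    then have "is_glb (interval_poset n A) y z y"
      using y unfolding is_glb_def by (auto simp: interval_order_def)
    then show ?thesis by blast
  next
    assume "(z,y) \<in> interval_order n A"
    then have "is_glb (interval_poset n A) y z z"
      using z unfolding is_glb_def by (auto simp: interval_order_def)
    then show ?thesis by blast
  qed
next
  case False
  then show ?thesis using glb_incomparable y z by (auto simp: interval_order_def)
qed

lemma finite_lattice_interval: "finite_lattice (interval_poset n A)"
  unfolding finite_lattice_def using finite_poset_interval lub_exists glb_exists mult3_in_carrier[of 1] n1 by auto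

lemma reducible_lub_incomparable:
  assumes y: "y \<in> interval_carrier n A" and z: "z \<in> interval_carrier n A"
    and inc: "y \<noteq> z" "\<not> hi y \<le> lo z" "\<not> hi z \<le> lo y"
  shows "reducible (interval_poset n A) (3 * max (hi y) (hi z))" (is "reducible _ ?w")
proof -
  have "w \<noteq> ?w" if "w = y \<or> w = z" for w
  proof
    assume "w = ?w"
    then have "lo w = max (hi y) (hi z)" by (metis lo_mult3)
    then show False using that inc by (auto simp: max_def split: if_splits)
  qed
  from this[of y] this[of z] have ne: "y \<noteq> ?w" "z \<noteq> ?w" by simp_all
  have l: "is_lub (interval_poset n A) y z ?w" by (rule lub_incomparable[OF y z inc])
  then have "?w \<in> carrier (interval_poset n A)" unfolding is_lub_def by blast
  moreover have "\<exists>y'\<in>carrier (interval_poset n A). \<exists>z'\<in>carrier (interval_poset n A).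
      y' \<noteq> ?w \<and> z' \<noteq> ?w \<and> (is_lub (interval_poset n A) y' z' ?w \<or> is_glb (interval_poset n A) y' z' ?w)"
    using y z ne l by (intro bexI[of _ y] bexI[of _ z]) auto
  ultimately show ?thesis unfolding reducible_def by blast
qed

lemma reducible_glb_incomparable:
  assumes y: "y \<in> interval_carrier n A" and z: "z \<in> interval_carrier n A"
    and inc: "y \<noteq> z" "\<not> hi y \<le> lo z" "\<not> hi z \<le> lo y"
  shows "reducible (interval_poset n A) (3 * min (lo y) (lo z))" (is "reducible _ ?w")
proof -
  have "w \<noteq> ?w" if "w = y \<or> w = z" for w
  proof
    assume "w = ?w"
    then have "hi w = min (lo y) (lo z)" by (metis hi_mult3)
    then show False using that inc by (auto simp: min_def split: if_splits)
  qed
  from this[of y] this[of z] have ne: "y \<noteq> ?w" "z \<noteq> ?w" by simp_all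
  have g: "is_glb (interval_poset n A) y z ?w" by (rule glb_incomparable[OF y z inc])
  then have "?w \<in> carrier (interval_poset n A)" unfolding is_glb_def by blast
  moreover have "\<exists>y'\<in>carrier (interval_poset n A). \<exists>z'\<in>carrier (interval_poset n A).
      y' \<noteq> ?w \<and> z' \<noteq> ?w \<and> (is_lub (interval_poset n A) y' z' ?w \<or> is_glb (interval_poset n A) y' z' ?w)"
    using y z ne g by (intro bexI[of _ y] bexI[of _ z]) auto
  ultimately show ?thesis unfolding reducible_def by blast
qed

end

lemma proper_codes_subset: "proper_codes n B \<Longrightarrow> C \<subseteq> B \<Longrightarrow> proper_codes n C"
  unfolding proper_codes_def using finite_subset by blast

lemma is_chain_singleton: "is_chain ({x},{(x,x)})"
  unfolding is_chain_def finite_lattice_def finite_poset_def is_lub_def is_glb_def by auto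

section \<open>The lattice of a graph\<close>

definition edge_pairs :: "nat set set \<Rightarrow> (nat \<times> nat) set" where
  "edge_pairs G = {(i,j). i < j \<and> {i,j} \<in> G}"
definition step_codes :: "nat set set \<Rightarrow> nat set" where
  "step_codes G = {3*i+1 | i. (i, Suc i) \<in> edge_pairs G}"
definition edge_codes :: "nat set set \<Rightarrow> nat set" where
  "edge_codes G = {edge_code i j | i j. (i,j) \<in> edge_pairs G}"
definition graph_lattice :: "nat \<Rightarrow> nat set set \<Rightarrow> poset" where
  "graph_lattice n G = interval_poset n (step_codes G \<union> edge_codes G)"

definition red_rank :: "poset \<Rightarrow> nat \<Rightarrow> nat" where
  "red_rank P r = card {r'\<in>carrier P. reducible P r' \<and> (r',r) \<in> ord P}"
definition irreducible_pairs :: "poset \<Rightarrow> (nat \<times> nat) set" where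
  "irreducible_pairs P = {(red_rank P a, red_rank P b) | a x b.
     x \<in> carrier P \<and> \<not> reducible P x \<and> covers P a x \<and> covers P x b}"

lemma adjunct_singleton_code:
  assumes x: "x \<notin> interval_carrier n B" "lo x = i" "hi x = j" and ij: "1 \<le> i" "i < j" "j \<le> n"
  shows "adjunct (interval_poset n B) (3*i) (3*j) ({x},{(x,x)}) = interval_poset n (B \<union> {x})"
proof -
  have c: "interval_carrier n (B \<union> {x}) = interval_carrier n B \<union> {x}"
    by (auto simp: interval_carrier_def)
  have iC: "3*i \<in> interval_carrier n B" "3*j \<in> interval_carrier n B"
    using ij x(2,3) by (auto simp: interval_carrier_def)
  have "ord (adjunct (interval_poset n B) (3*i) (3*j) ({x},{(x,x)})) = interval_order n (B \<union> {x})"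
  proof (rule set_eqI, clarify)
    fix y z
    show "(y,z) \<in> ord (adjunct (interval_poset n B) (3*i) (3*j) ({x},{(x,x)})) \<longleftrightarrow> (y,z) \<in> interval_order n (B \<union> {x})"
      unfolding adjunct_def interval_poset_carrier interval_poset_ord interval_order_def c using x iC by auto
  qed
  then show ?thesis using c by (simp add: adjunct_def interval_poset_def)
qed

fun edge_adjunct :: "nat \<times> nat \<Rightarrow> nat \<times> nat \<times> poset" where
  "edge_adjunct (i,j) = (3*i, 3*j, ({edge_code i j}, {(edge_code i j, edge_code i j)}))"

definition fibre_size :: "nat \<Rightarrow> (nat \<times> nat) set \<Rightarrow> nat \<times> nat \<Rightarrow> nat" where
  "fibre_size n E v = (if fst v = snd v then (if 1 \<le> fst v \<and> fst v \<le> n then 1 else 0)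
     else if v \<in> E then (if snd v = Suc (fst v) then 2 else 1) else 0)"

lemma inj_on_doubleton:
  assumes "\<forall>e\<in>E. fst e < snd e" shows "inj_on (\<lambda>(i,j). {i,j::'a::linorder}) E"
proof (rule inj_onI, clarify)
  fix a b a' b' assume "(a,b) \<in> E" "(a',b') \<in> E" "{a,b} = {a',b'}"
  moreover have "a < b" "a' < b'" using calculation(1,2) assms by auto
  ultimately show "a = a' \<and> b = b'" by (metis doubleton_eq_iff less_asym)
qed

lemma edge_pairs_image:
  assumes "\<forall>e\<in>E. fst e < snd e"
  shows "edge_pairs ((\<lambda>(i,j). {i,j}) ` E) = E"
proof
  show "edge_pairs ((\<lambda>(i,j). {i,j}) ` E) \<subseteq> E"
  proof clarify
    fix i j assume "(i,j) \<in> edge_pairs ((\<lambda>(i,j). {i,j}) ` E)"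
    then obtain a b where "i < j" "{i,j} = {a,b}" "(a,b) \<in> E" unfolding edge_pairs_def by auto
    moreover then have "a < b" using assms by auto
    ultimately show "(i,j) \<in> E" by (metis doubleton_eq_iff less_asym)
  qed
  show "E \<subseteq> edge_pairs ((\<lambda>(i,j). {i,j}) ` E)"
    using assms unfolding edge_pairs_def by force
qed

locale graph_construction =
  fixes n l :: nat and G :: "nat set set"
  assumes G: "G \<in> D_graphs n l" and n1: "n \<ge> 1"
begin

abbreviation pairs :: "(nat \<times> nat) set" where "pairs \<equiv> edge_pairs G"
abbreviation irr_codes :: "nat set" where "irr_codes \<equiv> step_codes G \<union> edge_codes G"

lemma G_edges: "G \<subseteq> {{i,j} | i j. 1 \<le> i \<and> i < j \<and> j \<le> n}"
  using G by (simp add: D_graphs_def)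
lemma G_card: "card G = l" using G by (simp add: D_graphs_def)
lemma G_no_isolated: "\<forall>v\<in>{1..n}. \<exists>e\<in>G. v \<in> e"
  using G by (simp add: D_graphs_def)

lemma pairs_bounds: "(i,j) \<in> pairs \<Longrightarrow> 1 \<le> i \<and> i < j \<and> j \<le> n"
proof -
  assume a: "(i,j) \<in> pairs"
  then have "i < j" "{i,j} \<in> G" by (auto simp: edge_pairs_def)
  then obtain i' j' where "{i,j} = {i',j'}" "1 \<le> i'" "i' < j'" "j' \<le> n" using G_edges by blast
  then show ?thesis using \<open>i < j\<close> by (metis doubleton_eq_iff less_asym)
qed

lemma finite_pairs: "finite pairs"
  by (rule finite_subset[of _ "{1..n} \<times> {1..n}"]) (auto dest: pairs_bounds)

lemma G_eq_image: "G = (\<lambda>(i,j). {i,j}) ` pairs"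
proof
  show "G \<subseteq> (\<lambda>(i,j). {i,j}) ` pairs"
  proof
    fix e assume "e \<in> G"
    then obtain i j where "e = {i,j}" "1 \<le> i" "i < j" "j \<le> n" using G_edges by blast
    then have "(i,j) \<in> pairs" using \<open>e \<in> G\<close> by (auto simp: edge_pairs_def)
    then show "e \<in> (\<lambda>(i,j). {i,j}) ` pairs" using \<open>e = {i,j}\<close> by force
  qed
  show "(\<lambda>(i,j). {i,j}) ` pairs \<subseteq> G" by (auto simp: edge_pairs_def)
qed

lemma card_pairs: "card pairs = l"
proof -
  have "inj_on (\<lambda>(i,j). {i,j}) pairs" by (rule inj_on_doubleton) (auto simp: edge_pairs_def)
  then show ?thesis using G_card G_eq_image card_image by metis
qed

lemma proper_irr_codes: "proper_codes n irr_codes"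
  unfolding proper_codes_def
proof (intro conjI)
  have "step_codes G = (\<lambda>(i,j). 3*i+1) ` {e\<in>pairs. snd e = Suc (fst e)}"
    by (force simp: step_codes_def)
  moreover have "edge_codes G = (\<lambda>(i,j). edge_code i j) ` pairs" by (force simp: edge_codes_def)
  ultimately show "finite irr_codes" using finite_pairs by simp
  show "\<forall>x\<in>irr_codes. x mod 3 \<noteq> 0 \<and> 1 \<le> lo x \<and> lo x < hi x \<and> hi x \<le> n"
    by (auto simp: step_codes_def edge_codes_def dest: pairs_bounds)
qed

sublocale interval_lattice n irr_codes using n1 proper_irr_codes by unfold_locales

abbreviation L :: poset where "L \<equiv> graph_lattice n G"

lemma L_eq: "L = interval_poset n irr_codes" by (simp add: graph_lattice_def)

interpretation LL: fin_lattice L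
  unfolding L_eq using finite_lattice_interval by (simp add: fin_lattice_of)

lemma finite_lattice_L: "finite_lattice L" unfolding L_eq using finite_lattice_interval .

lemma code_lower_cover:
  assumes x: "x \<in> irr_codes"
  shows "covers L (3 * lo x) x"
    and "covers L u x \<Longrightarrow> u = 3 * lo x"
proof -
  have xC: "x \<in> interval_carrier n irr_codes" using x code_in_carrier by blast
  have p: "3 * lo x \<in> interval_carrier n irr_codes"
    using lo_hi_bounds[OF xC] by (intro mult3_in_carrier) auto
  have xp: "x \<noteq> 3 * lo x" using code_props[OF x] by (metis mult3_mod3)
  have nz: "\<not>(\<exists>z. (3 * lo x,z) \<in> interval_order n irr_codes \<and> (z,x) \<in> interval_order n irr_codes \<and> z \<noteq> 3 * lo x \<and> z \<noteq> x)"
  proof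
    assume "\<exists>z. (3 * lo x,z) \<in> interval_order n irr_codes \<and> (z,x) \<in> interval_order n irr_codes \<and> z \<noteq> 3 * lo x \<and> z \<noteq> x"
    then obtain z where z: "(3 * lo x,z) \<in> interval_order n irr_codes" "(z,x) \<in> interval_order n irr_codes" "z \<noteq> 3 * lo x" "z \<noteq> x"
      by blast
    then have zC: "z \<in> interval_carrier n irr_codes" "lo x \<le> lo z" "hi z \<le> lo x"
      by (auto simp: interval_order_def)
    then have "lo z = hi z" "lo z = lo x" using lo_hi_bounds[OF zC(1)] by linarith+
    then have "z = 3 * lo x" using eq_mult3_lo zC by metis
    then show False using z by simp
  qed
  show "covers L (3 * lo x) x"
    unfolding covers_def L_eq using p xC xp nz by (simp add: interval_order_def)
  assume c: "covers L u x"
  then have u: "u \<in> interval_carrier n irr_codes" "u \<noteq> x" "hi u \<le> lo x"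
    unfolding covers_def L_eq by (auto simp: interval_order_def)
  show "u = 3 * lo x"
  proof (rule ccontr)
    assume ne: "u \<noteq> 3 * lo x"
    have o: "(u, 3 * lo x) \<in> ord L" "(3 * lo x, x) \<in> ord L"
      using u p xC unfolding L_eq by (auto simp: interval_order_def)
    have nc: "\<not>(\<exists>z. (u,z) \<in> ord L \<and> (z,x) \<in> ord L \<and> z \<noteq> u \<and> z \<noteq> x)"
      using c by (simp add: covers_def)
    have "(u, 3 * lo x) \<in> ord L \<and> (3 * lo x, x) \<in> ord L \<and> 3 * lo x \<noteq> u \<and> 3 * lo x \<noteq> x"
      using o ne xp by simp
    then show False using nc by blast
  qed
qed

lemma code_upper_cover:
  assumes x: "x \<in> irr_codes"
  shows "covers L x (3 * hi x)"
    and "covers L x u \<Longrightarrow> u = 3 * hi x"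
proof -
  have xC: "x \<in> interval_carrier n irr_codes" using x code_in_carrier by blast
  have p: "3 * hi x \<in> interval_carrier n irr_codes"
    using lo_hi_bounds[OF xC] by (intro mult3_in_carrier) auto
  have xp: "x \<noteq> 3 * hi x" using code_props[OF x] by (metis mult3_mod3)
  have nz: "\<not>(\<exists>z. (x,z) \<in> interval_order n irr_codes \<and> (z,3 * hi x) \<in> interval_order n irr_codes \<and> z \<noteq> x \<and> z \<noteq> 3 * hi x)"
  proof
    assume "\<exists>z. (x,z) \<in> interval_order n irr_codes \<and> (z,3 * hi x) \<in> interval_order n irr_codes \<and> z \<noteq> x \<and> z \<noteq> 3 * hi x"
    then obtain z where z: "(x,z) \<in> interval_order n irr_codes" "(z,3 * hi x) \<in> interval_order n irr_codes" "z \<noteq> x" "z \<noteq> 3 * hi x"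
      by blast
    then have zC: "z \<in> interval_carrier n irr_codes" "hi x \<le> lo z" "hi z \<le> hi x"
      by (auto simp: interval_order_def)
    then have "lo z = hi z" "lo z = hi x" using lo_hi_bounds[OF zC(1)] by linarith+
    then have "z = 3 * hi x" using eq_mult3_lo zC by metis
    then show False using z by simp
  qed
  show "covers L x (3 * hi x)"
    unfolding covers_def L_eq using p xC xp nz by (simp add: interval_order_def)
  assume c: "covers L x u"
  then have u: "u \<in> interval_carrier n irr_codes" "u \<noteq> x" "hi x \<le> lo u"
    unfolding covers_def L_eq by (auto simp: interval_order_def)
  show "u = 3 * hi x"
  proof (rule ccontr)
    assume ne: "u \<noteq> 3 * hi x"
    have o: "(3 * hi x, u) \<in> ord L" "(x, 3 * hi x) \<in> ord L"
      using u p xC unfolding L_eq by (auto simp: interval_order_def)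
    have nc: "\<not>(\<exists>z. (x,z) \<in> ord L \<and> (z,u) \<in> ord L \<and> z \<noteq> x \<and> z \<noteq> u)"
      using c by (simp add: covers_def)
    have "(x, 3 * hi x) \<in> ord L \<and> (3 * hi x, u) \<in> ord L \<and> 3 * hi x \<noteq> x \<and> 3 * hi x \<noteq> u"
      using o ne xp by simp
    then show False using nc by blast
  qed
qed

lemma code_di: "x \<in> irr_codes \<Longrightarrow> doubly_irreducible L x"
proof -
  assume x: "x \<in> irr_codes"
  have "{y. covers L x y} \<subseteq> {3 * hi x}" using code_upper_cover(2)[OF x] by blast
  then have u: "card {y. covers L x y} \<le> 1" using card_mono[of "{3 * hi x}"] by fastforce
  have "{y. covers L y x} \<subseteq> {3 * lo x}" using code_lower_cover(2)[OF x] by blast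
  then have l: "card {y. covers L y x} \<le> 1" using card_mono[of "{3 * lo x}"] by fastforce
  show ?thesis unfolding doubly_irreducible_def using u l x code_in_carrier L_eq by simp
qed

lemma code_irreducible: "x \<in> irr_codes \<Longrightarrow> \<not> reducible L x"
  using LL.reducible_not_di code_di by blast

lemma step_codes_iff: "y \<in> step_codes G \<longleftrightarrow> (\<exists>i. y = 3*i+1 \<and> (i, Suc i) \<in> pairs)"
  by (auto simp: step_codes_def)
lemma edge_codes_iff: "y \<in> edge_codes G \<longleftrightarrow> (\<exists>i j. y = edge_code i j \<and> (i, j) \<in> pairs)"
  by (auto simp: edge_codes_def)

lemma mult3_reducible: assumes i: "1 \<le> i" "i \<le> n" shows "reducible L (3*i)"
proof -
  have "i \<in> {1..n}" using i by simp
  then obtain e where e: "e \<in> G" "i \<in> e" using G_no_isolated by blast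
  have "e \<in> (\<lambda>(i,j). {i,j}) ` pairs" using e G_eq_image by simp
  then obtain a b where ab: "(a,b) \<in> pairs" "i = a \<or> i = b" using e by auto
  have abd: "1 \<le> a" "a < b" "b \<le> n" using pairs_bounds[OF ab(1)] by auto
  let ?x = "edge_code a b"
  have x: "?x \<in> interval_carrier n irr_codes" using ab(1) code_in_carrier by (auto simp: edge_codes_def)
  define w where "w = (if b = Suc a then 3*a+1 else 3 * Suc a)"
  define w' where "w' = (if b = Suc a then 3*a+1 else 3 * (b - 1))"
  have "3 * Suc a \<in> interval_carrier n irr_codes" by (rule mult3_in_carrier) (use abd in auto)
  moreover have "3 * (b - 1) \<in> interval_carrier n irr_codes" by (rule mult3_in_carrier) (use abd in auto)
  ultimately have w: "w \<in> interval_carrier n irr_codes" "w' \<in> interval_carrier n irr_codes"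
    using ab(1) code_in_carrier unfolding w_def w'_def by (auto simp: step_codes_def)
  have "reducible L (3 * min (lo ?x) (lo w))"
    using reducible_glb_incomparable[OF x w(1)] abd unfolding w_def L_eq by (cases "b = Suc a") auto
  moreover have "reducible L (3 * max (hi ?x) (hi w'))"
    using reducible_lub_incomparable[OF x w(2)] abd unfolding w'_def L_eq by (cases "b = Suc a") auto
  moreover have "min (lo ?x) (lo w) = a" "max (hi ?x) (hi w') = b"
    using abd unfolding w_def w'_def by auto
  ultimately show ?thesis using ab(2) by auto
qed

lemma non_code_is_mult3: "x \<in> interval_carrier n irr_codes \<Longrightarrow> x \<notin> irr_codes \<Longrightarrow> \<exists>i. x = 3*i \<and> 1 \<le> i \<and> i \<le> n"
  using carrier_cases by blast

lemma reducibles_L: "{x \<in> carrier L. reducible L x} = (\<lambda>i. 3*i) ` {1..n}"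
proof
  show "{x \<in> carrier L. reducible L x} \<subseteq> (\<lambda>i. 3*i) ` {1..n}"
  proof clarify
    fix x assume "x \<in> carrier L" "reducible L x"
    then have "x \<in> interval_carrier n irr_codes" "x \<notin> irr_codes"
      using code_irreducible L_eq by auto
    then show "x \<in> (\<lambda>i. 3*i) ` {1..n}" using non_code_is_mult3 by fastforce
  qed
  show "(\<lambda>i. 3*i) ` {1..n} \<subseteq> {x \<in> carrier L. reducible L x}"
    using mult3_reducible mult3_in_carrier L_eq by auto
qed

lemma num_reducible_L: "num_reducible L = n"
proof -
  have "inj_on (\<lambda>i::nat. 3*i) {1..n}" by (auto simp: inj_on_def)
  then show ?thesis unfolding num_reducible_def reducibles_L by (simp add: card_image)
qed

lemma RC_lattice_L: "RC_lattice L"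
  unfolding RC_lattice_def
proof (intro conjI allI impI)
  show "finite_lattice L" by (rule finite_lattice_L)
  fix x y assume "reducible L x \<and> reducible L y"
  then have "x \<in> {x \<in> carrier L. reducible L x}" "y \<in> {x \<in> carrier L. reducible L x}"
    by (auto simp: reducible_def)
  then obtain i j where "x = 3*i" "y = 3*j" "1 \<le> i" "i \<le> n" "1 \<le> j" "j \<le> n"
    unfolding reducibles_L by auto
  then show "comparable L x y"
    unfolding comparable_def L_eq using mult3_in_carrier by (auto simp: interval_order_def)
qed

lemma di_code: assumes di: "doubly_irreducible L x" shows "x \<in> irr_codes"
proof (rule ccontr)
  assume "x \<notin> irr_codes"
  moreover have "x \<in> interval_carrier n irr_codes" using di L_eq by (simp add: doubly_irreducible_def)
  ultimately obtain i where "x = 3*i" "1 \<le> i" "i \<le> n" using non_code_is_mult3 by blast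
  then show False using mult3_reducible di LL.reducible_not_di by blast
qed

lemma code_interval_nontrivial:
  assumes x: "x \<in> irr_codes" shows "\<exists>w. w \<noteq> x \<and> strictly_between L (3 * lo x) (3 * hi x) w"
proof -
  obtain w where w: "w \<in> interval_carrier n irr_codes" "w \<noteq> x" "lo x \<le> lo w" "hi w \<le> hi x"
    "w \<noteq> 3 * lo x" "w \<noteq> 3 * hi x"
  proof (cases "x \<in> step_codes G")
    case True
    then obtain i where i: "x = 3*i+1" "(i, Suc i) \<in> pairs" by (auto simp: step_codes_iff)
    have "edge_code i (Suc i) \<in> interval_carrier n irr_codes"
      using i code_in_carrier by (auto simp: edge_codes_iff)
    then show ?thesis using that i by simp
  next
    case False
    then obtain i j where ij: "x = edge_code i j" "(i,j) \<in> pairs" using x by (auto simp: edge_codes_iff)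
    show ?thesis
    proof (cases "j = Suc i")
      case True
      have "3*i+1 \<in> interval_carrier n irr_codes"
        using ij True code_in_carrier by (auto simp: step_codes_iff)
      then show ?thesis using that ij True by simp
    next
      case False
      then have "Suc i < j" "1 \<le> Suc i" "Suc i \<le> n" using pairs_bounds[OF ij(2)] by auto
      moreover have "3 * Suc i \<in> interval_carrier n irr_codes" by (rule mult3_in_carrier) fact+
      ultimately show ?thesis using that ij by simp
    qed
  qed
  have "3 * lo x \<in> interval_carrier n irr_codes" "3 * hi x \<in> interval_carrier n irr_codes"
    using lo_hi_bounds[OF code_in_carrier[OF x]] by (auto intro: mult3_in_carrier)
  then have "strictly_between L (3 * lo x) (3 * hi x) w"
    using w unfolding strictly_between_def L_eq by (auto simp: interval_order_def)
  then show ?thesis using w(2) by blast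
qed

lemma basic_block_L: "basic_block L"
proof -
  have "nullity (remove_elem L x) = nullity L - 1" if di: "doubly_irreducible L x" for x
    using LL.nullity_remove_middle[OF di code_lower_cover(1) code_upper_cover(1)]
      di_code[OF di] code_interval_nontrivial by simp
  then show ?thesis unfolding basic_block_def by blast
qed

lemma interval_lattice_spine: "interval_lattice n (step_codes G)"
  using n1 proper_codes_subset[OF proper_irr_codes] by unfold_locales auto

lemma spine_shape: "x \<in> interval_carrier n (step_codes G) \<Longrightarrow> (x = 3 * lo x \<and> hi x = lo x) \<or> (x = 3 * lo x + 1 \<and> hi x = Suc (lo x))"
proof -
  assume x: "x \<in> interval_carrier n (step_codes G)"
  from interval_lattice.carrier_cases[OF interval_lattice_spine x] consider (R) i where "x = 3*i" | (C) i where "x = Suc (3*i)"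
    by (auto simp: step_codes_iff)
  then show ?thesis by cases auto
qed

lemma spine_total:
  assumes x: "x \<in> interval_carrier n (step_codes G)" and y: "y \<in> interval_carrier n (step_codes G)"
  shows "x = y \<or> hi x \<le> lo y \<or> hi y \<le> lo x"
proof (rule ccontr)
  assume "\<not> (x = y \<or> hi x \<le> lo y \<or> hi y \<le> lo x)"
  then have h: "x \<noteq> y" "lo y < hi x" "lo x < hi y" by auto
  have "lo x = lo y \<and> hi x = Suc (lo x) \<and> hi y = Suc (lo y)"
    using spine_shape[OF x] spine_shape[OF y] h by auto
  then show False using spine_shape[OF x] spine_shape[OF y] h by auto
qed

lemma is_chain_spine: "is_chain (interval_poset n (step_codes G))"
  unfolding is_chain_def using interval_lattice.finite_lattice_interval[OF interval_lattice_spine] spine_total by (auto simp: interval_order_def)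

lemma not_covers_edge_ends:
  assumes ij: "(i,j) \<in> pairs" and B: "step_codes G \<subseteq> B" "B \<subseteq> irr_codes"
  shows "\<not> covers (interval_poset n B) (3*i) (3*j)"
proof -
  interpret SB: interval_lattice n B using n1 proper_codes_subset[OF proper_irr_codes B(2)] by unfold_locales
  have bd: "1 \<le> i" "i < j" "j \<le> n" using pairs_bounds[OF ij] by auto
  let ?z = "if j = Suc i then 3*i+1 else 3 * Suc i"
  have "3*i+1 \<in> step_codes G" if "j = Suc i" using ij that by (auto simp: step_codes_iff)
  then have "?z \<in> interval_carrier n B"
    using B(1) bd SB.code_in_carrier SB.mult3_in_carrier[of "Suc i"] by auto
  moreover have "3*i \<in> interval_carrier n B" "3*j \<in> interval_carrier n B"
    using bd by (auto intro: SB.mult3_in_carrier)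
  ultimately have "strictly_between (interval_poset n B) (3*i) (3*j) ?z"
    using bd unfolding strictly_between_def by (auto simp: interval_order_def)
  then show ?thesis unfolding covers_iff_between by blast
qed

lemma adjunct_edges:
  assumes "distinct ps" "set ps \<subseteq> pairs" "step_codes G \<subseteq> B" "B \<subseteq> irr_codes"
    "\<forall>(i,j)\<in>set ps. edge_code i j \<notin> B"
  shows "valid_adjunct_list (interval_poset n B) (map edge_adjunct ps)
    \<and> adjunct_list (interval_poset n B) (map edge_adjunct ps)
        = interval_poset n (B \<union> {edge_code i j | i j. (i,j) \<in> set ps})"
  using assms
proof (induction ps arbitrary: B)
  case Nil then show ?case by simp
next
  case (Cons e ps)
  obtain i j where e: "e = (i,j)" by (cases e)
  let ?x = "edge_code i j"
  have ij: "(i,j) \<in> pairs" using Cons.prems e by auto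
  have bd: "1 \<le> i" "i < j" "j \<le> n" using pairs_bounds[OF ij] by auto
  interpret SB: interval_lattice n B using n1 proper_codes_subset[OF proper_irr_codes Cons.prems(4)] by unfold_locales
  have xS: "?x \<notin> interval_carrier n B" using Cons.prems e by (auto simp: interval_carrier_def)
  have iS: "3*i \<in> interval_carrier n B" "3*j \<in> interval_carrier n B"
    using bd by (auto intro: SB.mult3_in_carrier)
  have step: "adjunct (interval_poset n B) (3*i) (3*j) ({?x},{(?x,?x)}) = interval_poset n (B \<union> {?x})"
    using adjunct_singleton_code[OF xS _ _ bd(1) bd(2) bd(3)] by simp
  have "distinct ps" "set ps \<subseteq> pairs" "step_codes G \<subseteq> B \<union> {?x}" "B \<union> {?x} \<subseteq> irr_codes"
    "\<forall>(i',j')\<in>set ps. edge_code i' j' \<notin> B \<union> {?x}"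
    using Cons.prems e ij by (auto simp: edge_codes_iff)
  note IH = Cons.IH[OF this]
  have "valid_adjunct_list (interval_poset n B) (map edge_adjunct (e # ps))"
    using e SB.finite_lattice_interval is_chain_singleton xS iS bd IH step
      not_covers_edge_ends[OF ij Cons.prems(3,4)] by (auto simp: interval_order_def)
  moreover have "(B \<union> {?x}) \<union> {edge_code i j | i j. (i,j) \<in> set ps}
      = B \<union> {edge_code i j | i j. (i,j) \<in> set (e # ps)}"
    using e by auto
  ultimately show ?case using e IH step by simp
qed

definition edge_list :: "(nat \<times> nat) list" where
  "edge_list = (SOME ps. set ps = pairs \<and> distinct ps)"
lemma edge_list_props: "set edge_list = pairs" "distinct edge_list"
  using someI_ex[OF finite_distinct_list[OF finite_pairs]] unfolding edge_list_def by auto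
abbreviation spine :: poset where "spine \<equiv> interval_poset n (step_codes G)"
abbreviation edge_adjuncts :: "(nat \<times> nat \<times> poset) list" where "edge_adjuncts \<equiv> map edge_adjunct edge_list"

lemma valid_spine_adjuncts: "valid_adjunct_list spine edge_adjuncts"
    and adjunct_list_spine: "adjunct_list spine edge_adjuncts = L"
proof -
  have "\<forall>(i,j)\<in>set edge_list. edge_code i j \<notin> step_codes G" by (auto simp: step_codes_iff)
  then have r: "valid_adjunct_list spine edge_adjuncts \<and> adjunct_list spine edge_adjuncts = interval_poset n (step_codes G \<union> {edge_code i j | i j. (i,j) \<in> set edge_list})"
    using adjunct_edges[of edge_list "step_codes G"] edge_list_props by auto
  have "{edge_code i j | i j. (i,j) \<in> set edge_list} = edge_codes G"
    using edge_list_props by (auto simp: edge_codes_iff)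
  then show "valid_adjunct_list spine edge_adjuncts" "adjunct_list spine edge_adjuncts = L"
    using r L_eq by auto
qed

lemma maximal_chain_spine: "maximal_chain L (interval_carrier n (step_codes G))"
  unfolding maximal_chain_def
proof (intro conjI allI impI)
  show "interval_carrier n (step_codes G) \<subseteq> carrier L"
    using L_eq by (auto simp: interval_carrier_def)
  show "\<forall>x\<in>interval_carrier n (step_codes G). \<forall>y\<in>interval_carrier n (step_codes G). comparable L x y"
    using spine_total L_eq by (auto simp: comparable_def interval_order_def interval_carrier_def)
  fix T assume T: "interval_carrier n (step_codes G) \<subset> T \<and> T \<subseteq> carrier L"
  then obtain t where t: "t \<in> T" "t \<notin> interval_carrier n (step_codes G)" by blast
  then have "t \<in> edge_codes G" using T L_eq by (auto simp: interval_carrier_def)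
  then obtain i j where ij: "t = edge_code i j" "(i,j) \<in> pairs" by (auto simp: edge_codes_iff)
  have bd: "1 \<le> i" "i < j" "j \<le> n" using pairs_bounds[OF ij(2)] by auto
  let ?w = "if j = Suc i then 3*i+1 else 3 * Suc i"
  have wS: "?w \<in> interval_carrier n (step_codes G)"
  proof (cases "j = Suc i")
    case True then show ?thesis using ij by (auto simp: step_codes_iff interval_carrier_def)
  next
    case False then show ?thesis using bd interval_lattice.mult3_in_carrier[OF interval_lattice_spine, of "Suc i"]
      by simp
  qed
  have "\<not> comparable L t ?w" using ij bd L_eq unfolding comparable_def by (auto simp: interval_order_def)
  then show "\<not> (\<forall>x\<in>T. \<forall>y\<in>T. comparable L x y)" using t wS T by blast
qed

lemma representation_L: "adjunct_representation L spine edge_adjuncts" "distinct (map (\<lambda>(a,b,C). (a,b)) edge_adjuncts)"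
proof -
  show "adjunct_representation L spine edge_adjuncts"
    unfolding adjunct_representation_def using is_chain_spine valid_spine_adjuncts adjunct_list_spine maximal_chain_spine by simp
  have eq: "map (\<lambda>(a,b,C). (a,b)) (map edge_adjunct ys) = map (\<lambda>(i,j). (3*i, 3*j)) ys" for ys
    by (induction ys) auto
  have "inj_on (\<lambda>(i,j). (3*i::nat, 3*j::nat)) (set edge_list)" by (auto simp: inj_on_def)
  then have "distinct (map (\<lambda>(i,j). (3*i::nat, 3*j::nat)) edge_list)"
    using edge_list_props by (simp add: distinct_map)
  then show "distinct (map (\<lambda>(a,b,C). (a,b)) edge_adjuncts)" by (simp only: eq)
qed

lemma nullity_L: "nullity L = int l"
proof -
  interpret C: fin_lattice spine using is_chain_spine by (simp add: is_chain_def fin_lattice_of)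
  have "nullity spine = 0" using C.nullity_chain is_chain_spine by (simp add: is_chain_def)
  moreover have "nullity (adjunct_list spine edge_adjuncts) = nullity spine + int (length edge_adjuncts)"
    using nullity_adjunct_list[OF valid_spine_adjuncts] is_chain_spine adjunct_list_spine finite_lattice_L by (simp add: is_chain_def)
  moreover have "length edge_adjuncts = l" using edge_list_props card_pairs distinct_card by fastforce
  ultimately show ?thesis using adjunct_list_spine by simp
qed

lemma L_in_FBB: "L \<in> FBB n (int l)"
  unfolding FBB_def fundamental_basic_block_def using RC_lattice_L basic_block_L representation_L num_reducible_L nullity_L by blast

lemma red_rank_mult3: assumes k: "1 \<le> k" "k \<le> n" shows "red_rank L (3*k) = k"
proof -
  have "{r'\<in>carrier L. reducible L r' \<and> (r', 3*k) \<in> ord L} = (\<lambda>i. 3*i) ` {1..k}"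
  proof
    show "{r'\<in>carrier L. reducible L r' \<and> (r', 3*k) \<in> ord L} \<subseteq> (\<lambda>i. 3*i) ` {1..k}"
    proof clarify
      fix r assume r: "r \<in> carrier L" "reducible L r" "(r, 3*k) \<in> ord L"
      then have "r \<in> {x \<in> carrier L. reducible L x}" by simp
      then have "r \<in> (\<lambda>i. 3*i) ` {1..n}" unfolding reducibles_L .
      then obtain i where i: "r = 3*i" "1 \<le> i" "i \<le> n" by auto
      then have "i \<le> k" using r L_eq by (auto simp: interval_order_def)
      then show "r \<in> (\<lambda>i. 3*i) ` {1..k}" using i by auto
    qed
    show "(\<lambda>i. 3*i) ` {1..k} \<subseteq> {r'\<in>carrier L. reducible L r' \<and> (r', 3*k) \<in> ord L}"
      using k mult3_reducible mult3_in_carrier L_eq by (auto simp: interval_order_def)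
  qed
  moreover have "inj_on (\<lambda>i::nat. 3*i) {1..k}" by (auto simp: inj_on_def)
  ultimately show ?thesis unfolding red_rank_def by (simp add: card_image)
qed

lemma irreducible_iff_code:
  assumes xC: "x \<in> carrier L"
  shows "\<not> reducible L x \<longleftrightarrow> x \<in> irr_codes"
proof
  assume nr: "\<not> reducible L x"
  show "x \<in> irr_codes"
  proof (rule ccontr)
    assume "x \<notin> irr_codes"
    then obtain i where "x = 3*i" "1 \<le> i" "i \<le> n" using non_code_is_mult3 xC L_eq by auto
    then show False using mult3_reducible nr by blast
  qed
next
  assume "x \<in> irr_codes" then show "\<not> reducible L x" using code_irreducible by blast
qed

lemma code_pair: "x \<in> irr_codes \<Longrightarrow> (lo x, hi x) \<in> pairs"
  by (auto simp: step_codes_iff edge_codes_iff)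

lemma irreducible_pairs_L: "irreducible_pairs L = pairs"
proof
  show "irreducible_pairs L \<subseteq> pairs"
  proof
    fix e assume "e \<in> irreducible_pairs L"
    then obtain a x b where e: "e = (red_rank L a, red_rank L b)" "x \<in> carrier L" "\<not> reducible L x" "covers L a x" "covers L x b"
      unfolding irreducible_pairs_def by blast
    then have xA: "x \<in> irr_codes" using irreducible_iff_code by blast
    then have "a = 3 * lo x" "b = 3 * hi x" using code_lower_cover(2) code_upper_cover(2) e by auto
    moreover have "1 \<le> lo x" "lo x \<le> n" "1 \<le> hi x" "hi x \<le> n" using code_props[OF xA] by auto
    ultimately have "e = (lo x, hi x)" using e red_rank_mult3 by simp
    then show "e \<in> pairs" using code_pair xA by simp
  qed
  show "pairs \<subseteq> irreducible_pairs L"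
  proof clarify
    fix i j assume ij: "(i,j) \<in> pairs"
    let ?x = "edge_code i j"
    have xA: "?x \<in> irr_codes" using ij by (auto simp: edge_codes_iff)
    have bd: "1 \<le> i" "i < j" "j \<le> n" using pairs_bounds[OF ij] by auto
    have "?x \<in> carrier L" "\<not> reducible L ?x" using xA code_irreducible code_in_carrier L_eq by auto
    moreover have "covers L (3*i) ?x" "covers L ?x (3*j)"
      using code_lower_cover(1)[OF xA] code_upper_cover(1)[OF xA] by auto
    moreover have "red_rank L (3*i) = i" "red_rank L (3*j) = j" using bd red_rank_mult3 by auto
    ultimately show "(i,j) \<in> irreducible_pairs L" unfolding irreducible_pairs_def by force
  qed
qed

lemma interval_fibre_diag:
  "{y \<in> interval_carrier n irr_codes. (lo y, hi y) = (i,i)} = (if 1 \<le> i \<and> i \<le> n then {3*i} else {})"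
proof -
  have "y = 3*i \<and> 1 \<le> i \<and> i \<le> n" if "y \<in> interval_carrier n irr_codes" "lo y = i" "hi y = i" for y
  proof -
    have "y = 3*i" using eq_mult3_lo that by metis
    moreover have "y \<notin> irr_codes" using that code_props by fastforce
    ultimately show ?thesis using that non_code_is_mult3 by fastforce
  qed
  then show ?thesis using mult3_in_carrier by auto
qed

lemma interval_fibre_off_diag:
  assumes "i \<noteq> j"
  shows "{y \<in> interval_carrier n irr_codes. (lo y, hi y) = (i,j)}
    = (if (i,j) \<in> pairs then (if j = Suc i then {3*i+1, edge_code i j} else {edge_code i j}) else {})"
proof -
  have "{y \<in> interval_carrier n irr_codes. (lo y, hi y) = (i,j)} = {y \<in> irr_codes. lo y = i \<and> hi y = j}"
    using assms non_code_is_mult3 code_in_carrier by fastforce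
  also have "\<dots> = (if (i,j) \<in> pairs then (if j = Suc i then {3*i+1, edge_code i j} else {edge_code i j}) else {})"
    using code_pair by (auto simp: step_codes_iff edge_codes_iff)
  finally show ?thesis .
qed

lemma card_interval_fibre:
  "card {y \<in> interval_carrier n irr_codes. (lo y, hi y) = v} = fibre_size n pairs v"
proof -
  obtain i j where v: "v = (i,j)" by (cases v)
  show ?thesis
  proof (cases "i = j")
    case True
    then show ?thesis using v interval_fibre_diag[of i] by (simp add: fibre_size_def)
  next
    case False
    then show ?thesis using v interval_fibre_off_diag[OF False] by (simp add: fibre_size_def)
  qed
qed

end

section \<open>Structure of fundamental basic blocks\<close>

locale rc_basic_block = fin_lattice +
  assumes rc: "\<forall>x y. reducible P x \<and> reducible P y \<longrightarrow> comparable P x y"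
  and bb: "basic_block P"
  and card_ge_2: "card V \<ge> 2"
begin

lemma glb_of_leq: assumes g: "is_glb P y z x" and yz: "leq y z" shows "x = y"
proof -
  have "y \<in> V" using yz ordD by blast
  then have "leq y x" using g yz refl unfolding is_glb_def by blast
  moreover have "leq x y" using g unfolding is_glb_def by blast
  ultimately show "x = y" using antisym by blast
qed

text \<open>Of the alternatives in \<^const>\<open>basic_block\<close> only the last can hold: without doubly
  irreducible elements the bottom would be the meet of two comparable reducible elements.\<close>
lemma nullity_remove_di:
  assumes "doubly_irreducible P x" shows "nullity (remove_elem P x) = nullity P - 1"
proof -
  obtain b where b: "b \<in> V" "\<forall>x\<in>V. leq b x" using bot_ex by blast
  have "card V \<noteq> 1" using card_ge_2 by simp
  moreover have "\<not>(\<forall>x. \<not> doubly_irreducible P x)"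
  proof
    assume nd: "\<forall>x. \<not> doubly_irreducible P x"
    then have "reducible P b" using reducible_iff_not_di b by blast
    then obtain y z where yz: "y \<in> V" "z \<in> V" "y \<noteq> b" "z \<noteq> b" "is_lub P y z b \<or> is_glb P y z b"
      by (auto simp: reducible_def)
    have "\<not> is_lub P y z b" using yz b antisym unfolding is_lub_def by blast
    then have g: "is_glb P y z b" using yz by blast
    have "reducible P y" "reducible P z" using nd reducible_iff_not_di yz by blast+
    then have "leq y z \<or> leq z y" using rc by (auto simp: comparable_def)
    then show False
    proof
      assume "leq y z" then show False using glb_of_leq g yz by blast
    next
      assume zy: "leq z y"
      have "is_glb P z y b" using g unfolding is_glb_def by blast
      then show False using glb_of_leq zy yz by blast
    qed
  qed
  ultimately show ?thesis using bb assms unfolding basic_block_def by blast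
qed

lemma bot_reducible: assumes b: "b \<in> V" "\<forall>x\<in>V. leq b x" shows "reducible P b"
proof (rule ccontr)
  assume "\<not> reducible P b"
  then have di: "doubly_irreducible P b" using reducible_iff_not_di b by blast
  then have "nullity (remove_elem P b) = nullity P - 1" using nullity_remove_di by blast
  moreover have "nullity (remove_elem P b) = nullity P" using nullity_remove_bot[OF b di card_ge_2] .
  ultimately show False by simp
qed

lemma top_reducible: assumes b: "b \<in> V" "\<forall>x\<in>V. leq x b" shows "reducible P b"
proof (rule ccontr)
  assume "\<not> reducible P b"
  then have di: "doubly_irreducible P b" using reducible_iff_not_di b by blast
  then have "nullity (remove_elem P b) = nullity P - 1" using nullity_remove_di by blast
  moreover have "nullity (remove_elem P b) = nullity P" using nullity_remove_top[OF b di card_ge_2] .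
  ultimately show False by simp
qed

definition lcov :: "nat \<Rightarrow> nat" where "lcov x = (SOME p. covers P p x)"
definition ucov :: "nat \<Rightarrow> nat" where "ucov x = (SOME q. covers P x q)"

lemma irr_covers:
  assumes x: "x \<in> V" "\<not> reducible P x"
  shows "covers P (lcov x) x" "covers P x (ucov x)"
proof -
  obtain b where b: "b \<in> V" "\<forall>x\<in>V. leq b x" using bot_ex by blast
  have "b \<noteq> x" using bot_reducible[OF b] x by blast
  then obtain p where "covers P p x" using exists_lower_cover[of b x] b x by blast
  then show "covers P (lcov x) x" unfolding lcov_def by (rule someI)
  obtain t where t: "t \<in> V" "\<forall>x\<in>V. leq x t" using top_ex by blast
  have "t \<noteq> x" using top_reducible[OF t] x by blast
  then obtain q where "covers P x q" using exists_upper_cover[of x t] t x by metis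
  then show "covers P x (ucov x)" unfolding ucov_def by (rule someI)
qed

lemma irr_di: "x \<in> V \<Longrightarrow> \<not> reducible P x \<Longrightarrow> doubly_irreducible P x"
  using reducible_iff_not_di by blast

lemma below_irr:
  assumes x: "x \<in> V" "\<not> reducible P x"
    and y: "leq y x" "y \<noteq> x"
  shows "leq y (lcov x)"
proof -
  obtain p where p: "covers P p x" "leq y p" using exists_lower_cover[OF y] by blast
  have "p = lcov x" using di_lower_cover_unique[OF irr_di[OF x] p(1) irr_covers(1)[OF x]] .
  then show ?thesis using p by simp
qed

lemma above_irr:
  assumes x: "x \<in> V" "\<not> reducible P x"
    and y: "leq x y" "y \<noteq> x"
  shows "leq (ucov x) y"
proof -
  obtain p where p: "covers P x p" "leq p y" using exists_upper_cover[OF y] by blast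
  have "p = ucov x" using di_upper_cover_unique[OF irr_di[OF x] p(1) irr_covers(2)[OF x]] .
  then show ?thesis using p by simp
qed

lemma irr_interval_nontrivial: assumes x: "x \<in> V" "\<not> reducible P x"
  shows "\<exists>w. w \<noteq> x \<and> strictly_between P (lcov x) (ucov x) w"
proof -
  have "nullity (remove_elem P x) = nullity P - 1" using nullity_remove_di irr_di[OF x] by blast
  moreover note nullity_remove_middle[OF irr_di[OF x] irr_covers(1)[OF x] irr_covers(2)[OF x]]
  ultimately show ?thesis by (auto split: if_splits)
qed

lemma lcov_reducible: assumes x: "x \<in> V" "\<not> reducible P x" shows "reducible P (lcov x)"
proof (rule ccontr)
  let ?p = "lcov x"
  assume np: "\<not> reducible P ?p"
  have cpx: "covers P ?p x" using irr_covers(1)[OF x] .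
  have pC: "?p \<in> V" using cpx coversD by blast
  have "x = ucov ?p" using di_upper_cover_unique[OF irr_di[OF pC np] cpx irr_covers(2)[OF pC np]] .
  obtain w where w: "w \<noteq> ?p" "leq (lcov ?p) w" "leq w (ucov ?p)" "w \<noteq> lcov ?p" "w \<noteq> ucov ?p"
    using irr_interval_nontrivial[OF pC np] unfolding strictly_between_def by blast
  have "leq w ?p" using below_irr[OF x] w \<open>x = ucov ?p\<close> by simp
  then show False using irr_covers(1)[OF pC np] w unfolding covers_def by blast
qed

lemma ucov_reducible: assumes x: "x \<in> V" "\<not> reducible P x" shows "reducible P (ucov x)"
proof (rule ccontr)
  let ?p = "ucov x"
  assume np: "\<not> reducible P ?p"
  have cpx: "covers P x ?p" using irr_covers(2)[OF x] .
  have pC: "?p \<in> V" using cpx coversD by blast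
  have "x = lcov ?p" using di_lower_cover_unique[OF irr_di[OF pC np] cpx irr_covers(1)[OF pC np]] .
  obtain w where w: "w \<noteq> ?p" "leq (lcov ?p) w" "leq w (ucov ?p)" "w \<noteq> lcov ?p" "w \<noteq> ucov ?p"
    using irr_interval_nontrivial[OF pC np] unfolding strictly_between_def by blast
  have "leq ?p w" using above_irr[OF x] w \<open>x = lcov ?p\<close> by simp
  then show False using irr_covers(2)[OF pC np] w unfolding covers_def by blast
qed

abbreviation Red :: "nat set" where "Red \<equiv> {x \<in> V. reducible P x}"
abbreviation Irr :: "nat set" where "Irr \<equiv> V - Red"
abbreviation rank :: "nat \<Rightarrow> nat" where "rank \<equiv> red_rank P"

lemma finite_Red: "finite Red" using fin by simp
lemma Red_chain: "r \<in> Red \<Longrightarrow> r' \<in> Red \<Longrightarrow> leq r r' \<or> leq r' r"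
  using rc by (auto simp: comparable_def)

lemma rank_mono: "leq r r' \<Longrightarrow> rank r \<le> rank r'"
  unfolding red_rank_def by (rule card_mono) (use fin trans in auto)

lemma rank_strict_mono: assumes "r' \<in> Red" "leq r r'" "r \<noteq> r'" shows "rank r < rank r'"
  unfolding red_rank_def
proof (rule psubset_card_mono)
  show "finite {r'a \<in> V. reducible P r'a \<and> leq r'a r'}" using fin by simp
  show "{r'a \<in> V. reducible P r'a \<and> leq r'a r} \<subset> {r'a \<in> V. reducible P r'a \<and> leq r'a r'}"
  proof
    show "{r'a \<in> V. reducible P r'a \<and> leq r'a r} \<subseteq> {r'a \<in> V. reducible P r'a \<and> leq r'a r'}"
      using assms trans by blast
    have "r' \<in> {r'a \<in> V. reducible P r'a \<and> leq r'a r'}" using assms refl by blast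
    moreover have "r' \<notin> {r'a \<in> V. reducible P r'a \<and> leq r'a r}" using assms antisym by blast
    ultimately show "{r'a \<in> V. reducible P r'a \<and> leq r'a r} \<noteq> {r'a \<in> V. reducible P r'a \<and> leq r'a r'}"
      by blast
  qed
qed

lemma rank_le_iff:
  assumes r: "r \<in> Red"
    and r': "r' \<in> Red"
  shows "rank r \<le> rank r' \<longleftrightarrow> leq r r'"
proof
  assume le: "rank r \<le> rank r'"
  show "leq r r'"
  proof (rule ccontr)
    assume "\<not> leq r r'"
    then have "leq r' r" "r' \<noteq> r" using Red_chain[OF r r'] r refl by auto
    then have "rank r' < rank r" using rank_strict_mono r by blast
    then show False using le by simp
  qed
next
  assume "leq r r'" then show "rank r \<le> rank r'" by (rule rank_mono)
qed

lemma inj_on_rank: "inj_on rank Red"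
  using rank_le_iff antisym by (metis (no_types, lifting) inj_onI order_refl)

abbreviation nred :: nat where "nred \<equiv> card Red"

lemma rank_image: "rank ` Red = {1..nred}"
proof -
  have sub: "rank ` Red \<subseteq> {1..nred}"
  proof clarify
    fix r assume r: "r \<in> V" "reducible P r"
    have "r \<in> {r'\<in>V. reducible P r' \<and> leq r' r}" using r refl by blast
    then have "rank r \<ge> 1"
      unfolding red_rank_def using fin by (metis (no_types, lifting) One_nat_def Suc_leI card_gt_0_iff empty_iff finite_subset mem_Collect_eq subsetI)
    moreover have "rank r \<le> nred" unfolding red_rank_def by (rule card_mono) (use fin in auto)
    ultimately show "rank r \<in> {1..nred}" by simp
  qed
  have "card (rank ` Red) = nred" using card_image[OF inj_on_rank] .
  then show ?thesis using sub by (simp add: card_subset_eq)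
qed

lemma rank_inj: "r \<in> Red \<Longrightarrow> r' \<in> Red \<Longrightarrow> rank r = rank r' \<Longrightarrow> r = r'"
  using inj_on_rank by (meson inj_onD)

definition rank_label :: "nat \<Rightarrow> nat \<times> nat" where
  "rank_label x = (if reducible P x then (rank x, rank x) else (rank (lcov x), rank (ucov x)))"

lemma irr_facts: assumes x: "x \<in> V" "\<not> reducible P x"
  shows "lcov x \<in> Red" "ucov x \<in> Red" "leq (lcov x) x" "leq x (ucov x)" "lcov x \<noteq> x" "ucov x \<noteq> x"
    "leq (lcov x) (ucov x)" "lcov x \<noteq> ucov x" "rank (lcov x) < rank (ucov x)"
proof -
  show a: "lcov x \<in> Red" "ucov x \<in> Red"
    using lcov_reducible[OF x] ucov_reducible[OF x] irr_covers[OF x] coversD by auto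
  have "leq (lcov x) x \<and> lcov x \<noteq> x" using coversD[OF irr_covers(1)[OF x]] by blast
  moreover have "leq x (ucov x) \<and> x \<noteq> ucov x" using coversD[OF irr_covers(2)[OF x]] by blast
  ultimately show b: "leq (lcov x) x" "leq x (ucov x)" "lcov x \<noteq> x" "ucov x \<noteq> x" by auto
  show c: "leq (lcov x) (ucov x)" using b trans by blast
  show d: "lcov x \<noteq> ucov x" using b antisym by metis
  show "rank (lcov x) < rank (ucov x)" using rank_strict_mono a c d by blast
qed

lemma leq_iff_labels: assumes x: "x \<in> V" and y: "y \<in> V"
  shows "leq x y \<longleftrightarrow> x = y \<or> snd (rank_label x) \<le> fst (rank_label y)"
proof (cases "reducible P x"; cases "reducible P y")
  assume rx: "reducible P x" and ry: "reducible P y"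
  then show ?thesis using rank_le_iff x y refl by (auto simp: rank_label_def)
next
  assume rx: "reducible P x" and ry: "\<not> reducible P y"
  have "leq x y \<longleftrightarrow> leq x (lcov y)"
    using below_irr[OF y ry] irr_facts[OF y ry] trans rx ry by metis
  then show ?thesis using rank_le_iff[of x "lcov y"] x rx irr_facts[OF y ry] ry by (auto simp: rank_label_def)
next
  assume rx: "\<not> reducible P x" and ry: "reducible P y"
  have "leq x y \<longleftrightarrow> leq (ucov x) y"
    using above_irr[OF x rx] irr_facts[OF x rx] trans rx ry by metis
  then show ?thesis using rank_le_iff[of "ucov x" y] y ry irr_facts[OF x rx] rx by (auto simp: rank_label_def)
next
  assume rx: "\<not> reducible P x" and ry: "\<not> reducible P y"
  have "leq x y \<longleftrightarrow> x = y \<or> leq (ucov x) (lcov y)"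
  proof
    assume xy: "leq x y"
    show "x = y \<or> leq (ucov x) (lcov y)"
    proof (cases "x = y")
      case False
      then have "leq (ucov x) y" using above_irr[OF x rx] xy by blast
      moreover have "ucov x \<noteq> y" using irr_facts(2)[OF x rx] ry by blast
      ultimately show ?thesis using below_irr[OF y ry] by blast
    qed simp
  next
    assume "x = y \<or> leq (ucov x) (lcov y)"
    then show "leq x y" using refl x irr_facts[OF x rx] irr_facts[OF y ry] trans by metis
  qed
  then show ?thesis using rank_le_iff[of "ucov x" "lcov y"] irr_facts[OF x rx] irr_facts[OF y ry] rx ry
    by (auto simp: rank_label_def)
qed

definition fibre :: "nat \<times> nat \<Rightarrow> nat set" where
  "fibre v = {x \<in> Irr. rank_label x = v}"
abbreviation irr_labels :: "(nat \<times> nat) set" where "irr_labels \<equiv> rank_label ` Irr"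

lemma label_Irr: "x \<in> Irr \<Longrightarrow> rank_label x = (rank (lcov x), rank (ucov x))"
  by (auto simp: rank_label_def)
lemma label_Red: "x \<in> Red \<Longrightarrow> rank_label x = (rank x, rank x)"
  by (auto simp: rank_label_def)

lemma rank_bounds: "r \<in> Red \<Longrightarrow> 1 \<le> rank r \<and> rank r \<le> nred"
  using rank_image by auto

lemma irr_labels_bounds: "e \<in> irr_labels \<Longrightarrow> 1 \<le> fst e \<and> fst e < snd e \<and> snd e \<le> nred"
proof -
  assume "e \<in> irr_labels"
  then obtain x where x: "x \<in> Irr" "e = rank_label x" by blast
  then have "x \<in> V" "\<not> reducible P x" by auto
  then show ?thesis using x label_Irr irr_facts rank_bounds by fastforce
qed

lemma rank_surj: assumes "i \<in> {1..nred}" shows "\<exists>r\<in>Red. rank r = i"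
proof -
  have "i \<in> rank ` Red" using assms by (simp only: rank_image)
  then show ?thesis by blast
qed

lemma covers_Irr_iff: assumes v: "v \<in> Irr" shows "covers P u v \<longleftrightarrow> u = lcov v"
proof
  assume c: "covers P u v"
  have vn: "v \<in> V" "\<not> reducible P v" using v by auto
  have "leq u (lcov v)" using below_irr[OF vn] coversD[OF c] by blast
  moreover have "leq (lcov v) v" "lcov v \<noteq> v" using irr_facts[OF vn] by auto
  ultimately show "u = lcov v" using c unfolding covers_def by blast
qed (use v irr_covers in auto)

lemma Irr_covers_iff: assumes u: "u \<in> Irr" shows "covers P u v \<longleftrightarrow> v = ucov u"
proof
  assume c: "covers P u v"
  have un: "u \<in> V" "\<not> reducible P u" using u by auto
  have "leq (ucov u) v" using above_irr[OF un] coversD[OF c] by blast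
  moreover have "leq u (ucov u)" "ucov u \<noteq> u" using irr_facts[OF un] by auto
  ultimately show "v = ucov u" using c unfolding covers_def by blast
qed (use u irr_covers in auto)

lemma covers_Red_consecutive:
  assumes R: "u \<in> Red" "v \<in> Red" and c: "covers P u v"
  shows "rank v = Suc (rank u)" "fibre (rank u, rank v) = {}"
proof -
  have uv: "leq u v" "u \<noteq> v" using c coversD by auto
  have nz: "\<not> strictly_between P u v z" for z
    using c unfolding covers_def strictly_between_def by blast
  have lt: "rank u < rank v" using rank_strict_mono R uv by blast
  show "rank v = Suc (rank u)"
  proof (rule ccontr)
    assume "rank v \<noteq> Suc (rank u)"
    then have "Suc (rank u) \<in> {1..nred}" using lt rank_bounds[OF R(2)] by simp
    then obtain r where r: "r \<in> Red" "rank r = Suc (rank u)" using rank_surj by blast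
    then have "strictly_between P u v r"
      using rank_le_iff[OF R(1) r(1)] rank_le_iff[OF r(1) R(2)] lt \<open>rank v \<noteq> Suc (rank u)\<close>
      unfolding strictly_between_def by auto
    then show False using nz by blast
  qed
  show "fibre (rank u, rank v) = {}"
  proof (rule ccontr)
    assume "fibre (rank u, rank v) \<noteq> {}"
    then obtain x where x: "x \<in> Irr" "rank_label x = (rank u, rank v)" unfolding fibre_def by blast
    then have xn: "x \<in> V" "\<not> reducible P x" by auto
    have "lcov x = u" "ucov x = v"
      using x label_Irr rank_inj[OF irr_facts(1)[OF xn] R(1)] rank_inj[OF irr_facts(2)[OF xn] R(2)]
      by auto
    then have "strictly_between P u v x" using irr_facts[OF xn] unfolding strictly_between_def by auto
    then show False using nz by blast
  qed
qed

lemma covers_Red_if_consecutive: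
  assumes R: "u \<in> Red" "v \<in> Red" and h: "rank v = Suc (rank u)" "fibre (rank u, rank v) = {}"
  shows "covers P u v"
proof -
  have uv: "leq u v" "u \<noteq> v" using rank_le_iff[of u v] R h by auto
  have "\<not> strictly_between P u v z" for z
  proof
    assume z: "strictly_between P u v z"
    then have zV: "z \<in> V" using ordD unfolding strictly_between_def by blast
    show False
    proof (cases "reducible P z")
      case True
      then have "rank u < rank z" "rank z < rank v"
        using rank_strict_mono R z zV unfolding strictly_between_def by blast+
      then show False using h by simp
    next
      case False
      have "rank u \<le> rank (lcov z)" "rank (ucov z) \<le> rank v"
        using below_irr[OF zV False] above_irr[OF zV False] z rank_mono
        unfolding strictly_between_def by blast+
      moreover have "rank (lcov z) < rank (ucov z)" using irr_facts[OF zV False] by blast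
      ultimately have "z \<in> fibre (rank u, rank v)"
        using h label_Irr[of z] zV False unfolding fibre_def by auto
      then show False using h by blast
    qed
  qed
  then show ?thesis using uv unfolding covers_iff_between by blast
qed

lemma covers_Red_iff:
  assumes R: "u \<in> Red" "v \<in> Red"
  shows "covers P u v \<longleftrightarrow> rank v = Suc (rank u) \<and> fibre (rank u, rank v) = {}"
  using covers_Red_consecutive[OF R] covers_Red_if_consecutive[OF R] by blast

lemma covers_iff_labels: "covers P u v \<longleftrightarrow> (v \<in> Irr \<and> u = lcov v) \<or> (u \<in> Irr \<and> v = ucov u)
    \<or> (u \<in> Red \<and> v \<in> Red \<and> rank v = Suc (rank u) \<and> fibre (rank u, rank v) = {})"
proof (cases "u \<in> Irr \<or> v \<in> Irr")
  case True
  then show ?thesis using covers_Irr_iff Irr_covers_iff irr_facts by blast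
next
  case False
  then show ?thesis
  proof (cases "u \<in> V \<and> v \<in> V")
    case True
    then show ?thesis using False covers_Red_iff by blast
  qed (use coversD in blast)
qed

abbreviation direct_steps :: "nat set" where "direct_steps \<equiv> {i. 1 \<le> i \<and> i < nred \<and> fibre (i, Suc i) = {}}"
abbreviation bridged_steps :: "nat set" where "bridged_steps \<equiv> {i. 1 \<le> i \<and> i < nred \<and> fibre (i, Suc i) \<noteq> {}}"

lemma finite_Irr: "finite Irr" using fin by simp

lemma card_direct_edges:
  "card {(u,v). u \<in> Red \<and> v \<in> Red \<and> rank v = Suc (rank u) \<and> fibre (rank u, rank v) = {}}
    = card direct_steps" (is "card ?E = _")
proof -
  have "inj_on (\<lambda>e. rank (fst e)) ?E"
  proof (rule inj_onI)
    fix e e' assume "e \<in> ?E" "e' \<in> ?E" "rank (fst e) = rank (fst e')"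
    then show "e = e'"
      using rank_inj[of "fst e" "fst e'"] rank_inj[of "snd e" "snd e'"] by (auto simp: prod_eq_iff)
  qed
  moreover have "(\<lambda>e. rank (fst e)) ` ?E = direct_steps"
  proof
    show "(\<lambda>e. rank (fst e)) ` ?E \<subseteq> direct_steps"
    proof
      fix i assume "i \<in> (\<lambda>e. rank (fst e)) ` ?E"
      then obtain u v where "(u,v) \<in> ?E" "i = rank u" by force
      then show "i \<in> direct_steps" using rank_bounds[of u] rank_bounds[of v] by auto
    qed
    show "direct_steps \<subseteq> (\<lambda>e. rank (fst e)) ` ?E"
    proof
      fix i assume i: "i \<in> direct_steps"
      have "i \<in> {1..nred}" "Suc i \<in> {1..nred}" using i by auto
      then obtain u v where u: "u \<in> Red" "rank u = i" and v: "v \<in> Red" "rank v = Suc i"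
        using rank_surj by meson
      have "(u,v) \<in> ?E" using u v i by auto
      then show "i \<in> (\<lambda>e. rank (fst e)) ` ?E" using u by force
    qed
  qed
  ultimately show ?thesis using card_image by fastforce
qed

lemma nred_pos: "nred \<ge> 1"
proof -
  obtain b where b: "b \<in> V" "\<forall>x\<in>V. leq b x" using bot_ex by blast
  then have "b \<in> Red" using bot_reducible by blast
  then show ?thesis using finite_Red by (metis One_nat_def Suc_leI card_gt_0_iff empty_iff)
qed

text \<open>Every irreducible element contributes its two cover edges, and the only other edges
  join consecutive reducible elements with nothing labelled in between.\<close>
lemma nullity_count: "nullity P = int (card Irr) - int (card bridged_steps)"
proof -
  let ?E1 = "(\<lambda>x. (lcov x, x)) ` Irr" and ?E2 = "(\<lambda>x. (x, ucov x)) ` Irr"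
  let ?E3 = "{(u,v). u \<in> Red \<and> v \<in> Red \<and> rank v = Suc (rank u) \<and> fibre (rank u, rank v) = {}}"
  have E: "cover_edges P = ?E1 \<union> ?E2 \<union> ?E3"
    unfolding cover_edges_def using covers_iff_labels by auto
  have c1: "card ?E1 = card Irr" "card ?E2 = card Irr" by (auto intro: card_image simp: inj_on_def)
  have fE3: "finite ?E3" by (rule finite_subset[of _ "Red \<times> Red"]) (use finite_Red in auto)
  have d: "?E1 \<inter> ?E2 = {}" "(?E1 \<union> ?E2) \<inter> ?E3 = {}"
  proof -
    have "x \<noteq> ucov y" if "x \<in> Irr" "y \<in> Irr" for x y using that irr_facts(2)[of y] by auto
    then show "?E1 \<inter> ?E2 = {}" by blast
  qed auto
  have "card (cover_edges P) = 2 * card Irr + card direct_steps"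
    unfolding E using c1 card_direct_edges d finite_Irr fE3 by (simp add: card_Un_disjoint)
  moreover have "card direct_steps + card bridged_steps = nred - 1"
  proof -
    have "direct_steps \<union> bridged_steps = {1..<nred}" "direct_steps \<inter> bridged_steps = {}" by auto
    then show ?thesis using card_Un_disjoint[of direct_steps bridged_steps] finite_subset by fastforce
  qed
  moreover have "card V = nred + card Irr" using fin card_Un_disjoint[of Red Irr]
    by (metis (no_types, lifting) Diff_disjoint Diff_partition finite_Diff mem_Collect_eq subsetI finite_Red)
  ultimately show ?thesis using nullity_eq nred_pos by (simp add: of_nat_diff)
qed

lemma finite_fibre: "finite (fibre v)" unfolding fibre_def by (rule finite_subset[OF _ finite_Irr]) auto

lemma card_Irr_sum_fibres: "card Irr = (\<Sum>e\<in>irr_labels. card (fibre e))"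
proof -
  have "Irr = \<Union>(fibre ` irr_labels)" unfolding fibre_def by auto
  moreover have "card (\<Union>(fibre ` irr_labels)) = (\<Sum>e\<in>irr_labels. card (fibre e))"
    by (rule card_UN_disjoint) (use finite_Irr finite_fibre in \<open>auto simp: fibre_def\<close>)
  ultimately show ?thesis by simp
qed

abbreviation step_labels :: "(nat \<times> nat) set" where "step_labels \<equiv> {e \<in> irr_labels. snd e = Suc (fst e)}"

lemma card_step_labels: "card step_labels = card bridged_steps"
proof -
  have "inj_on fst step_labels" by (auto simp: inj_on_def prod_eq_iff)
  moreover have "fst ` step_labels = bridged_steps"
  proof
    show "fst ` step_labels \<subseteq> bridged_steps"
    proof
      fix i assume "i \<in> fst ` step_labels"
      then obtain e where e: "e \<in> irr_labels" "snd e = Suc (fst e)" "i = fst e" by blast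
      then have ne: "fibre e \<noteq> {}" unfolding fibre_def by auto
      have ee: "e = (i, Suc i)" using e by (simp add: prod_eq_iff)
      have "1 \<le> i" "i < nred" using irr_labels_bounds[OF e(1)] e by auto
      then show "i \<in> bridged_steps" using ne ee by simp
    qed
    show "bridged_steps \<subseteq> fst ` step_labels"
    proof
      fix i assume "i \<in> bridged_steps"
      then obtain x where "x \<in> fibre (i, Suc i)" by auto
      then have "(i, Suc i) \<in> step_labels" unfolding fibre_def by force
      then show "i \<in> fst ` step_labels" by (rule image_eqI[rotated]) simp
    qed
  qed
  ultimately show ?thesis using card_image by fastforce
qed

lemma card_fibre_ge1: "e \<in> irr_labels \<Longrightarrow> card (fibre e) \<ge> 1"
proof -
  assume "e \<in> irr_labels"
  then have "fibre e \<noteq> {}" unfolding fibre_def by auto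
  then show ?thesis using finite_fibre by (metis One_nat_def Suc_leI card_gt_0_iff)
qed

lemma card_fibre_step_ge2: assumes e: "e \<in> step_labels" shows "card (fibre e) \<ge> 2"
proof -
  obtain x where x: "x \<in> Irr" "rank_label x = e" using e by blast
  then have xn: "x \<in> V" "\<not> reducible P x" by auto
  obtain w where w: "w \<noteq> x" "leq (lcov x) w" "leq w (ucov x)" "w \<noteq> lcov x" "w \<noteq> ucov x"
    using irr_interval_nontrivial[OF xn] unfolding strictly_between_def by blast
  have wC: "w \<in> V" using w ordD by blast
  have se: "rank (ucov x) = Suc (rank (lcov x))" using e x label_Irr by auto
  have wn: "\<not> reducible P w"
  proof
    assume "reducible P w"
    then have "rank (lcov x) < rank w" "rank w < rank (ucov x)"
      using rank_strict_mono irr_facts[OF xn] w wC by blast+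
    then show False using se by simp
  qed
  have "leq (lcov x) (lcov w)" using below_irr[OF wC wn] w by metis
  then have a: "rank (lcov x) \<le> rank (lcov w)" by (rule rank_mono)
  have "leq (ucov w) (ucov x)" using above_irr[OF wC wn] w by metis
  then have b: "rank (ucov w) \<le> rank (ucov x)" by (rule rank_mono)
  have "rank (lcov w) < rank (ucov w)" using irr_facts[OF wC wn] by blast
  then have "rank_label w = rank_label x" using a b se label_Irr[of w] label_Irr[of x] wC wn x by auto
  then have "{x, w} \<subseteq> fibre e" using x wC wn unfolding fibre_def by auto
  then have "card {x,w} \<le> card (fibre e)" using finite_fibre card_mono by blast
  then show ?thesis using w by simp
qed

text \<open>All reducible elements of the interval share one colour, since they form a chain.\<close>
lemma separating_colouring_off_Red:
  assumes ci: "separating_colouring P a b col"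
  obtains u where "strictly_between P a b u" "\<forall>r\<in>Red. strictly_between P a b r \<longrightarrow> col r \<noteq> col u"
proof -
  obtain z w where zw: "strictly_between P a b z" "strictly_between P a b w" "col z \<noteq> col w"
    using ci by (auto simp: separating_colouring_def)
  have sep: "\<And>z w. strictly_between P a b z \<Longrightarrow> strictly_between P a b w \<Longrightarrow> leq z w \<Longrightarrow> col z = col w"
    using ci by (auto simp: separating_colouring_def)
  have same: "col r = col r'"
    if "r \<in> Red" "r' \<in> Red" "strictly_between P a b r" "strictly_between P a b r'" for r r'
    using Red_chain[OF that(1,2)] sep that by metis
  show ?thesis
  proof (cases "\<exists>r0\<in>Red. strictly_between P a b r0")
    case True
    then obtain r0 where r0: "r0 \<in> Red" "strictly_between P a b r0" by blast
    let ?u = "if col z = col r0 then w else z"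
    have "col r \<noteq> col ?u" if "r \<in> Red" "strictly_between P a b r" for r
      using same[OF that(1) r0(1) that(2) r0(2)] zw(3) by simp
    moreover have "strictly_between P a b ?u" using zw by simp
    ultimately show ?thesis using that by blast
  next
    case False
    then show ?thesis using that zw by blast
  qed
qed

lemma separating_colouring_witness:
  assumes ci: "separating_colouring P a b col" shows "\<exists>x\<in>Irr. lcov x = a \<and> ucov x = b"
proof -
  have sep: "\<And>z w. strictly_between P a b z \<Longrightarrow> strictly_between P a b w \<Longrightarrow> leq z w \<Longrightarrow> col z = col w"
    using ci by (auto simp: separating_colouring_def)
  obtain u where u: "strictly_between P a b u" "\<forall>r\<in>Red. strictly_between P a b r \<longrightarrow> col r \<noteq> col u"
    using separating_colouring_off_Red[OF ci] by blast
  have uC: "u \<in> V" using u ordD unfolding strictly_between_def by blast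
  have un: "\<not> reducible P u" using u uC by blast
  have ab: "leq a u" "a \<noteq> u" "leq u b" "u \<noteq> b" using u unfolding strictly_between_def by auto
  note cov = irr_facts[OF uC un]
  have "lcov u = a"
  proof (rule ccontr)
    assume "lcov u \<noteq> a"
    moreover have "leq a (lcov u)" using below_irr[OF uC un] ab by blast
    moreover have "leq (lcov u) b" "lcov u \<noteq> b" using cov(3) ab(3,4) trans antisym by blast+
    ultimately have bt: "strictly_between P a b (lcov u)" unfolding strictly_between_def by blast
    then show False using u(2) cov(1) sep[OF bt u(1) cov(3)] by blast
  qed
  moreover have "ucov u = b"
  proof (rule ccontr)
    assume "ucov u \<noteq> b"
    moreover have "leq (ucov u) b" using above_irr[OF uC un] ab by blast
    moreover have "leq a (ucov u)" "ucov u \<noteq> a" using cov(4) ab(1,2) trans antisym by blast+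
    ultimately have bt: "strictly_between P a b (ucov u)" unfolding strictly_between_def by blast
    then show False using u(2) cov(2) sep[OF u(1) bt cov(4)] by auto
  qed
  ultimately show ?thesis using uC un by blast
qed

lemma rank_in_label:
  assumes i: "i \<in> {1..nred}"
  shows "\<exists>e\<in>irr_labels. fst e = i \<or> snd e = i"
proof -
  obtain r where r: "r \<in> Red" "rank r = i" using rank_surj[OF i] by blast
  have "\<exists>x\<in>Irr. lcov x = r \<or> ucov x = r"
  proof (rule ccontr)
    assume na: "\<not> (\<exists>x\<in>Irr. lcov x = r \<or> ucov x = r)"
    have up: "v = v'" if "covers P r v" "covers P r v'" for v v'
    proof -
      have "v \<in> Red \<and> rank v = Suc (rank r)" using that(1) covers_iff_labels na r by auto
      moreover have "v' \<in> Red \<and> rank v' = Suc (rank r)" using that(2) covers_iff_labels na r by auto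
      ultimately show ?thesis using rank_inj by auto
    qed
    have low: "v = v'" if "covers P v r" "covers P v' r" for v v'
    proof -
      have "v \<in> Red \<and> rank r = Suc (rank v)" using that(1) covers_iff_labels na r by auto
      moreover have "v' \<in> Red \<and> rank r = Suc (rank v')" using that(2) covers_iff_labels na r by auto
      ultimately show ?thesis using rank_inj by auto
    qed
    have "doubly_irreducible P r"
      unfolding doubly_irreducible_def
      using r card_le_Suc0_iff_eq[OF finite_upper_covers, of r] card_le_Suc0_iff_eq[OF finite_lower_covers, of r] up low by auto
    then show False using reducible_not_di r by blast
  qed
  then obtain x where x: "x \<in> Irr" "lcov x = r \<or> ucov x = r" by blast
  then have "rank_label x \<in> irr_labels" "fst (rank_label x) = i \<or> snd (rank_label x) = i"
    using label_Irr r by auto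
  then show ?thesis by blast
qed

lemma irreducible_pairs_eq: "irreducible_pairs P = irr_labels"
proof
  show "irreducible_pairs P \<subseteq> irr_labels"
  proof
    fix e assume "e \<in> irreducible_pairs P"
    then obtain a x b where e: "e = (rank a, rank b)" "x \<in> V" "\<not> reducible P x" "covers P a x" "covers P x b"
      unfolding irreducible_pairs_def by blast
    then have "a = lcov x" "b = ucov x"
      using di_lower_cover_unique di_upper_cover_unique irr_di irr_covers by blast+
    then have "e = rank_label x" using e label_Irr by auto
    then show "e \<in> irr_labels" using e by auto
  qed
  show "irr_labels \<subseteq> irreducible_pairs P"
  proof
    fix e assume "e \<in> irr_labels"
    then obtain x where x: "x \<in> Irr" "e = rank_label x" by blast
    then have xn: "x \<in> V" "\<not> reducible P x" by auto
    have "e = (rank (lcov x), rank (ucov x))" using x label_Irr by auto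
    then show "e \<in> irreducible_pairs P"
      unfolding irreducible_pairs_def using xn irr_covers[OF xn] by blast
  qed
qed

end

locale fundamental_block = rc_basic_block +
  fixes C0 :: poset and xs :: "(nat \<times> nat \<times> poset) list"
  assumes rep: "adjunct_representation P C0 xs"
  and dist: "distinct (map (\<lambda>(a,b,C). (a,b)) xs)"
begin

lemma nullity_eq_length: "nullity P = int (length xs)"
proof -
  have ch: "is_chain C0" and v: "valid_adjunct_list C0 xs" and L: "adjunct_list C0 xs = P"
    using rep by (auto simp: adjunct_representation_def)
  interpret C: fin_lattice C0 using ch by (simp add: is_chain_def fin_lattice_of)
  have "nullity C0 = 0" using C.nullity_chain ch by (simp add: is_chain_def)
  moreover have "nullity (adjunct_list C0 xs) = nullity C0 + int (length xs)"
    using nullity_adjunct_list[OF v] ch L lat by (simp add: is_chain_def)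
  ultimately show ?thesis using L by simp
qed

lemma length_le_card_labels: "length xs \<le> card irr_labels"
proof -
  have v: "valid_adjunct_list C0 xs" and L: "adjunct_list C0 xs = P"
    using rep by (auto simp: adjunct_representation_def)
  let ?f = "\<lambda>(a::nat,b::nat,C::poset). (rank a, rank b)"
  have att: "\<exists>x\<in>Irr. lcov x = a \<and> ucov x = b" if "(a,b,C) \<in> set xs" for a b C
    using separating_colouring_witness adjunct_pair_separated[OF v that] L by metis
  have sub: "?f ` set xs \<subseteq> irr_labels"
  proof
    fix y assume "y \<in> ?f ` set xs"
    then obtain a b C where abC: "(a,b,C) \<in> set xs" "y = (rank a, rank b)" by auto
    then obtain x where x: "x \<in> Irr" "lcov x = a" "ucov x = b" using att by blast
    then have "rank_label x = y" using label_Irr abC by auto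
    then show "y \<in> irr_labels" using x by blast
  qed
  have dx: "distinct xs" "inj_on (\<lambda>(a,b,C). (a,b)) (set xs)" using dist by (auto simp: distinct_map)
  have "inj_on ?f (set xs)"
  proof (rule inj_onI)
    fix t t' assume m0: "t \<in> set xs" "t' \<in> set xs" "?f t = ?f t'"
    obtain a b C where t: "t = (a,b,C)" by (cases t)
    obtain a' b' C' where t': "t' = (a',b',C')" by (cases t')
    have m: "(a,b,C) \<in> set xs" "(a',b',C') \<in> set xs" "rank a = rank a'" "rank b = rank b'"
      using m0 t t' by auto
    obtain x where x: "x \<in> Irr" "lcov x = a" "ucov x = b" using att m by blast
    obtain x' where x': "x' \<in> Irr" "lcov x' = a'" "ucov x' = b'" using att m by blast
    have "a \<in> Red" "b \<in> Red" "a' \<in> Red" "b' \<in> Red" using x x' irr_facts by auto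
    then have "a = a'" "b = b'" using rank_inj m by auto
    then have "(\<lambda>(a,b,C). (a,b)) t = (\<lambda>(a,b,C). (a,b)) t'" using t t' by simp
    then show "t = t'" using dx(2) m0 unfolding inj_on_def by blast
  qed
  then have ci: "card (?f ` set xs) = card (set xs)" by (rule card_image)
  then have "card (?f ` set xs) = length xs" using distinct_card[OF dx(1)] by simp
  moreover have "finite irr_labels" using finite_Irr by simp
  ultimately show ?thesis using card_mono[OF _ sub] by metis
qed

text \<open>The excess \<open>?t e\<close> of a label counts the elements carrying it beyond the one (two for
  consecutive ranks) that always do.  The total excess is the nullity minus the number of
  labels, which is not positive since the adjunct pairs inject into the labels.\<close>
lemma card_fibre_labels: "\<forall>e\<in>irr_labels. card (fibre e) = (if snd e = Suc (fst e) then 2 else 1)"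
    and nullity_eq_card_labels: "nullity P = int (card irr_labels)"
proof -
  have fE: "finite irr_labels" using finite_Irr by simp
  let ?t = "\<lambda>e. int (card (fibre e)) - 1 - (if snd e = Suc (fst e) then 1 else 0)"
  have excess_nonneg: "0 \<le> ?t e" if e: "e \<in> irr_labels" for e
  proof (cases "snd e = Suc (fst e)")
    case True then have "e \<in> step_labels" using e by simp
    then have "card (fibre e) \<ge> 2" by (rule card_fibre_step_ge2)
    then show ?thesis using True by simp
  next
    case False then show ?thesis using card_fibre_ge1[OF e] by simp
  qed
  have s1: "(\<Sum>e\<in>irr_labels. (if snd e = Suc (fst e) then 1 else 0::int)) = int (card step_labels)"
  proof -
    have "(\<Sum>e\<in>irr_labels. (if snd e = Suc (fst e) then 1 else 0::int)) = (\<Sum>e\<in>step_labels. 1)"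
      using sum.inter_filter[OF fE, of "\<lambda>_. 1::int" "\<lambda>e. snd e = Suc (fst e)"] by simp
    then show ?thesis by simp
  qed
  have A1: "(\<Sum>e\<in>irr_labels. ?t e) = int (card Irr) - int (card irr_labels) - int (card step_labels)"
    using card_Irr_sum_fibres s1 by (simp add: sum_subtractf)
  have A2: "int (card Irr) - int (card irr_labels) - int (card step_labels) = nullity P - int (card irr_labels)"
    using nullity_count card_step_labels by simp
  have le: "(\<Sum>e\<in>irr_labels. ?t e) \<le> 0"
    using A1 A2 nullity_eq_length length_le_card_labels by simp
  have "(\<Sum>e\<in>irr_labels. ?t e) \<ge> 0" using excess_nonneg by (simp add: sum_nonneg)
  then have z: "(\<Sum>e\<in>irr_labels. ?t e) = 0" using le by simp
  have iff: "(\<Sum>e\<in>irr_labels. ?t e) = 0 \<longleftrightarrow> (\<forall>e\<in>irr_labels. ?t e = 0)"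
    by (rule sum_nonneg_eq_0_iff[OF fE]) (rule excess_nonneg)
  then have all0: "\<forall>e\<in>irr_labels. ?t e = 0" using z by blast
  show "\<forall>e\<in>irr_labels. card (fibre e) = (if snd e = Suc (fst e) then 2 else 1)"
  proof
    fix e assume "e \<in> irr_labels"
    then have "?t e = 0" using all0 by blast
    then show "card (fibre e) = (if snd e = Suc (fst e) then 2 else 1)"
      by (cases "snd e = Suc (fst e)") simp_all
  qed
  show "nullity P = int (card irr_labels)" using z A1 A2 by simp
qed

lemma card_rank_label_fibre: "card {x \<in> V. rank_label x = v} = fibre_size nred irr_labels v"
proof -
  obtain i j where v: "v = (i,j)" by (cases v)
  show ?thesis
  proof (cases "i = j")
    case True
    have "{x \<in> V. rank_label x = v} = {r \<in> Red. rank r = i}"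
      using v True label_Irr label_Red irr_facts by fastforce
    moreover have "card {r \<in> Red. rank r = i} = (if 1 \<le> i \<and> i \<le> nred then 1 else 0)"
    proof (cases "1 \<le> i \<and> i \<le> nred")
      case True
      then obtain r where r: "r \<in> Red" "rank r = i" using rank_surj by force
      then have e1: "{r \<in> Red. rank r = i} = {r}" using rank_inj by blast
      show ?thesis unfolding e1 using True by simp
    next
      case False
      then have e0: "{r \<in> Red. rank r = i} = {}" using rank_bounds by force
      show ?thesis unfolding e0 using False by simp
    qed
    ultimately show ?thesis using v True by (simp add: fibre_size_def)
  next
    case False
    have "{x \<in> V. rank_label x = v} = fibre v" unfolding fibre_def using v False label_Red by auto
    moreover have "card (fibre v) = fibre_size nred irr_labels v"
    proof (cases "v \<in> irr_labels")
      case True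
      then have "card (fibre v) = (if snd v = Suc (fst v) then 2 else 1)" using card_fibre_labels by blast
      then show ?thesis using True v False by (simp add: fibre_size_def)
    next
      case F2: False
      then have "fibre v = {}" unfolding fibre_def by auto
      then show ?thesis using F2 v False by (simp add: fibre_size_def)
    qed
    ultimately show ?thesis by simp
  qed
qed

end

section \<open>Isomorphism classes\<close>

lemma bij_betw_respecting_labels:
  fixes lA :: "'a \<Rightarrow> 'c" and lB :: "'b \<Rightarrow> 'c"
  assumes fA: "finite A" and fB: "finite B"
    and fb: "\<And>v. card {x\<in>A. lA x = v} = card {y\<in>B. lB y = v}"
  obtains h where "bij_betw h A B" "\<And>x. x \<in> A \<Longrightarrow> lB (h x) = lA x"
proof -
  define FA where "FA v = {x\<in>A. lA x = v}" for v
  define FB where "FB v = {y\<in>B. lB y = v}" for v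
  have "\<exists>g. bij_betw g (FA v) (FB v)" for v
  proof -
    have "finite (FA v)" "finite (FB v)" using fA fB unfolding FA_def FB_def by auto
    then show ?thesis using fb finite_same_card_bij unfolding FA_def FB_def by blast
  qed
  then obtain g where g: "\<And>v. bij_betw (g v) (FA v) (FB v)" by metis
  define h where "h x = g (lA x) x" for x
  have hx: "h x \<in> B \<and> lB (h x) = lA x" if "x \<in> A" for x
  proof -
    have "x \<in> FA (lA x)" using that unfolding FA_def by simp
    then have "h x \<in> FB (lA x)" using g[of "lA x"] unfolding h_def bij_betw_def by blast
    then show ?thesis unfolding FB_def by simp
  qed
  have "inj_on h A"
  proof (rule inj_onI)
    fix x y assume xy: "x \<in> A" "y \<in> A" "h x = h y"
    then have "lA x = lA y" using hx by metis
    then have "x \<in> FA (lA x)" "y \<in> FA (lA x)" using xy unfolding FA_def by auto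
    then show "x = y"
      using g[of "lA x"] xy \<open>lA x = lA y\<close> unfolding bij_betw_def inj_on_def h_def by metis
  qed
  moreover have "B \<subseteq> h ` A"
  proof
    fix y assume "y \<in> B"
    then have "y \<in> FB (lB y)" unfolding FB_def by simp
    then obtain x where x: "x \<in> FA (lB y)" "g (lB y) x = y"
      using g[of "lB y"] unfolding bij_betw_def by force
    then show "y \<in> h ` A" unfolding h_def FA_def by force
  qed
  ultimately have "bij_betw h A B" using hx unfolding bij_betw_def by blast
  then show ?thesis using that hx by blast
qed

lemma poset_iso_by_labels:
  fixes lP lQ :: "nat \<Rightarrow> nat \<times> nat"
  assumes fP: "finite (carrier P)" and fQ: "finite (carrier Q)"
  and oP: "\<forall>x\<in>carrier P. \<forall>y\<in>carrier P. (x,y) \<in> ord P \<longleftrightarrow> x = y \<or> snd (lP x) \<le> fst (lP y)"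
  and oQ: "\<forall>x\<in>carrier Q. \<forall>y\<in>carrier Q. (x,y) \<in> ord Q \<longleftrightarrow> x = y \<or> snd (lQ x) \<le> fst (lQ y)"
  and fb: "\<forall>v. card {x\<in>carrier P. lP x = v} = card {y\<in>carrier Q. lQ y = v}"
  shows "poset_iso P Q"
proof -
  obtain h where h: "bij_betw h (carrier P) (carrier Q)" "\<And>x. x \<in> carrier P \<Longrightarrow> lQ (h x) = lP x"
    using bij_betw_respecting_labels[OF fP fQ] fb by blast
  have "(x,y) \<in> ord P \<longleftrightarrow> (h x, h y) \<in> ord Q" if xy: "x \<in> carrier P" "y \<in> carrier P" for x y
  proof -
    have hxy: "h x \<in> carrier Q" "h y \<in> carrier Q" using bij_betw_apply[OF h(1)] xy by auto
    have "h x = h y \<longleftrightarrow> x = y" using h(1) xy by (auto simp: bij_betw_def inj_on_def)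
    then show ?thesis using oP[rule_format, OF xy] oQ[rule_format, OF hxy] h(2) xy by simp
  qed
  then show ?thesis unfolding poset_iso_def using h(1) by blast
qed

lemma poset_iso_refl: "poset_iso P P"
  unfolding poset_iso_def by (rule exI[of _ id]) auto

lemma poset_iso_sym: assumes "poset_iso P Q" shows "poset_iso Q P"
proof -
  obtain h where h: "bij_betw h (carrier P) (carrier Q)"
    "\<forall>x\<in>carrier P. \<forall>y\<in>carrier P. (x,y) \<in> ord P \<longleftrightarrow> (h x, h y) \<in> ord Q"
    using assms unfolding poset_iso_def by blast
  let ?g = "the_inv_into (carrier P) h"
  have g: "bij_betw ?g (carrier Q) (carrier P)" using bij_betw_the_inv_into[OF h(1)] .
  have "\<forall>u\<in>carrier Q. \<forall>v\<in>carrier Q. (u,v) \<in> ord Q \<longleftrightarrow> (?g u, ?g v) \<in> ord P"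
  proof (intro ballI)
    fix u v assume uv: "u \<in> carrier Q" "v \<in> carrier Q"
    have "?g u \<in> carrier P" "?g v \<in> carrier P"
      using bij_betw_apply[OF g uv(1)] bij_betw_apply[OF g uv(2)] by auto
    moreover have "h (?g u) = u" "h (?g v) = v" using f_the_inv_into_f_bij_betw[OF h(1)] uv by auto
    ultimately show "(u,v) \<in> ord Q \<longleftrightarrow> (?g u, ?g v) \<in> ord P" using h(2) by metis
  qed
  then show ?thesis unfolding poset_iso_def using g by blast
qed

lemma poset_iso_trans: assumes "poset_iso P Q" "poset_iso Q R" shows "poset_iso P R"
proof -
  obtain h where h: "bij_betw h (carrier P) (carrier Q)"
    "\<forall>x\<in>carrier P. \<forall>y\<in>carrier P. (x,y) \<in> ord P \<longleftrightarrow> (h x, h y) \<in> ord Q"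
    using assms(1) unfolding poset_iso_def by blast
  obtain k where k: "bij_betw k (carrier Q) (carrier R)"
    "\<forall>x\<in>carrier Q. \<forall>y\<in>carrier Q. (x,y) \<in> ord Q \<longleftrightarrow> (k x, k y) \<in> ord R"
    using assms(2) unfolding poset_iso_def by blast
  have "bij_betw (k \<circ> h) (carrier P) (carrier R)" using bij_betw_trans h(1) k(1) by blast
  moreover have "\<forall>x\<in>carrier P. \<forall>y\<in>carrier P. (x,y) \<in> ord P \<longleftrightarrow> ((k \<circ> h) x, (k \<circ> h) y) \<in> ord R"
  proof (intro ballI)
    fix x y assume xy: "x \<in> carrier P" "y \<in> carrier P"
    have "h x \<in> carrier Q" "h y \<in> carrier Q"
      using bij_betw_apply[OF h(1) xy(1)] bij_betw_apply[OF h(1) xy(2)] by auto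
    then show "(x,y) \<in> ord P \<longleftrightarrow> ((k \<circ> h) x, (k \<circ> h) y) \<in> ord R"
      using h(2) k(2) xy by simp
  qed
  ultimately show ?thesis unfolding poset_iso_def by blast
qed

locale poset_isomorphism =
  fixes P Q :: poset and h :: "nat \<Rightarrow> nat"
  assumes fpP: "finite_poset P" and fpQ: "finite_poset Q"
  and hb: "bij_betw h (carrier P) (carrier Q)"
  and ho: "\<forall>x\<in>carrier P. \<forall>y\<in>carrier P. (x,y) \<in> ord P \<longleftrightarrow> (h x, h y) \<in> ord Q"
begin

lemma h_carrier: "x \<in> carrier P \<Longrightarrow> h x \<in> carrier Q"
  using bij_betw_apply[OF hb] by blast
lemma h_eq_iff: "x \<in> carrier P \<Longrightarrow> y \<in> carrier P \<Longrightarrow> h x = h y \<longleftrightarrow> x = y"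
  using hb by (auto simp: bij_betw_def inj_on_def)
lemma h_surj: "w \<in> carrier Q \<Longrightarrow> \<exists>w'\<in>carrier P. w = h w'"
  using hb by (auto simp: bij_betw_def)
lemma ord_P_carrier: "(x,y) \<in> ord P \<Longrightarrow> x \<in> carrier P \<and> y \<in> carrier P"
proof -
  have "ord P \<subseteq> carrier P \<times> carrier P" using fpP by (simp add: finite_poset_def)
  then show "(x,y) \<in> ord P \<Longrightarrow> x \<in> carrier P \<and> y \<in> carrier P" by blast
qed
lemma ord_Q_carrier: "(x,y) \<in> ord Q \<Longrightarrow> x \<in> carrier Q \<and> y \<in> carrier Q"
proof -
  have "ord Q \<subseteq> carrier Q \<times> carrier Q" using fpQ by (simp add: finite_poset_def)
  then show "(x,y) \<in> ord Q \<Longrightarrow> x \<in> carrier Q \<and> y \<in> carrier Q" by blast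
qed

lemma lub_iff: assumes "x \<in> carrier P" "y \<in> carrier P" "z \<in> carrier P"
  shows "is_lub P y z x \<longleftrightarrow> is_lub Q (h y) (h z) (h x)"
proof
  assume l: "is_lub P y z x"
  show "is_lub Q (h y) (h z) (h x)" unfolding is_lub_def
  proof (intro conjI ballI impI)
    show "h x \<in> carrier Q" using h_carrier assms by blast
    show "(h y, h x) \<in> ord Q" "(h z, h x) \<in> ord Q" using l ho assms unfolding is_lub_def by blast+
    fix w assume w: "w \<in> carrier Q" "(h y, w) \<in> ord Q \<and> (h z, w) \<in> ord Q"
    then obtain w' where w': "w' \<in> carrier P" "w = h w'" using h_surj by blast
    then have "(y,w') \<in> ord P" "(z,w') \<in> ord P" using w ho assms by blast+
    then have "(x,w') \<in> ord P" using l w' unfolding is_lub_def by blast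
    then show "(h x, w) \<in> ord Q" using ho w' assms by blast
  qed
next
  assume l: "is_lub Q (h y) (h z) (h x)"
  show "is_lub P y z x" unfolding is_lub_def
  proof (intro conjI ballI impI)
    show "x \<in> carrier P" using assms by blast
    show "(y, x) \<in> ord P" "(z, x) \<in> ord P" using l ho assms unfolding is_lub_def by blast+
    fix w assume w: "w \<in> carrier P" "(y, w) \<in> ord P \<and> (z, w) \<in> ord P"
    then have "(h y, h w) \<in> ord Q" "(h z, h w) \<in> ord Q" using ho assms by blast+
    then have "(h x, h w) \<in> ord Q" using l h_carrier w unfolding is_lub_def by blast
    then show "(x, w) \<in> ord P" using ho w assms by blast
  qed
qed

lemma glb_iff: assumes "x \<in> carrier P" "y \<in> carrier P" "z \<in> carrier P"
  shows "is_glb P y z x \<longleftrightarrow> is_glb Q (h y) (h z) (h x)"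
proof
  assume l: "is_glb P y z x"
  show "is_glb Q (h y) (h z) (h x)" unfolding is_glb_def
  proof (intro conjI ballI impI)
    show "h x \<in> carrier Q" using h_carrier assms by blast
    show "(h x, h y) \<in> ord Q" "(h x, h z) \<in> ord Q" using l ho assms unfolding is_glb_def by blast+
    fix w assume w: "w \<in> carrier Q" "(w, h y) \<in> ord Q \<and> (w, h z) \<in> ord Q"
    then obtain w' where w': "w' \<in> carrier P" "w = h w'" using h_surj by blast
    then have "(w',y) \<in> ord P" "(w',z) \<in> ord P" using w ho assms by blast+
    then have "(w',x) \<in> ord P" using l w' unfolding is_glb_def by blast
    then show "(w, h x) \<in> ord Q" using ho w' assms by blast
  qed
next
  assume l: "is_glb Q (h y) (h z) (h x)"
  show "is_glb P y z x" unfolding is_glb_def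
  proof (intro conjI ballI impI)
    show "x \<in> carrier P" using assms by blast
    show "(x, y) \<in> ord P" "(x, z) \<in> ord P" using l ho assms unfolding is_glb_def by blast+
    fix w assume w: "w \<in> carrier P" "(w, y) \<in> ord P \<and> (w, z) \<in> ord P"
    then have "(h w, h y) \<in> ord Q" "(h w, h z) \<in> ord Q" using ho assms by blast+
    then have "(h w, h x) \<in> ord Q" using l h_carrier w unfolding is_glb_def by blast
    then show "(w, x) \<in> ord P" using ho w assms by blast
  qed
qed

lemma reducible_iff:
  assumes x: "x \<in> carrier P"
  shows "reducible P x \<longleftrightarrow> reducible Q (h x)"
proof
  assume "reducible P x"
  then obtain y z where yz: "y \<in> carrier P" "z \<in> carrier P" "y \<noteq> x" "z \<noteq> x" "is_lub P y z x \<or> is_glb P y z x"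
    unfolding reducible_def by blast
  then have "h y \<noteq> h x" "h z \<noteq> h x" using h_eq_iff x by auto
  moreover have "is_lub Q (h y) (h z) (h x) \<or> is_glb Q (h y) (h z) (h x)"
    using yz lub_iff glb_iff x by blast
  ultimately show "reducible Q (h x)" unfolding reducible_def using h_carrier x yz by blast
next
  assume "reducible Q (h x)"
  then obtain y' z' where yz: "y' \<in> carrier Q" "z' \<in> carrier Q" "y' \<noteq> h x" "z' \<noteq> h x"
    "is_lub Q y' z' (h x) \<or> is_glb Q y' z' (h x)"
    unfolding reducible_def by blast
  obtain y where y: "y \<in> carrier P" "y' = h y" using h_surj yz by blast
  obtain z where z: "z \<in> carrier P" "z' = h z" using h_surj yz by blast
  have "y \<noteq> x" "z \<noteq> x" using yz y z by auto
  moreover have "is_lub P y z x \<or> is_glb P y z x" using yz y z lub_iff glb_iff x by blast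
  ultimately show "reducible P x" unfolding reducible_def using x y z by blast
qed

lemma covers_iff:
  assumes "a \<in> carrier P" "x \<in> carrier P"
  shows "covers P a x \<longleftrightarrow> covers Q (h a) (h x)"
proof
  assume c: "covers P a x"
  show "covers Q (h a) (h x)" unfolding covers_def
  proof (intro conjI)
    show "(h a, h x) \<in> ord Q" using c ho assms unfolding covers_def by blast
    show "h a \<noteq> h x" using c h_eq_iff assms unfolding covers_def by blast
    show "\<not>(\<exists>z. (h a, z) \<in> ord Q \<and> (z, h x) \<in> ord Q \<and> z \<noteq> h a \<and> z \<noteq> h x)"
    proof
      assume "\<exists>z. (h a, z) \<in> ord Q \<and> (z, h x) \<in> ord Q \<and> z \<noteq> h a \<and> z \<noteq> h x"
      then obtain z where z: "(h a, z) \<in> ord Q" "(z, h x) \<in> ord Q" "z \<noteq> h a" "z \<noteq> h x"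
        by blast
      then obtain z' where z': "z' \<in> carrier P" "z = h z'" using h_surj ord_Q_carrier by blast
      then have "(a,z') \<in> ord P" "(z',x) \<in> ord P" "z' \<noteq> a" "z' \<noteq> x"
        using z ho assms by auto
      then show False using c unfolding covers_def by blast
    qed
  qed
next
  assume c: "covers Q (h a) (h x)"
  show "covers P a x" unfolding covers_def
  proof (intro conjI)
    show "(a, x) \<in> ord P" using c ho assms unfolding covers_def by blast
    show "a \<noteq> x" using c unfolding covers_def by blast
    show "\<not>(\<exists>z. (a, z) \<in> ord P \<and> (z, x) \<in> ord P \<and> z \<noteq> a \<and> z \<noteq> x)"
    proof
      assume "\<exists>z. (a, z) \<in> ord P \<and> (z, x) \<in> ord P \<and> z \<noteq> a \<and> z \<noteq> x"
      then obtain z where z: "(a, z) \<in> ord P" "(z, x) \<in> ord P" "z \<noteq> a" "z \<noteq> x" by blast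
      then have zC: "z \<in> carrier P" using ord_P_carrier by blast
      then have "(h a, h z) \<in> ord Q" "(h z, h x) \<in> ord Q" "h z \<noteq> h a" "h z \<noteq> h x"
        using z ho assms h_eq_iff by auto
      then show False using c unfolding covers_def by blast
    qed
  qed
qed

lemma red_rank_iff: assumes a: "a \<in> carrier P" shows "red_rank P a = red_rank Q (h a)"
proof -
  have "{r'\<in>carrier Q. reducible Q r' \<and> (r', h a) \<in> ord Q} = h ` {r\<in>carrier P. reducible P r \<and> (r,a) \<in> ord P}"
  proof
    show "{r'\<in>carrier Q. reducible Q r' \<and> (r', h a) \<in> ord Q} \<subseteq> h ` {r\<in>carrier P. reducible P r \<and> (r,a) \<in> ord P}"
    proof clarify
      fix r' assume r': "r' \<in> carrier Q" "reducible Q r'" "(r', h a) \<in> ord Q"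
      then obtain r where r: "r \<in> carrier P" "r' = h r" using h_surj by blast
      then show "r' \<in> h ` {r\<in>carrier P. reducible P r \<and> (r,a) \<in> ord P}"
        using r' reducible_iff ho a by auto
    qed
    show "h ` {r\<in>carrier P. reducible P r \<and> (r,a) \<in> ord P} \<subseteq> {r'\<in>carrier Q. reducible Q r' \<and> (r', h a) \<in> ord Q}"
      using reducible_iff ho a h_carrier by auto
  qed
  moreover have "inj_on h {r\<in>carrier P. reducible P r \<and> (r,a) \<in> ord P}"
    using hb by (auto simp: bij_betw_def inj_on_def)
  ultimately show ?thesis unfolding red_rank_def by (simp add: card_image)
qed

lemma irreducible_pairs_subset: "irreducible_pairs P \<subseteq> irreducible_pairs Q"
proof
  fix e assume "e \<in> irreducible_pairs P"
  then obtain a x b where e: "e = (red_rank P a, red_rank P b)" "x \<in> carrier P" "\<not> reducible P x" "covers P a x" "covers P x b"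
    unfolding irreducible_pairs_def by blast
  have ab: "a \<in> carrier P" "b \<in> carrier P" using e ord_P_carrier unfolding covers_def by blast+
  have "h x \<in> carrier Q" "\<not> reducible Q (h x)" "covers Q (h a) (h x)" "covers Q (h x) (h b)"
    using e ab h_carrier reducible_iff covers_iff by auto
  moreover have "e = (red_rank Q (h a), red_rank Q (h b))" using e ab red_rank_iff by auto
  ultimately show "e \<in> irreducible_pairs Q" unfolding irreducible_pairs_def by blast
qed

end

lemma poset_iso_irreducible_pairs:
  assumes "poset_iso P Q" "finite_poset P" "finite_poset Q"
  shows "irreducible_pairs P = irreducible_pairs Q"
proof -
  have "irreducible_pairs P \<subseteq> irreducible_pairs Q" if a: "poset_iso P Q" "finite_poset P" "finite_poset Q" for P Q
  proof -
    obtain h where "bij_betw h (carrier P) (carrier Q)"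
      "\<forall>x\<in>carrier P. \<forall>y\<in>carrier P. (x,y) \<in> ord P \<longleftrightarrow> (h x, h y) \<in> ord Q"
      using a(1) unfolding poset_iso_def by blast
    then interpret poset_isomorphism P Q h using a by unfold_locales
    show ?thesis by (rule irreducible_pairs_subset)
  qed
  then show ?thesis using assms poset_iso_sym by blast
qed

definition graph_of :: "poset \<Rightarrow> nat set set" where
  "graph_of L = (\<lambda>(i,j). {i,j}) ` irreducible_pairs L"

lemma fundamental_block_of_FBB:
  assumes L: "L \<in> FBB n l" and n: "n \<ge> 1"
  shows "\<exists>C0 xs. fundamental_block L C0 xs"
proof -
  have fb: "fundamental_basic_block L" "num_reducible L = n" using L by (auto simp: FBB_def)
  then obtain C0 xs where r: "adjunct_representation L C0 xs" "distinct (map (\<lambda>(a,b,C). (a,b)) xs)"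
    by (auto simp: fundamental_basic_block_def)
  have lat: "finite_lattice L" and rc: "\<forall>x y. reducible L x \<and> reducible L y \<longrightarrow> comparable L x y"
    and bb: "basic_block L"
    using fb by (auto simp: fundamental_basic_block_def RC_lattice_def)
  interpret fin_lattice L using lat by (rule fin_lattice_of)
  have c2: "card (carrier L) \<ge> 2"
  proof -
    have "card {x \<in> carrier L. reducible L x} \<ge> 1" using fb n by (simp add: num_reducible_def)
    then obtain x where x: "x \<in> carrier L" "reducible L x"
      by (metis (no_types, lifting) Collect_empty_eq card.empty not_one_le_zero)
    then obtain y where y: "y \<in> carrier L" "y \<noteq> x" unfolding reducible_def by blast
    have "{x,y} \<subseteq> carrier L" using x y by auto
    then have "card {x,y} \<le> card (carrier L)" using fin card_mono by blast
    then show ?thesis using y by simp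
  qed
  have "fundamental_block L C0 xs" by (unfold_locales) (use rc bb c2 r in auto)
  then show ?thesis by blast
qed

context fundamental_block
begin

lemma graph_of_in_D: assumes l: "nullity P = int l" shows "graph_of P \<in> D_graphs nred l"
proof -
  have E: "irreducible_pairs P = irr_labels" by (rule irreducible_pairs_eq)
  have bd: "\<forall>e\<in>irr_labels. 1 \<le> fst e \<and> fst e < snd e \<and> snd e \<le> nred"
    using irr_labels_bounds by blast
  have inj: "inj_on (\<lambda>(i,j). {i,j}) irr_labels" using bd by (intro inj_on_doubleton) blast
  have "card (graph_of P) = card irr_labels" unfolding graph_of_def E using card_image[OF inj] .
  also have "\<dots> = l" using nullity_eq_card_labels l by simp
  finally have c: "card (graph_of P) = l" .
  have s: "graph_of P \<subseteq> {{i,j} | i j. 1 \<le> i \<and> i < j \<and> j \<le> nred}"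
  proof
    fix S assume "S \<in> graph_of P"
    then obtain a b where ab: "(a,b) \<in> irr_labels" "S = {a,b}" unfolding graph_of_def E by auto
    then have "1 \<le> a" "a < b" "b \<le> nred" using bd[rule_format, OF ab(1)] by auto
    then show "S \<in> {{i,j} | i j. 1 \<le> i \<and> i < j \<and> j \<le> nred}" using ab by blast
  qed
  have cov: "\<forall>v\<in>{1..nred}. \<exists>e\<in>graph_of P. v \<in> e"
  proof
    fix v assume "v \<in> {1..nred}"
    then obtain e where e: "e \<in> irr_labels" "fst e = v \<or> snd e = v" using rank_in_label by blast
    obtain a b where ab: "e = (a,b)" by (cases e)
    have m1: "{a,b} \<in> graph_of P" unfolding graph_of_def E using e(1) ab by force
    have m2: "v \<in> {a,b}" using e ab by auto
    show "\<exists>e\<in>graph_of P. v \<in> e" using m1 m2 by blast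
  qed
  show ?thesis unfolding D_graphs_def using c s cov by blast
qed

lemma poset_iso_graph_lattice:
  assumes l: "nullity P = int l"
  shows "poset_iso P (graph_lattice nred (graph_of P))"
proof -
  let ?G = "graph_of P"
  have GD: "?G \<in> D_graphs nred l" using graph_of_in_D[OF l] .
  interpret C: graph_construction nred l ?G using GD nred_pos by unfold_locales
  have edge_pairs: "edge_pairs ?G = irr_labels"
    unfolding graph_of_def irreducible_pairs_eq using edge_pairs_image irr_labels_bounds by simp
  show ?thesis
  proof (rule poset_iso_by_labels[where lP = rank_label and lQ = "\<lambda>y. (lo y, hi y)"])
    show "finite (carrier P)" using fin .
    show "finite (carrier (graph_lattice nred ?G))" using C.finite_interval_carrier C.L_eq by simp
    show "\<forall>x\<in>carrier P. \<forall>y\<in>carrier P. (x,y) \<in> ord P \<longleftrightarrow> x = y \<or> snd (rank_label x) \<le> fst (rank_label y)"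
      using leq_iff_labels by blast
    show "\<forall>x\<in>carrier (graph_lattice nred ?G). \<forall>y\<in>carrier (graph_lattice nred ?G). (x,y) \<in> ord (graph_lattice nred ?G) \<longleftrightarrow>
       x = y \<or> snd (lo x, hi x) \<le> fst (lo y, hi y)"
      using C.L_eq by (simp add: interval_order_def)
    show "\<forall>v. card {x\<in>carrier P. rank_label x = v} = card {y\<in>carrier (graph_lattice nred ?G). (lo y, hi y) = v}"
      using card_rank_label_fibre C.card_interval_fibre C.L_eq edge_pairs by simp
  qed
qed

end

lemma FBB_finite_lattice: "L \<in> FBB n l \<Longrightarrow> finite_lattice L"
  by (auto simp: FBB_def fundamental_basic_block_def RC_lattice_def)

lemma FBB_finite_poset: "L \<in> FBB n l \<Longrightarrow> finite_poset L"
  using FBB_finite_lattice by (auto simp: finite_lattice_def)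

definition one_point :: poset where "one_point = ({0}, {(0,0)})"

lemma one_point_chain: "is_chain one_point" unfolding one_point_def by (rule is_chain_singleton)

lemma one_point_irreducible: "\<not> reducible one_point x" unfolding reducible_def one_point_def by auto

lemma one_point_FBB: "one_point \<in> FBB 0 0"
proof -
  have lat: "finite_lattice one_point" using one_point_chain by (simp add: is_chain_def)
  have rc: "RC_lattice one_point" unfolding RC_lattice_def using lat one_point_irreducible by blast
  have bb: "basic_block one_point" unfolding basic_block_def one_point_def by simp
  have mc: "maximal_chain one_point (carrier one_point)"
    unfolding maximal_chain_def one_point_def comparable_def by auto
  have rep: "adjunct_representation one_point one_point []" unfolding adjunct_representation_def
    using one_point_chain mc by simp
  have "\<exists>C0 xs. adjunct_representation one_point C0 xs \<and> distinct (map (\<lambda>(a,b,C). (a,b)) xs)"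
    using rep by (intro exI[of _ one_point] exI[of _ "[] :: (nat \<times> nat \<times> poset) list"]) simp
  then have fb: "fundamental_basic_block one_point" unfolding fundamental_basic_block_def using rc bb by blast
  have nr: "num_reducible one_point = 0" unfolding num_reducible_def using one_point_irreducible by simp
  interpret fl: fin_lattice one_point using lat by (rule fin_lattice_of)
  have E: "cover_edges one_point = {}" unfolding cover_edges_def covers_def one_point_def by auto
  have "nullity one_point = 0" using fl.nullity_eq E by (simp add: one_point_def)
  then show ?thesis unfolding FBB_def using fb nr by simp
qed

lemma card_carrier_FBB_0:
  assumes L: "L \<in> FBB 0 l" shows "card (carrier L) = 1"
proof (rule ccontr)
  assume "card (carrier L) \<noteq> 1"
  interpret fin_lattice L using FBB_finite_lattice[OF L] by (rule fin_lattice_of)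
  have fb: "fundamental_basic_block L" "num_reducible L = 0" using L by (auto simp: FBB_def)
  have "card V \<noteq> 0" using nonempty fin by simp
  then have "card V \<ge> 2" using \<open>card V \<noteq> 1\<close> by linarith
  then interpret rc_basic_block L
    using fb by unfold_locales (auto simp: fundamental_basic_block_def RC_lattice_def)
  obtain b where b: "b \<in> V" "\<forall>x\<in>V. leq b x" using bot_ex by blast
  then have "b \<in> Red" using bot_reducible by blast
  then show False using fb finite_Red by (auto simp: num_reducible_def)
qed

lemma bij_betw_iso_classes:
  assumes iff: "\<And>L M. L \<in> F \<Longrightarrow> M \<in> F \<Longrightarrow> \<phi> L = \<phi> M \<longleftrightarrow> poset_iso L M"
    and img: "\<phi> ` F = D"
  shows "bij_betw (\<lambda>X. \<phi> (SOME L. L \<in> X)) ((\<lambda>L. {M \<in> F. poset_iso L M}) ` F) D"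
proof -
  let ?cls = "\<lambda>L. {M \<in> F. poset_iso L M}"
  have rep: "\<phi> (SOME M. M \<in> ?cls L) = \<phi> L" if L: "L \<in> F" for L
  proof -
    have "L \<in> ?cls L" using L poset_iso_refl by simp
    then have "(SOME M. M \<in> ?cls L) \<in> ?cls L" by (rule someI)
    then show ?thesis using iff L by (metis (no_types, lifting) mem_Collect_eq)
  qed
  have cls_eq: "?cls L = ?cls M" if "L \<in> F" "M \<in> F" "poset_iso L M" for L M
    using that poset_iso_sym poset_iso_trans by blast
  show ?thesis unfolding bij_betw_def
  proof
    show "inj_on (\<lambda>X. \<phi> (SOME L. L \<in> X)) (?cls ` F)"
    proof (rule inj_onI)
      fix X Y assume XY: "X \<in> ?cls ` F" "Y \<in> ?cls ` F" "\<phi> (SOME L. L \<in> X) = \<phi> (SOME L. L \<in> Y)"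
      then obtain L M where LM: "L \<in> F" "M \<in> F" "X = ?cls L" "Y = ?cls M" by blast
      then have "\<phi> L = \<phi> M" using XY(3) rep by simp
      then show "X = Y" using iff cls_eq LM by blast
    qed
    show "(\<lambda>X. \<phi> (SOME L. L \<in> X)) ` ?cls ` F = D"
      using img rep by (auto simp: image_image)
  qed
qed

lemma graph_lattice_FBB:
  assumes G: "G \<in> D_graphs n l" and n: "n \<ge> 1"
  shows "graph_lattice n G \<in> FBB n (int l)" "graph_of (graph_lattice n G) = G"
proof -
  interpret graph_construction n l G using G n by unfold_locales
  show "graph_lattice n G \<in> FBB n (int l)" by (rule L_in_FBB)
  show "graph_of (graph_lattice n G) = G"
    unfolding graph_of_def irreducible_pairs_L using G_eq_image by simp
qed

lemma FBB_graph_of: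
  assumes L: "L \<in> FBB n (int l)" and n: "n \<ge> 1"
  shows "graph_of L \<in> D_graphs n l" "poset_iso L (graph_lattice n (graph_of L))"
proof -
  obtain C0 xs where "fundamental_block L C0 xs" using fundamental_block_of_FBB[OF L n] by blast
  then interpret fundamental_block L C0 xs .
  have "nred = n" "nullity L = int l" using L by (auto simp: FBB_def num_reducible_def)
  then show "graph_of L \<in> D_graphs n l" "poset_iso L (graph_lattice n (graph_of L))"
    using graph_of_in_D poset_iso_graph_lattice by metis+
qed

lemma FBB_0:
  assumes L: "L \<in> FBB 0 l"
  shows "l = 0" "poset_iso L one_point" "graph_of L = {}"
proof -
  interpret fin_lattice L using FBB_finite_lattice[OF L] by (rule fin_lattice_of)
  obtain k where k: "carrier L = {k}" using card_carrier_FBB_0[OF L] by (auto simp: card_1_singleton_iff)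
  then have ord: "ord L = {(k,k)}" using ord_sub refl[of k] by auto
  have no_covers: "\<not> covers L x y" for x y using coversD[of x y] k by auto
  then have "cover_edges L = {}" by (simp add: cover_edges_def)
  moreover have "nullity L = l" using L by (simp add: FBB_def)
  ultimately show "l = 0" using nullity_eq k by simp
  show "graph_of L = {}" using no_covers by (simp add: graph_of_def irreducible_pairs_def)
  show "poset_iso L one_point" unfolding poset_iso_def
    using k ord by (intro exI[of _ "\<lambda>_. 0"]) (auto simp: one_point_def bij_betw_def)
qed

lemma D_graphs_0: "D_graphs 0 l = (if l = 0 then {{}} else {})"
  unfolding D_graphs_def by auto

lemma graph_of_eq_iff_iso:
  assumes "L \<in> FBB n (int l)" "M \<in> FBB n (int l)"
  shows "graph_of L = graph_of M \<longleftrightarrow> poset_iso L M"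
proof
  assume "poset_iso L M"
  then show "graph_of L = graph_of M"
    unfolding graph_of_def using poset_iso_irreducible_pairs assms FBB_finite_poset by metis
next
  assume eq: "graph_of L = graph_of M"
  show "poset_iso L M"
  proof (cases "n = 0")
    case True
    then show ?thesis using FBB_0 assms poset_iso_sym poset_iso_trans by metis
  next
    case False
    then show ?thesis using FBB_graph_of(2) assms eq poset_iso_sym poset_iso_trans
      by (metis One_nat_def Suc_leI neq0_conv)
  qed
qed

lemma graph_of_image_FBB: "graph_of ` FBB n (int l) = D_graphs n l"
proof (cases "n = 0")
  case True
  show ?thesis
  proof (cases "l = 0")
    case True
    have "graph_of ` FBB 0 0 = {{}}" using one_point_FBB FBB_0(3) by blast
    then show ?thesis using \<open>n = 0\<close> True D_graphs_0 by simp
  next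
    case False
    then have "FBB 0 (int l) = {}" using FBB_0(1)[of _ "int l"] by auto
    then show ?thesis using \<open>n = 0\<close> False D_graphs_0 by simp
  qed
next
  case False
  then have n: "n \<ge> 1" by simp
  show ?thesis
  proof
    show "graph_of ` FBB n (int l) \<subseteq> D_graphs n l" using FBB_graph_of(1)[OF _ n] by blast
    show "D_graphs n l \<subseteq> graph_of ` FBB n (int l)" using graph_lattice_FBB[OF _ n] by force
  qed
qed

theorem mainTheorem15:
  fixes n l :: nat
  assumes "(n + 1) div 2 \<le> l" and "l \<le> n choose 2"
  shows "(\<exists>g. bij_betw g (F_classes n (int l)) (D_graphs n l)) \<and> f n (int l) = d n l"
proof -
  have "bij_betw (\<lambda>X. graph_of (SOME L. L \<in> X)) (F_classes n (int l)) (D_graphs n l)"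
    unfolding F_classes_def
    using bij_betw_iso_classes[OF graph_of_eq_iff_iso graph_of_image_FBB] .
  then show ?thesis unfolding f_def d_def using bij_betw_same_card by blast
qed

end
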